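(* Let $V$ be a complex vector space of finite dimension $N$, $n\ge2$. Let $F$ be a skew-invertible involutive symmetry on $V\otimes V$ and $R$ a braiding compatible with $F$ which is either an involutive symmetry (rational case) or a Hecke symmetry with parameter $q$ (trigonometric case). Put $$R(u,v)=R-\frac{I}{u-v},\quad f(u,v)=1-\frac{1}{u-v}\qquad\text{(rational case)},$$ $$R(u,v)=R-\frac{(q-q^{-1})u\,I}{u-v},\quad f(u,v)=q-\frac{(q-q^{-1})u}{u-v}\qquad\text{(trigonometric case)},$$ and $\mathcal{R}(u,v)=R(u,v)\,F\,f(u,v)^{-1}$ (as rational functions of $u,v$). Let $g$ be a numerical $N\times N$ matrix with $g_{\overline i}g_{\overline j}=g_{\overline j}g_{\overline i}$ and $[R_{\overline{ij}},g_{\overline i}g_{\overline j}]=0$ for all distinct $i,j$. Fix a nontrivial $p\in\mathbb{C}$ and let $T_i$ be the shift operator on functions $\Psi(u_1,\dots,u_n)$ with values in $V^{\otimes n}$: $T_i\Psi(\dots,u_i,\dots)=\Psi(\dots,u_i+p,\dots)$ in the rational case and $T_i\Psi(\dots,u_i,\dots)=\Psi(\dots,p\,u_i,\dots)$ in the trigonometric case. Define $$\mathcal{R}_{i\downarrow}=\mathcal{R}_{\overline{i\,i-1}}(u_i,u_{i-1})\cdots\mathcal{R}_{\overline{i\,1}}(u_i,u_1),\qquad \mathcal{R}_{i\uparrow}=\mathcal{R}_{\overline{i\,n}}(u_i,u_n)\cdots\mathcal{R}_{\overline{i\,i+1}}(u_i,u_{i+1}),$$ $\Delta_i=\mathcal{R}_{i\downarrow}\,T_i^{-1}g_{\overline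 i}\,\mathcal{R}_{i\uparrow}$ and $\mathcal{M}_i=T_i\Delta_i$ (operators on such functions, matrix-valued functions acting by multiplication). Then for all $i,j$ the holonomy condition $$T_i\mathcal{M}_jT_i^{-1}\mathcal{M}_i=T_j\mathcal{M}_iT_j^{-1}\mathcal{M}_j$$ holds, equivalently $\Delta_i\Delta_j=\Delta_j\Delta_i$; i.e. the system $\Psi(u_1,\dots,T_i u_i,\dots,u_n)=\kappa\,\mathcal{M}_i\Psi(u_1,\dots,u_n)$, $i=1,\dots,n$ ($\kappa\ne0$), is compatible.
   Context: A braiding is an invertible $R\in\mathrm{End}(V\otimes V)$ with $(R\otimes I)(I\otimes R)(R\otimes I)=(I\otimes R)(R\otimes I)(I\otimes R)$; involutive symmetry: $R^2=I$; Hecke symmetry: $(R-qI)(R+q^{-1}I)=0$, $q\ne\pm1$. $F$ is skew-invertible if there is $\Psi^F$ with $\mathrm{Tr}_{(2)}F_{12}\Psi^F_{23}=\mathrm{Tr}_{(2)}\Psi^F_{12}F_{23}=P_{13}$ ($P$ the flip). Compatibility: $R_{12}F_{23}F_{12}=F_{23}F_{12}R_{23}$ and $R_{23}F_{12}F_{23}=F_{12}F_{23}R_{12}$, where $X_{k,k+1}$ is $X$ acting on factors $k,k+1$ of $V^{\otimes n}$. Overlined indices: $g_{\overline 1}=g\otimes I\otimes\cdots\otimes I$, $g_{\overline{k+1}}=F_{k,k+1}g_{\overline k}F_{k,k+1}^{-1}$; for $X\in\mathrm{End}(V\otimes V)$ (possibly depending on parameters, which are kept fixed) and $k<l$, $X_{\overline{kl}}=(F_{k-1,k}\cdots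 F_{12})(F_{l-1,l}\cdots F_{23})X_{12}(F_{23}^{-1}\cdots F_{l-1,l}^{-1})(F_{12}^{-1}\cdots F_{k-1,k}^{-1})$, and $X_{\overline{lk}}:=(FXF)_{\overline{kl}}$. Thus $\mathcal{R}_{\overline{ij}}(u_i,u_j)$ is $\mathcal{R}(u_i,u_j)$ placed at positions $i,j$ in this way, and $R_{\overline{ij}}$ is the constant braiding $R$ so placed. *)

theory Defs
  imports Complex_Main
begin

text \<open>The basis of V^{\<otimes>n} is indexed by lists of length n with entries < N.
  Factor k (1-based) of a basis tensor xs is xs!(k-1).
  An operator is given by its matrix entries (row index, column index).
  All equalities of operators are only required on the genuine index set.\<close>

type_synonym op = "nat list \<Rightarrow> nat list \<Rightarrow> complex"

definition tidx :: "nat \<Rightarrow> nat \<Rightarrow> nat list set" where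
  "tidx N n = {xs. length xs = n \<and> (\<forall>x\<in>set xs. x < N)}"

definition opmul :: "nat \<Rightarrow> nat \<Rightarrow> op \<Rightarrow> op \<Rightarrow> op" where
  "opmul N n A B = (\<lambda>xs ys. \<Sum>zs\<in>tidx N n. A xs zs * B zs ys)"

definition opid :: op where
  "opid = (\<lambda>xs ys. if xs = ys then 1 else 0)"

definition opadd :: "op \<Rightarrow> op \<Rightarrow> op" where
  "opadd A B = (\<lambda>xs ys. A xs ys + B xs ys)"

definition opscale :: "complex \<Rightarrow> op \<Rightarrow> op" where
  "opscale c A = (\<lambda>xs ys. c * A xs ys)"

definition opzero :: op where
  "opzero = (\<lambda>xs ys. 0)"

definition opeq :: "nat \<Rightarrow> nat \<Rightarrow> op \<Rightarrow> op \<Rightarrow> bool" where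
  "opeq N n A B \<longleftrightarrow> (\<forall>xs\<in>tidx N n. \<forall>ys\<in>tidx N n. A xs ys = B xs ys)"

definition opprod :: "nat \<Rightarrow> nat \<Rightarrow> op list \<Rightarrow> op" where
  "opprod N n As = foldr (opmul N n) As opid"

text \<open>X in End(V\<otimes>V) placed at factors k, k+1 (1-based), i.e. X_{k,k+1}.\<close>
definition place2 :: "nat \<Rightarrow> op \<Rightarrow> op" where
  "place2 k X = (\<lambda>xs ys.
     if length xs = length ys \<and> (\<forall>m<length xs. m \<noteq> k - 1 \<and> m \<noteq> k \<longrightarrow> xs!m = ys!m)
     then X [xs!(k-1), xs!k] [ys!(k-1), ys!k] else 0)"

definition place1 :: "(nat \<Rightarrow> nat \<Rightarrow> complex) \<Rightarrow> op" where
  "place1 g = (\<lambda>xs ys.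
     if length xs = length ys \<and> (\<forall>m<length xs. m \<noteq> 0 \<longrightarrow> xs!m = ys!m)
     then g (xs!0) (ys!0) else 0)"

definition braiding :: "nat \<Rightarrow> op \<Rightarrow> bool" where
  "braiding N R \<longleftrightarrow>
     (\<exists>Ri. opeq N 2 (opmul N 2 R Ri) opid \<and> opeq N 2 (opmul N 2 Ri R) opid) \<and>
     opeq N 3 (opmul N 3 (place2 1 R) (opmul N 3 (place2 2 R) (place2 1 R)))
              (opmul N 3 (place2 2 R) (opmul N 3 (place2 1 R) (place2 2 R)))"

definition involutive_symmetry :: "nat \<Rightarrow> op \<Rightarrow> bool" where
  "involutive_symmetry N R \<longleftrightarrow> braiding N R \<and> opeq N 2 (opmul N 2 R R) opid"

definition hecke_symmetry :: "nat \<Rightarrow> complex \<Rightarrow> op \<Rightarrow> bool" where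
  "hecke_symmetry N q R \<longleftrightarrow> braiding N R \<and> q \<noteq> 0 \<and> q \<noteq> 1 \<and> q \<noteq> -1 \<and>
     opeq N 2 (opmul N 2 (opadd R (opscale (-q) opid)) (opadd R (opscale (inverse q) opid))) opzero"

text \<open>Partial trace over the middle factor of an operator on V^{\<otimes>3}, giving an operator on V\<otimes>V
  (factors 1 and 3).\<close>
definition trace2 :: "nat \<Rightarrow> op \<Rightarrow> op" where
  "trace2 N A = (\<lambda>xs ys. \<Sum>b<N. A [xs!0, b, xs!1] [ys!0, b, ys!1])"

text \<open>The flip P (here P_{13} viewed on the remaining factors 1,3).\<close>
definition flip :: op where
  "flip = (\<lambda>xs ys. if xs!0 = ys!1 \<and> xs!1 = ys!0 then 1 else 0)"

definition skew_invertible :: "nat \<Rightarrow> op \<Rightarrow> bool" where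
  "skew_invertible N F \<longleftrightarrow> (\<exists>Psi.
     opeq N 2 (trace2 N (opmul N 3 (place2 1 F) (place2 2 Psi))) flip \<and>
     opeq N 2 (trace2 N (opmul N 3 (place2 1 Psi) (place2 2 F))) flip)"

definition compatible :: "nat \<Rightarrow> op \<Rightarrow> op \<Rightarrow> bool" where
  "compatible N R F \<longleftrightarrow>
     opeq N 3 (opprod N 3 [place2 1 R, place2 2 F, place2 1 F])
              (opprod N 3 [place2 2 F, place2 1 F, place2 2 R]) \<and>
     opeq N 3 (opprod N 3 [place2 2 R, place2 1 F, place2 2 F])
              (opprod N 3 [place2 1 F, place2 2 F, place2 1 R])"

section \<open>Overlined indices (F is involutive, so F^{-1} = F)\<close>

text \<open>gbar_r N n F g k is g_{\<overline>{k+1}}.\<close>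
fun gbar_r :: "nat \<Rightarrow> nat \<Rightarrow> op \<Rightarrow> (nat \<Rightarrow> nat \<Rightarrow> complex) \<Rightarrow> nat \<Rightarrow> op" where
  "gbar_r N n F g 0 = place1 g"
| "gbar_r N n F g (Suc k) =
     opprod N n [place2 (Suc k) F, gbar_r N n F g k, place2 (Suc k) F]"

definition gbar :: "nat \<Rightarrow> nat \<Rightarrow> op \<Rightarrow> (nat \<Rightarrow> nat \<Rightarrow> complex) \<Rightarrow> nat \<Rightarrow> op" where
  "gbar N n F g k = gbar_r N n F g (k - 1)"

definition Fdesc :: "nat \<Rightarrow> nat \<Rightarrow> op \<Rightarrow> nat \<Rightarrow> nat \<Rightarrow> op" where
  "Fdesc N n F a b = opprod N n (map (\<lambda>m. place2 m F) (rev [a..<b]))"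

definition Fasc :: "nat \<Rightarrow> nat \<Rightarrow> op \<Rightarrow> nat \<Rightarrow> nat \<Rightarrow> op" where
  "Fasc N n F a b = opprod N n (map (\<lambda>m. place2 m F) [a..<b])"

definition xbar_lt :: "nat \<Rightarrow> nat \<Rightarrow> op \<Rightarrow> nat \<Rightarrow> nat \<Rightarrow> op \<Rightarrow> op" where
  "xbar_lt N n F k l X = opprod N n
     [Fdesc N n F 1 k, Fdesc N n F 2 l, place2 1 X, Fasc N n F 2 l, Fasc N n F 1 k]"

definition xbar :: "nat \<Rightarrow> nat \<Rightarrow> op \<Rightarrow> nat \<Rightarrow> nat \<Rightarrow> op \<Rightarrow> op" where
  "xbar N n F k l X = (if k < l then xbar_lt N n F k l X
                       else xbar_lt N n F l k (opprod N 2 [F, X, F]))"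

section \<open>Spectral R-matrices; trig = False: rational case, trig = True: trigonometric case\<close>

definition Ruv :: "bool \<Rightarrow> complex \<Rightarrow> op \<Rightarrow> complex \<Rightarrow> complex \<Rightarrow> op" where
  "Ruv trig q R u v = (if trig then opadd R (opscale (- ((q - inverse q) * u / (u - v))) opid)
                       else opadd R (opscale (- (1 / (u - v))) opid))"

definition fuv :: "bool \<Rightarrow> complex \<Rightarrow> complex \<Rightarrow> complex \<Rightarrow> complex" where
  "fuv trig q u v = (if trig then q - (q - inverse q) * u / (u - v) else 1 - 1 / (u - v))"

definition calR :: "nat \<Rightarrow> bool \<Rightarrow> complex \<Rightarrow> op \<Rightarrow> op \<Rightarrow> complex \<Rightarrow> complex \<Rightarrow> op" where
  "calR N trig q R F u v = opscale (inverse (fuv trig q u v)) (opmul N 2 (Ruv trig q R u v) F)"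

text \<open>Spectral parameters u_1,...,u_n are u 1, ..., u n.\<close>
definition Rdown :: "nat \<Rightarrow> nat \<Rightarrow> bool \<Rightarrow> complex \<Rightarrow> op \<Rightarrow> op \<Rightarrow> nat \<Rightarrow> (nat \<Rightarrow> complex) \<Rightarrow> op" where
  "Rdown N n trig q R F i u = opprod N n
     (map (\<lambda>k. xbar N n F i k (calR N trig q R F (u i) (u k))) (rev [1..<i]))"

definition Rup :: "nat \<Rightarrow> nat \<Rightarrow> bool \<Rightarrow> complex \<Rightarrow> op \<Rightarrow> op \<Rightarrow> nat \<Rightarrow> (nat \<Rightarrow> complex) \<Rightarrow> op" where
  "Rup N n trig q R F i u = opprod N n
     (map (\<lambda>k. xbar N n F i k (calR N trig q R F (u i) (u k))) (rev [Suc i..<Suc n]))"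

type_synonym vfun = "(nat \<Rightarrow> complex) \<Rightarrow> nat list \<Rightarrow> complex"

definition opapp :: "nat \<Rightarrow> nat \<Rightarrow> op \<Rightarrow> (nat list \<Rightarrow> complex) \<Rightarrow> nat list \<Rightarrow> complex" where
  "opapp N n A v = (\<lambda>xs. \<Sum>ys\<in>tidx N n. A xs ys * v ys)"

definition mulop :: "nat \<Rightarrow> nat \<Rightarrow> ((nat \<Rightarrow> complex) \<Rightarrow> op) \<Rightarrow> vfun \<Rightarrow> vfun" where
  "mulop N n M Psi = (\<lambda>u. opapp N n (M u) (Psi u))"

definition shiftf :: "bool \<Rightarrow> complex \<Rightarrow> complex \<Rightarrow> complex" where
  "shiftf trig p z = (if trig then p * z else z + p)"

definition unshiftf :: "bool \<Rightarrow> complex \<Rightarrow> complex \<Rightarrow> complex" where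
  "unshiftf trig p z = (if trig then z / p else z - p)"

definition Tsh :: "bool \<Rightarrow> complex \<Rightarrow> nat \<Rightarrow> vfun \<Rightarrow> vfun" where
  "Tsh trig p i Psi = (\<lambda>u. Psi (u(i := shiftf trig p (u i))))"

definition Tinv :: "bool \<Rightarrow> complex \<Rightarrow> nat \<Rightarrow> vfun \<Rightarrow> vfun" where
  "Tinv trig p i Psi = (\<lambda>u. Psi (u(i := unshiftf trig p (u i))))"

definition Delta :: "nat \<Rightarrow> nat \<Rightarrow> bool \<Rightarrow> complex \<Rightarrow> complex \<Rightarrow> op \<Rightarrow> op
                      \<Rightarrow> (nat \<Rightarrow> nat \<Rightarrow> complex) \<Rightarrow> nat \<Rightarrow> vfun \<Rightarrow> vfun" where
  "Delta N n trig q p R F g i Psi =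
     mulop N n (Rdown N n trig q R F i)
       (Tinv trig p i (mulop N n (\<lambda>_. gbar N n F g i) (mulop N n (Rup N n trig q R F i) Psi)))"

definition Mop :: "nat \<Rightarrow> nat \<Rightarrow> bool \<Rightarrow> complex \<Rightarrow> complex \<Rightarrow> op \<Rightarrow> op
                      \<Rightarrow> (nat \<Rightarrow> nat \<Rightarrow> complex) \<Rightarrow> nat \<Rightarrow> vfun \<Rightarrow> vfun" where
  "Mop N n trig q p R F g i Psi = Tsh trig p i (Delta N n trig q p R F g i Psi)"

text \<open>Generic spectral parameters: all denominators (u_a - u_b and the zeros of f) that can occur
  at the points u shifted by at most two steps are nonzero.  Identities of rational functions are
  asserted at all such points.\<close>
definition generic :: "nat \<Rightarrow> bool \<Rightarrow> complex \<Rightarrow> complex \<Rightarrow> (nat \<Rightarrow> complex) \<Rightarrow> bool" where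
  "generic n trig q p u \<longleftrightarrow> (\<forall>a\<in>{1..n}. \<forall>b\<in>{1..n}. a \<noteq> b \<longrightarrow> (\<forall>m::int. \<bar>m\<bar> \<le> 2 \<longrightarrow>
     (if trig then p powi m * u a \<noteq> u b \<and> p powi m * u a \<noteq> q^2 * u b
      else u a - u b + of_int m * p \<noteq> 0 \<and> u a - u b + of_int m * p \<noteq> 1)))"

end

theory Submission
  imports Defs "HOL-Combinatorics.Transposition"
begin

(* All overlined operators are conjugates of operators on the first factors by products of the
   F_{k,k+1}, which satisfy the relations of the symmetric group, and conjugation by F_{k,k+1}
   permutes the indices of an overlined operator by the transposition of k and k + 1.  Hence
   the Yang-Baxter relation, unitarity and the commutations with the g_{\<overline>i}, which at the
   first positions follow from the braid and Hecke relations of R, its compatibility with F and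
   the hypotheses on g, hold at all positions.  Using these relations, both \<Delta>_i \<Delta>_j and
   \<Delta>_j \<Delta>_i reduce to the same normal form, and M_i = T_i \<Delta>_i turns the holonomy condition
   into an instance of \<Delta>_i \<Delta>_j = \<Delta>_j \<Delta>_i at shifted spectral parameters.  Operators are
   compared after restriction to the genuine index set, where they form a monoid. *)

section \<open>Operators restricted to the index set of V^{\<otimes>n}\<close>

definition restr :: "nat \<Rightarrow> nat \<Rightarrow> op \<Rightarrow> op" where
  "restr N n A = (\<lambda>xs ys. if xs \<in> tidx N n \<and> ys \<in> tidx N n then A xs ys else 0)"

definition rmul :: "nat \<Rightarrow> nat \<Rightarrow> op \<Rightarrow> op \<Rightarrow> op" where
  "rmul N n A B = restr N n (opmul N n A B)"

definition rone :: "nat \<Rightarrow> nat \<Rightarrow> op" where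
  "rone N n = restr N n opid"

lemma finite_tidx[simp]: "finite (tidx N n)"
proof -
  have "tidx N n \<subseteq> {xs. set xs \<subseteq> {..<N} \<and> length xs = n}"
    by (auto simp: tidx_def)
  moreover have "finite {xs. set xs \<subseteq> {..<N} \<and> length xs = n}"
    by (rule finite_lists_length_eq) simp
  ultimately show ?thesis by (rule finite_subset)
qed

lemma opeq_iff_restr: "opeq N n A B \<longleftrightarrow> restr N n A = restr N n B"
  by (auto simp: opeq_def restr_def fun_eq_iff)

lemma restr_outside: "\<not> (xs \<in> tidx N n \<and> ys \<in> tidx N n) \<Longrightarrow> restr N n A xs ys = 0"
  by (auto simp: restr_def)

lemma restr_inside: "xs \<in> tidx N n \<Longrightarrow> ys \<in> tidx N n \<Longrightarrow> restr N n A xs ys = A xs ys"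
  by (simp add: restr_def)

lemma restr_restr[simp]: "restr N n (restr N n A) = restr N n A"
  by (auto simp: restr_def fun_eq_iff)

lemma opmul_restr_left: "xs \<in> tidx N n \<Longrightarrow> opmul N n (restr N n A) B xs ys = opmul N n A B xs ys"
  unfolding opmul_def restr_def by (intro sum.cong) auto

lemma opmul_restr_right: "ys \<in> tidx N n \<Longrightarrow> opmul N n A (restr N n B) xs ys = opmul N n A B xs ys"
  unfolding opmul_def restr_def by (intro sum.cong) auto

lemma rmul_restr_left[simp]: "rmul N n (restr N n A) B = rmul N n A B"
  unfolding rmul_def
  by (rule ext, rule ext, simp add: restr_def[of N n "opmul N n (restr N n A) B"]
        restr_def[of N n "opmul N n A B"] opmul_restr_left)

lemma rmul_restr_right[simp]: "rmul N n A (restr N n B) = rmul N n A B"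
  unfolding rmul_def
  by (rule ext, rule ext, simp add: restr_def[of N n "opmul N n A (restr N n B)"]
        restr_def[of N n "opmul N n A B"] opmul_restr_right)

lemma restr_rmul[simp]: "restr N n (rmul N n A B) = rmul N n A B"
  by (simp add: rmul_def)

lemma opmul_assoc: "opmul N n (opmul N n A B) C = opmul N n A (opmul N n B C)"
proof -
  have "\<And>xs ys. (\<Sum>zs\<in>tidx N n. (\<Sum>ws\<in>tidx N n. A xs ws * B ws zs) * C zs ys)
     = (\<Sum>ws\<in>tidx N n. A xs ws * (\<Sum>zs\<in>tidx N n. B ws zs * C zs ys))"
  proof -
    fix xs ys
    have "(\<Sum>zs\<in>tidx N n. (\<Sum>ws\<in>tidx N n. A xs ws * B ws zs) * C zs ys)
        = (\<Sum>zs\<in>tidx N n. \<Sum>ws\<in>tidx N n. A xs ws * B ws zs * C zs ys)"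
      by (simp add: sum_distrib_right)
    also have "\<dots> = (\<Sum>ws\<in>tidx N n. \<Sum>zs\<in>tidx N n. A xs ws * B ws zs * C zs ys)"
      by (rule sum.swap)
    also have "\<dots> = (\<Sum>ws\<in>tidx N n. A xs ws * (\<Sum>zs\<in>tidx N n. B ws zs * C zs ys))"
      by (simp add: sum_distrib_left mult.assoc)
    finally show "?thesis xs ys" .
  qed
  then show ?thesis by (simp add: opmul_def fun_eq_iff)
qed

lemma rmul_assoc: "rmul N n (rmul N n A B) C = rmul N n A (rmul N n B C)"
  unfolding rmul_def
  by (metis rmul_def rmul_restr_left rmul_restr_right opmul_assoc)

lemma opmul_opid_left: "xs \<in> tidx N n \<Longrightarrow> opmul N n opid B xs ys = B xs ys"
proof -
  assume xs: "xs \<in> tidx N n"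
  have "opmul N n opid B xs ys = (\<Sum>zs\<in>tidx N n. if xs = zs then B zs ys else 0)"
    unfolding opmul_def by (rule sum.cong) (auto simp: opid_def)
  also have "\<dots> = B xs ys" using xs by (simp add: sum.delta)
  finally show ?thesis .
qed

lemma opmul_opid_right: "ys \<in> tidx N n \<Longrightarrow> opmul N n A opid xs ys = A xs ys"
proof -
  assume ys: "ys \<in> tidx N n"
  have "opmul N n A opid xs ys = (\<Sum>zs\<in>tidx N n. if zs = ys then A xs zs else 0)"
    unfolding opmul_def by (rule sum.cong) (auto simp: opid_def)
  also have "\<dots> = A xs ys" using ys by (simp add: sum.delta')
  finally show ?thesis .
qed

lemma rmul_rone_left[simp]: "rmul N n (rone N n) A = restr N n A"
  unfolding rone_def rmul_restr_left
  by (rule ext, rule ext, simp add: rmul_def restr_def[of N n "opmul N n opid A"] opmul_opid_left restr_def[of N n A])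

lemma rmul_rone_right[simp]: "rmul N n A (rone N n) = restr N n A"
  unfolding rone_def rmul_restr_right
  by (rule ext, rule ext, simp add: rmul_def restr_def[of N n "opmul N n A opid"] opmul_opid_right restr_def[of N n A])

lemma restr_rone[simp]: "restr N n (rone N n) = rone N n"
  by (simp add: rone_def)

lemma restr_opmul: "restr N n (opmul N n A B) = rmul N n A B"
  by (simp add: rmul_def)

lemma restr_opprod: "restr N n (opprod N n L) = foldr (rmul N n) (map (restr N n) L) (rone N n)"
proof (induction L)
  case Nil then show ?case by (simp add: opprod_def rone_def)
next
  case (Cons A L)
  have "restr N n (opprod N n (A # L)) = rmul N n A (opprod N n L)"
    by (simp add: opprod_def rmul_def)
  also have "\<dots> = rmul N n (restr N n A) (restr N n (opprod N n L))" by simp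
  finally show ?case using Cons by simp
qed

lemma restr_opadd: "restr N n (opadd A B) = opadd (restr N n A) (restr N n B)"
  by (auto simp: restr_def opadd_def fun_eq_iff)

lemma restr_opscale: "restr N n (opscale c A) = opscale c (restr N n A)"
  by (auto simp: restr_def opscale_def fun_eq_iff)

lemma rmul_opadd_left: "rmul N n (opadd A B) C = opadd (rmul N n A C) (rmul N n B C)"
  by (auto simp: rmul_def restr_def opmul_def opadd_def fun_eq_iff distrib_right sum.distrib)

lemma rmul_opadd_right: "rmul N n A (opadd B C) = opadd (rmul N n A B) (rmul N n A C)"
  by (auto simp: rmul_def restr_def opmul_def opadd_def fun_eq_iff distrib_left sum.distrib)

lemma rmul_opscale_left: "rmul N n (opscale c A) B = opscale c (rmul N n A B)"
  by (auto simp: rmul_def restr_def opmul_def opscale_def fun_eq_iff sum_distrib_left mult.assoc)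

lemma rmul_opscale_right: "rmul N n A (opscale c B) = opscale c (rmul N n A B)"
  by (auto simp: rmul_def restr_def opmul_def opscale_def fun_eq_iff sum_distrib_left mult_ac)

section \<open>Operators acting on consecutive factors\<close>

definition agree_outside :: "nat \<Rightarrow> nat \<Rightarrow> nat \<Rightarrow> nat list \<Rightarrow> nat list \<Rightarrow> bool" where
  "agree_outside n k m xs ys \<longleftrightarrow> (\<forall>t<n. (t < k \<or> k + m \<le> t) \<longrightarrow> xs!t = ys!t)"

definition slice :: "nat \<Rightarrow> nat \<Rightarrow> nat list \<Rightarrow> nat list" where
  "slice k m xs = take m (drop k xs)"

definition embed :: "nat \<Rightarrow> nat \<Rightarrow> nat \<Rightarrow> op \<Rightarrow> op" where
  "embed n k m A = (\<lambda>xs ys. if length xs = n \<and> length ys = n \<and> agree_outside n k m xs ys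
                     then A (slice k m xs) (slice k m ys) else 0)"

lemma agree_outside_sym: "agree_outside n k m xs ys = agree_outside n k m ys xs"
  by (auto simp: agree_outside_def)

lemma agree_outside_trans: "agree_outside n k m xs ys \<Longrightarrow> agree_outside n k m ys zs \<Longrightarrow> agree_outside n k m xs zs"
  by (auto simp: agree_outside_def)

lemma slice_tidx: "xs \<in> tidx N n \<Longrightarrow> k + m \<le> n \<Longrightarrow> slice k m xs \<in> tidx N m"
  by (auto simp: tidx_def slice_def dest: in_set_takeD in_set_dropD)

lemma agree_outside_iff_take_drop:
  assumes "length xs = n" "length zs = n" "k + m \<le> n"
  shows "agree_outside n k m xs zs \<longleftrightarrow> take k xs = take k zs \<and> drop (k+m) xs = drop (k+m) zs"
proof
  assume a: "agree_outside n k m xs zs"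
  show "take k xs = take k zs \<and> drop (k+m) xs = drop (k+m) zs"
  proof
    show "take k xs = take k zs"
      using a assms by (intro nth_equalityI) (auto simp: agree_outside_def)
    show "drop (k+m) xs = drop (k+m) zs"
      using a assms by (intro nth_equalityI) (auto simp: agree_outside_def)
  qed
next
  assume b: "take k xs = take k zs \<and> drop (k+m) xs = drop (k+m) zs"
  show "agree_outside n k m xs zs"
    unfolding agree_outside_def
  proof (intro allI impI)
    fix t assume t: "t < n" "t < k \<or> k + m \<le> t"
    show "xs!t = zs!t"
    proof (cases "t < k")
      case True
      then show ?thesis using b by (metis nth_take)
    next
      case False
      then have "k + m \<le> t" using t by simp
      then have "drop (k+m) xs ! (t - (k+m)) = drop (k+m) zs ! (t - (k+m))" using b by simp
      then show ?thesis using \<open>k+m \<le> t\<close> assms t by simp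
    qed
  qed
qed

lemma sum_tidx_fibre:
  fixes f :: "nat list \<Rightarrow> complex"
  assumes km: "k + m \<le> n" and xs: "xs \<in> tidx N n"
    and zero: "\<And>zs. zs \<in> tidx N n \<Longrightarrow> \<not> agree_outside n k m xs zs \<Longrightarrow> f zs = 0"
  shows "(\<Sum>zs\<in>tidx N n. f zs) = (\<Sum>w\<in>tidx N m. f (take k xs @ w @ drop (k+m) xs))"
proof -
  define h where "h w = take k xs @ w @ drop (k+m) xs" for w
  have lx: "length xs = n" using xs by (simp add: tidx_def)
  have hin: "h w \<in> tidx N n" if "w \<in> tidx N m" for w
    using that xs km by (auto simp: h_def tidx_def dest: in_set_takeD in_set_dropD)
  have hag: "agree_outside n k m xs (h w)" if "w \<in> tidx N m" for w
    using that xs km lx by (subst agree_outside_iff_take_drop) (auto simp: h_def tidx_def)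
  have inj: "inj_on h (tidx N m)"
    by (auto simp: inj_on_def h_def tidx_def)
  have img: "h ` tidx N m = {zs \<in> tidx N n. agree_outside n k m xs zs}"
  proof
    show "h ` tidx N m \<subseteq> {zs \<in> tidx N n. agree_outside n k m xs zs}" using hin hag by auto
    show "{zs \<in> tidx N n. agree_outside n k m xs zs} \<subseteq> h ` tidx N m"
    proof
      fix zs assume z: "zs \<in> {zs \<in> tidx N n. agree_outside n k m xs zs}"
      then have lz: "length zs = n" by (simp add: tidx_def)
      have td: "take k xs = take k zs \<and> drop (k+m) xs = drop (k+m) zs"
        using z lx lz km agree_outside_iff_take_drop by blast
      have "zs = take k zs @ take m (drop k zs) @ drop (k+m) zs"
        by (metis append_take_drop_id drop_drop add.commute)
      then have "zs = h (take m (drop k zs))" using td by (simp add: h_def)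
      moreover have "take m (drop k zs) \<in> tidx N m"
        using z km by (auto simp: tidx_def dest: in_set_takeD in_set_dropD)
      ultimately show "zs \<in> h ` tidx N m" by blast
    qed
  qed
  have "(\<Sum>zs\<in>{zs \<in> tidx N n. agree_outside n k m xs zs}. f zs) = (\<Sum>zs\<in>tidx N n. f zs)"
    by (rule sum.mono_neutral_left) (use zero in auto)
  then have "(\<Sum>zs\<in>tidx N n. f zs) = (\<Sum>zs\<in>{zs \<in> tidx N n. agree_outside n k m xs zs}. f zs)" ..
  also have "\<dots> = (\<Sum>zs\<in>h ` tidx N m. f zs)" by (simp add: img)
  also have "\<dots> = (\<Sum>w\<in>tidx N m. f (h w))" by (rule sum.reindex[OF inj, unfolded comp_def])
  finally show ?thesis by (simp add: h_def)
qed

lemma slice_splice: "length xs = n \<Longrightarrow> k + m \<le> n \<Longrightarrow> length w = m \<Longrightarrow>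
   slice k m (take k xs @ w @ drop (k+m) xs) = w"
  by (simp add: slice_def)

lemma rmul_embed:
  assumes km: "k + m \<le> n"
  shows "rmul N n (embed n k m A) (embed n k m B) = restr N n (embed n k m (opmul N m A B))"
proof (rule ext, rule ext)
  fix xs ys
  show "rmul N n (embed n k m A) (embed n k m B) xs ys = restr N n (embed n k m (opmul N m A B)) xs ys"
  proof (cases "xs \<in> tidx N n \<and> ys \<in> tidx N n")
    case False then show ?thesis by (simp add: rmul_def restr_outside)
  next
    case True
    then have xs: "xs \<in> tidx N n" and ys: "ys \<in> tidx N n" by auto
    have lx: "length xs = n" and ly: "length ys = n" using xs ys by (auto simp: tidx_def)
    have "rmul N n (embed n k m A) (embed n k m B) xs ys
        = (\<Sum>zs\<in>tidx N n. embed n k m A xs zs * embed n k m B zs ys)"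
      using True by (simp add: rmul_def restr_def opmul_def)
    also have "\<dots> = (\<Sum>w\<in>tidx N m. embed n k m A xs (take k xs @ w @ drop (k+m) xs)
                          * embed n k m B (take k xs @ w @ drop (k+m) xs) ys)"
      by (rule sum_tidx_fibre[OF km xs]) (simp add: embed_def)
    also have "\<dots> = embed n k m (opmul N m A B) xs ys"
    proof (cases "agree_outside n k m xs ys")
      case True
      have "\<And>w. w \<in> tidx N m \<Longrightarrow> agree_outside n k m xs (take k xs @ w @ drop (k+m) xs)"
        using km lx by (subst agree_outside_iff_take_drop) (auto simp: tidx_def)
      moreover have "\<And>w. w \<in> tidx N m \<Longrightarrow> agree_outside n k m (take k xs @ w @ drop (k+m) xs) ys"
        using agree_outside_trans agree_outside_sym True calculation by blast
      ultimately show ?thesis using True lx ly km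
        by (auto simp: embed_def opmul_def slice_splice tidx_def intro!: sum.cong)
    next
      case False
      have contra: "\<And>w. agree_outside n k m xs (take k xs @ w @ drop (k+m) xs) \<Longrightarrow>
                 agree_outside n k m (take k xs @ w @ drop (k+m) xs) ys \<Longrightarrow> False"
        using False agree_outside_trans by blast
      have "\<And>w. embed n k m A xs (take k xs @ w @ drop (k+m) xs)
                          * embed n k m B (take k xs @ w @ drop (k+m) xs) ys = 0"
        unfolding embed_def using contra by auto
      then have "(\<Sum>w\<in>tidx N m. embed n k m A xs (take k xs @ w @ drop (k+m) xs)
                          * embed n k m B (take k xs @ w @ drop (k+m) xs) ys) = 0"
        by (simp only: sum.neutral_const)
      then show ?thesis using False by (simp add: embed_def)
    qed
    finally show ?thesis using True by (simp add: restr_def)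
  qed
qed

lemma nth_slice: "i < m \<Longrightarrow> k + m \<le> length xs \<Longrightarrow> slice k m xs ! i = xs ! (k + i)"
  by (simp add: slice_def)

lemma length_slice: "k + m \<le> length xs \<Longrightarrow> length (slice k m xs) = m"
  by (simp add: slice_def)

lemma slice_eqI: "k + m \<le> length xs \<Longrightarrow> k + m \<le> length ys \<Longrightarrow>
   (\<And>i. i < m \<Longrightarrow> xs ! (k+i) = ys ! (k+i)) \<Longrightarrow> slice k m xs = slice k m ys"
  by (rule nth_equalityI) (auto simp: length_slice nth_slice)

lemma sum_eq_single:
  assumes "finite S" "z \<in> S" "\<And>x. x \<in> S \<Longrightarrow> x \<noteq> z \<Longrightarrow> f x = 0"
  shows "sum f S = f z"
proof -
  have "sum f S = f z + sum f (S - {z})" using assms by (simp add: sum.remove)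
  also have "sum f (S - {z}) = 0" using assms by (intro sum.neutral) auto
  finally show ?thesis by simp
qed

text \<open>For disjoint blocks of factors the only index list that contributes to the product sum is
  the one agreeing with ys on the first block and with xs elsewhere.\<close>

lemma opmul_embed_disjoint:
  assumes disj: "k + m \<le> k' \<or> k' + m' \<le> k" and range: "k + m \<le> n" "k' + m' \<le> n"
    and xs: "xs \<in> tidx N n" and ys: "ys \<in> tidx N n"
  shows "opmul N n (embed n k m A) (embed n k' m' B) xs ys
       = (if \<forall>t<n. (t < k \<or> k + m \<le> t) \<and> (t < k' \<or> k' + m' \<le> t) \<longrightarrow> xs!t = ys!t
          then A (slice k m xs) (slice k m ys) * B (slice k' m' xs) (slice k' m' ys) else 0)"
proof -
  have lx: "length xs = n" and ly: "length ys = n" using xs ys by (auto simp: tidx_def)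
  define z where "z = map (\<lambda>t. if k \<le> t \<and> t < k + m then ys!t else xs!t) [0..<n]"
  have lz: "length z = n" and zn: "\<And>t. t < n \<Longrightarrow> z!t = (if k \<le> t \<and> t < k + m then ys!t else xs!t)"
    by (simp_all add: z_def)
  have z: "z \<in> tidx N n"
    using xs ys lx ly by (auto simp: tidx_def z_def in_set_conv_nth intro!: nth_mem)
  have "opmul N n (embed n k m A) (embed n k' m' B) xs ys = embed n k m A xs z * embed n k' m' B z ys"
    unfolding opmul_def
  proof (rule sum_eq_single[OF finite_tidx z])
    fix zs assume zs: "zs \<in> tidx N n" "zs \<noteq> z"
    show "embed n k m A xs zs * embed n k' m' B zs ys = 0"
    proof (rule ccontr)
      assume "embed n k m A xs zs * embed n k' m' B zs ys \<noteq> 0"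
      then have "agree_outside n k m xs zs" "agree_outside n k' m' zs ys" "length zs = n"
        by (auto simp: embed_def split: if_splits)
      then have "zs = z" using disj lz zn by (intro nth_equalityI) (auto simp: agree_outside_def)
      with zs show False by simp
    qed
  qed
  moreover have "slice k m z = slice k m ys" "slice k' m' z = slice k' m' xs"
    using lz ly lx range disj zn by (auto intro!: slice_eqI)
  moreover have "agree_outside n k m xs z"
    "agree_outside n k' m' z ys \<longleftrightarrow> (\<forall>t<n. (t < k \<or> k + m \<le> t) \<and> (t < k' \<or> k' + m' \<le> t) \<longrightarrow> xs!t = ys!t)"
    using disj zn by (auto simp: agree_outside_def)
  ultimately show ?thesis using lx ly lz by (auto simp: embed_def)
qed

lemma rmul_embed_disjoint_commute:
  assumes "k + m \<le> k'" "k' + m' \<le> n"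
  shows "rmul N n (embed n k m A) (embed n k' m' B) = rmul N n (embed n k' m' B) (embed n k m A)"
  using assms opmul_embed_disjoint[of k m k' m' n] opmul_embed_disjoint[of k' m' k m n]
  by (auto simp: rmul_def restr_def fun_eq_iff mult.commute conj_commute)

lemma restr_embed_opeq:
  assumes "k + m \<le> n" "opeq N m A B"
  shows "restr N n (embed n k m A) = restr N n (embed n k m B)"
proof (rule ext, rule ext)
  fix xs ys
  show "restr N n (embed n k m A) xs ys = restr N n (embed n k m B) xs ys"
  proof (cases "xs \<in> tidx N n \<and> ys \<in> tidx N n")
    case False then show ?thesis by (simp add: restr_outside)
  next
    case True
    then have "slice k m xs \<in> tidx N m" "slice k m ys \<in> tidx N m"
      using slice_tidx assms(1) by blast+
    then have "A (slice k m xs) (slice k m ys) = B (slice k m xs) (slice k m ys)"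
      using assms(2) by (simp add: opeq_def)
    then show ?thesis using True by (simp add: restr_inside embed_def)
  qed
qed

lemma restr_embed_opid:
  assumes km: "k + m \<le> n"
  shows "restr N n (embed n k m opid) = rone N n"
proof (rule ext, rule ext)
  fix xs ys
  show "restr N n (embed n k m opid) xs ys = rone N n xs ys"
  proof (cases "xs \<in> tidx N n \<and> ys \<in> tidx N n")
    case False then show ?thesis by (simp add: rone_def restr_outside)
  next
    case True
    then have lx: "length xs = n" and ly: "length ys = n" by (auto simp: tidx_def)
    have "(agree_outside n k m xs ys \<and> slice k m xs = slice k m ys) = (xs = ys)"
    proof
      assume a: "agree_outside n k m xs ys \<and> slice k m xs = slice k m ys"
      show "xs = ys"
      proof (rule nth_equalityI)
        show "length xs = length ys" using lx ly by simp
        fix t assume "t < length xs"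
        then have t: "t < n" using lx by simp
        show "xs ! t = ys ! t"
        proof (cases "t < k \<or> k + m \<le> t")
          case True then show ?thesis using a t by (auto simp: agree_outside_def)
        next
          case False
          then have "slice k m xs ! (t - k) = slice k m ys ! (t - k)" using a by simp
          moreover have "slice k m xs ! (t - k) = xs ! t" using False km lx by (subst nth_slice) auto
          moreover have "slice k m ys ! (t - k) = ys ! t" using False km ly by (subst nth_slice) auto
          ultimately show ?thesis by simp
        qed
      qed
    qed (simp add: agree_outside_def)
    then show ?thesis using True lx ly by (auto simp: restr_inside rone_def embed_def opid_def)
  qed
qed

lemma slice_two: "k + 2 \<le> length xs \<Longrightarrow> slice k 2 xs = [xs!k, xs!(k+1)]"
proof -
  assume a: "k + 2 \<le> length xs"
  have "drop k xs = xs!k # xs!(k+1) # drop (k+2) xs"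
    using a by (metis Cons_nth_drop_Suc add_2_eq_Suc' add_Suc_right add_lessD1 lessI
        less_le_trans Suc_eq_plus1)
  then show ?thesis by (simp add: slice_def)
qed

lemma all_less_three: "(\<forall>m<(3::nat). P m) \<longleftrightarrow> P 0 \<and> P 1 \<and> P 2"
  by (auto simp: numeral_3_eq_3 numeral_2_eq_2 less_Suc_eq)

lemma agree_outside_three_left: "j + 3 \<le> n \<Longrightarrow> agree_outside n j 3 xs ys \<and> xs!(j+2) = ys!(j+2) \<longleftrightarrow> agree_outside n j 2 xs ys"
proof
  assume "j + 3 \<le> n" "agree_outside n j 3 xs ys \<and> xs!(j+2) = ys!(j+2)"
  then have a: "agree_outside n j 3 xs ys \<and> xs!(j+2) = ys!(j+2)" by simp
  show "agree_outside n j 2 xs ys" unfolding agree_outside_def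
  proof (intro allI impI)
    fix t assume "t < n" "t < j \<or> j + 2 \<le> t"
    then show "xs!t = ys!t" using a by (cases "t = j+2") (auto simp: agree_outside_def)
  qed
qed (auto simp: agree_outside_def)

lemma agree_outside_three_right: "j + 3 \<le> n \<Longrightarrow> agree_outside n j 3 xs ys \<and> xs!j = ys!j \<longleftrightarrow> agree_outside n (j+1) 2 xs ys"
proof
  assume "j + 3 \<le> n" "agree_outside n j 3 xs ys \<and> xs!j = ys!j"
  then have a: "agree_outside n j 3 xs ys \<and> xs!j = ys!j" by simp
  show "agree_outside n (j+1) 2 xs ys" unfolding agree_outside_def
  proof (intro allI impI)
    fix t assume "t < n" "t < j + 1 \<or> j + 1 + 2 \<le> t"
    then show "xs!t = ys!t" using a by (cases "t = j") (auto simp: agree_outside_def)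
  qed
qed (auto simp: agree_outside_def)

lemma restr_place2_embed:
  assumes "1 \<le> k" "k + 1 \<le> n"
  shows "restr N n (place2 k X) = restr N n (embed n (k-1) 2 X)"
proof (rule ext, rule ext)
  fix xs ys
  show "restr N n (place2 k X) xs ys = restr N n (embed n (k-1) 2 X) xs ys"
  proof (cases "xs \<in> tidx N n \<and> ys \<in> tidx N n")
    case False then show ?thesis by (simp add: restr_outside)
  next
    case True
    then have lx: "length xs = n" and ly: "length ys = n" by (auto simp: tidx_def)
    have c: "(\<forall>m<length xs. m \<noteq> k - 1 \<and> m \<noteq> k \<longrightarrow> xs!m = ys!m) = agree_outside n (k-1) 2 xs ys"
    proof -
      have "\<And>t. (t \<noteq> k-1 \<and> t \<noteq> k) = (t < k-1 \<or> k-1+2 \<le> t)" using assms by auto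
      then show ?thesis by (simp add: agree_outside_def lx)
    qed
    have m1: "slice (k-1) 2 xs = [xs!(k-1), xs!k]"
      using assms lx slice_two[of "k-1" xs] by simp
    have m2: "slice (k-1) 2 ys = [ys!(k-1), ys!k]"
      using assms ly slice_two[of "k-1" ys] by simp
    show ?thesis using True lx ly c m1 m2 by (simp add: restr_inside place2_def embed_def)
  qed
qed

lemma restr_place1_embed:
  assumes "1 \<le> n"
  shows "restr N n (place1 g) = restr N n (embed n 0 1 (\<lambda>a b. g (a!0) (b!0)))"
proof (rule ext, rule ext)
  fix xs ys
  show "restr N n (place1 g) xs ys = restr N n (embed n 0 1 (\<lambda>a b. g (a!0) (b!0))) xs ys"
  proof (cases "xs \<in> tidx N n \<and> ys \<in> tidx N n")
    case False then show ?thesis by (simp add: restr_outside)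
  next
    case True
    then have lx: "length xs = n" and ly: "length ys = n" by (auto simp: tidx_def)
    have c: "(\<forall>m<length xs. m \<noteq> 0 \<longrightarrow> xs!m = ys!m) = agree_outside n 0 1 xs ys"
      unfolding agree_outside_def using assms lx by auto
    have m1: "slice 0 1 xs ! 0 = xs ! 0" "slice 0 1 ys ! 0 = ys ! 0"
      using assms lx ly by (auto simp: nth_slice)
    show ?thesis using True lx ly c m1 by (simp add: restr_inside place1_def embed_def)
  qed
qed

lemma restr_embed3_place2:
  assumes jn: "j + 3 \<le> n" and l: "l = 1 \<or> l = 2"
  shows "restr N n (embed n j 3 (place2 l X)) = restr N n (embed n (j + l - 1) 2 X)"
proof (rule ext, rule ext)
  fix xs ys
  show "restr N n (embed n j 3 (place2 l X)) xs ys = restr N n (embed n (j + l - 1) 2 X) xs ys"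
  proof (cases "xs \<in> tidx N n \<and> ys \<in> tidx N n")
    case False then show ?thesis by (simp add: restr_outside)
  next
    case True
    then have lx: "length xs = n" and ly: "length ys = n" by (auto simp: tidx_def)
    have lm: "length (slice j 3 xs) = 3" "length (slice j 3 ys) = 3"
      using jn lx ly by (auto simp: length_slice)
    have c: "(agree_outside n j 3 xs ys \<and> (\<forall>m<3. m \<noteq> l - 1 \<and> m \<noteq> l \<longrightarrow> slice j 3 xs ! m = slice j 3 ys ! m))
           = agree_outside n (j + l - 1) 2 xs ys"
      using l
    proof
      assume l1: "l = 1"
      show ?thesis unfolding all_less_three using l1 jn lx ly agree_outside_three_left[OF jn, of xs ys]
        by (simp add: nth_slice)
    next
      assume l2: "l = 2"
      show ?thesis unfolding all_less_three using l2 jn lx ly agree_outside_three_right[OF jn, of xs ys]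
        by (simp add: nth_slice)
    qed
    have m1: "[slice j 3 xs ! (l-1), slice j 3 xs ! l] = slice (j + l - 1) 2 xs"
      using jn lx l slice_two[of "j+l-1" xs] by (auto simp: nth_slice)
    have m2: "[slice j 3 ys ! (l-1), slice j 3 ys ! l] = slice (j + l - 1) 2 ys"
      using jn ly l slice_two[of "j+l-1" ys] by (auto simp: nth_slice)
    have "embed n j 3 (place2 l X) xs ys = (if agree_outside n j 3 xs ys \<and> (\<forall>m<3. m \<noteq> l - 1 \<and> m \<noteq> l \<longrightarrow> slice j 3 xs ! m = slice j 3 ys ! m)
       then X [slice j 3 xs ! (l-1), slice j 3 xs ! l] [slice j 3 ys ! (l-1), slice j 3 ys ! l] else 0)"
      using lx ly lm by (auto simp: embed_def place2_def)
    also have "\<dots> = (if agree_outside n (j + l - 1) 2 xs ys then X (slice (j + l - 1) 2 xs) (slice (j + l - 1) 2 ys) else 0)"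
      by (simp only: c m1 m2)
    finally show ?thesis using True lx ly by (simp add: restr_inside embed_def)
  qed
qed

section \<open>Coxeter generators and overlined operators\<close>

abbreviation swap_adj :: "nat \<Rightarrow> nat \<Rightarrow> nat" where
  "swap_adj k \<equiv> Transposition.transpose k (Suc k)"

lemma swap_adj_range: "1 \<le> k \<Longrightarrow> k < n \<Longrightarrow> a \<in> {1..n} \<Longrightarrow> swap_adj k a \<in> {1..n}"
  by (auto simp: transpose_def)

lemma swap_adj_eq_iff: "swap_adj k a = swap_adj k b \<longleftrightarrow> a = b"
  by (auto simp: transpose_def)

text \<open>Products of arbitrary elements lie in the carrier M, as for the restricted product of
  operators below.\<close>

locale carrier_monoid =
  fixes mul :: "'a \<Rightarrow> 'a \<Rightarrow> 'a" (infixr "\<odot>" 70) and e :: 'a and M :: "'a set"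
  assumes closed[simp]: "x \<odot> y \<in> M" and e_closed[simp]: "e \<in> M"
    and assoc[simp]: "(x \<odot> y) \<odot> z = x \<odot> (y \<odot> z)"
    and lunit[simp]: "x \<in> M \<Longrightarrow> e \<odot> x = x" and runit[simp]: "x \<in> M \<Longrightarrow> x \<odot> e = x"
begin

definition mprod :: "'a list \<Rightarrow> 'a" where "mprod xs = foldr (\<odot>) xs e"

lemma mprod_closed[simp]: "mprod xs \<in> M"
  by (cases xs) (auto simp: mprod_def)

lemma mprod_Nil[simp]: "mprod [] = e" by (simp add: mprod_def)
lemma mprod_Cons[simp]: "mprod (x # xs) = x \<odot> mprod xs" by (simp add: mprod_def)

lemma mprod_append[simp]: "mprod (xs @ ys) = mprod xs \<odot> mprod ys"
  by (induction xs) auto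

lemma eq_mult_right: "p \<odot> q = r \<Longrightarrow> p \<odot> (q \<odot> z) = r \<odot> z"
  by (metis assoc)

lemma mult_right_cong: "x = y \<Longrightarrow> x \<odot> z = y \<odot> z"
  by simp

lemma eq2_mult_right: "p \<odot> q = r \<odot> t \<Longrightarrow> p \<odot> (q \<odot> z) = r \<odot> (t \<odot> z)"
  by (metis assoc)

lemma inverse_unique:
  assumes "p \<odot> q = e" "q' \<odot> p = e" "q \<in> M" "q' \<in> M"
  shows "q = q'"
proof -
  have "q = (q' \<odot> p) \<odot> q" using assms by simp
  also have "\<dots> = q' \<odot> (p \<odot> q)" by simp
  also have "\<dots> = q'" using assms by simp
  finally show ?thesis .
qed

lemma conj_by_factorization:
  assumes sk: "sk \<odot> sk = e" "sk \<in> M"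
    and W: "W \<odot> W' = e" "W' \<odot> W = e" "W \<in> M" "W' \<in> M"
    and W2: "W2 \<odot> W2' = e" "W2' \<odot> W2 = e" "W2 \<in> M" "W2' \<in> M"
    and u: "u \<odot> u = e" "u \<in> M"
    and eq: "sk \<odot> W = W2 \<odot> u"
  shows "sk \<odot> W \<odot> Y \<odot> W' \<odot> sk = W2 \<odot> (u \<odot> Y \<odot> u) \<odot> W2'"
proof -
  have i: "W' \<odot> sk = u \<odot> W2'"
  proof (rule inverse_unique[of "sk \<odot> W"])
    have "W \<odot> (W' \<odot> sk) = sk" using W sk by (metis assoc lunit)
    then show "(sk \<odot> W) \<odot> (W' \<odot> sk) = e" using sk by simp
    have "(u \<odot> W2') \<odot> (sk \<odot> W) = u \<odot> (W2' \<odot> (W2 \<odot> u))" using eq by simp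
    also have "W2' \<odot> (W2 \<odot> u) = u" using W2 u by (metis assoc lunit)
    finally show "(u \<odot> W2') \<odot> (sk \<odot> W) = e" using u by simp
  qed simp_all
  have "sk \<odot> W \<odot> Y \<odot> W' \<odot> sk = (sk \<odot> W) \<odot> Y \<odot> (W' \<odot> sk)" by simp
  also have "\<dots> = W2 \<odot> (u \<odot> Y \<odot> u) \<odot> W2'" using eq i by simp
  finally show ?thesis .
qed

end

locale coxeter_gens = carrier_monoid +
  fixes n :: nat and s :: "nat \<Rightarrow> 'a"
  assumes s_closed[simp]: "s k \<in> M"
    and s_inv: "1 \<le> k \<Longrightarrow> k < n \<Longrightarrow> s k \<odot> s k = e"
    and s_braid: "1 \<le> k \<Longrightarrow> k + 1 < n \<Longrightarrow> s k \<odot> s (k+1) \<odot> s k = s (k+1) \<odot> s k \<odot> s (k+1)"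
    and s_far: "1 \<le> k \<Longrightarrow> k + 1 < l \<Longrightarrow> l < n \<Longrightarrow> s k \<odot> s l = s l \<odot> s k"
begin

definition sdesc :: "nat \<Rightarrow> nat \<Rightarrow> 'a" where "sdesc a b = mprod (map s (rev [a..<b]))"
definition sasc :: "nat \<Rightarrow> nat \<Rightarrow> 'a" where "sasc a b = mprod (map s [a..<b])"

lemma sdesc_closed[simp]: "sdesc a b \<in> M" by (simp add: sdesc_def)
lemma sasc_closed[simp]: "sasc a b \<in> M" by (simp add: sasc_def)

lemma sdesc_empty: "b \<le> a \<Longrightarrow> sdesc a b = e" by (simp add: sdesc_def)
lemma sasc_empty: "b \<le> a \<Longrightarrow> sasc a b = e" by (simp add: sasc_def)

lemma sdesc_Suc: "a \<le> b \<Longrightarrow> sdesc a (Suc b) = s b \<odot> sdesc a b"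
  by (simp add: sdesc_def)

lemma sasc_Suc: "a \<le> b \<Longrightarrow> sasc a (Suc b) = sasc a b \<odot> s b"
  by (simp add: sasc_def)

lemma s_s_cancel: "1 \<le> k \<Longrightarrow> k < n \<Longrightarrow> x \<in> M \<Longrightarrow> s k \<odot> (s k \<odot> x) = x"
  using s_inv by (metis assoc lunit)

lemma sdesc_sasc: "1 \<le> a \<Longrightarrow> b \<le> n \<Longrightarrow> sdesc a b \<odot> sasc a b = e"
proof (induction b)
  case 0 then show ?case by (simp add: sdesc_empty sasc_empty)
next
  case (Suc b)
  show ?case
  proof (cases "a \<le> b")
    case True
    have "sdesc a (Suc b) \<odot> sasc a (Suc b) = s b \<odot> (sdesc a b \<odot> sasc a b) \<odot> s b"
      using True by (simp add: sdesc_Suc sasc_Suc)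
    also have "\<dots> = e" using Suc True by (simp add: s_inv)
    finally show ?thesis .
  next
    case False then show ?thesis by (simp add: sdesc_empty sasc_empty)
  qed
qed

lemma sasc_sdesc: "1 \<le> a \<Longrightarrow> b \<le> n \<Longrightarrow> sasc a b \<odot> sdesc a b = e"
proof (induction b)
  case 0 then show ?case by (simp add: sdesc_empty sasc_empty)
next
  case (Suc b)
  show ?case
  proof (cases "a \<le> b")
    case True
    have "sasc a (Suc b) \<odot> sdesc a (Suc b) = sasc a b \<odot> (s b \<odot> s b) \<odot> sdesc a b"
      using True by (simp add: sdesc_Suc sasc_Suc)
    also have "\<dots> = e" using Suc True by (simp add: s_inv)
    finally show ?thesis .
  next
    case False then show ?thesis by (simp add: sdesc_empty sasc_empty)
  qed
qed

lemma sdesc_sasc_cancel[simp]: "1 \<le> a \<Longrightarrow> b \<le> n \<Longrightarrow> z \<in> M \<Longrightarrow> sdesc a b \<odot> (sasc a b \<odot> z) = z"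
  using sdesc_sasc by (metis assoc lunit)

lemma sasc_sdesc_cancel[simp]: "1 \<le> a \<Longrightarrow> b \<le> n \<Longrightarrow> z \<in> M \<Longrightarrow> sasc a b \<odot> (sdesc a b \<odot> z) = z"
  using sasc_sdesc by (metis assoc lunit)

lemma s_sdesc_commute:
  assumes "1 \<le> k" "k < n" "1 \<le> a" "b \<le> n" "k + 2 \<le> a \<or> b + 1 \<le> k"
  shows "s k \<odot> sdesc a b = sdesc a b \<odot> s k"
  using assms
proof (induction b)
  case 0 then show ?case by (simp add: sdesc_empty)
next
  case (Suc b)
  show ?case
  proof (cases "a \<le> b")
    case True
    have far: "s k \<odot> s b = s b \<odot> s k"
    proof (cases "k < b")
      case True then show ?thesis using Suc \<open>a \<le> b\<close> by (intro s_far) auto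
    next
      case False then show ?thesis using Suc \<open>a \<le> b\<close> by (intro s_far[symmetric]) auto
    qed
    have "s k \<odot> sdesc a (Suc b) = (s k \<odot> s b) \<odot> sdesc a b" using True by (simp add: sdesc_Suc)
    also have "\<dots> = s b \<odot> (s k \<odot> sdesc a b)" using far by simp
    also have "\<dots> = s b \<odot> sdesc a b \<odot> s k"
    proof -
      have "s k \<odot> sdesc a b = sdesc a b \<odot> s k" using Suc.IH Suc.prems by auto
      then show ?thesis by simp
    qed
    finally show ?thesis using True by (simp add: sdesc_Suc)
  next
    case False then show ?thesis by (simp add: sdesc_empty)
  qed
qed

lemma s_sdesc_shift:
  assumes "1 \<le> a" "a \<le> k" "k + 1 < b" "b \<le> n"
  shows "s k \<odot> sdesc a b = sdesc a b \<odot> s (k+1)"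
  using assms
proof (induction b)
  case 0 then show ?case by simp
next
  case (Suc b)
  show ?case
  proof (cases "k + 1 < b")
    case True
    have far: "s k \<odot> s b = s b \<odot> s k" using Suc True by (intro s_far) auto
    have "s k \<odot> sdesc a (Suc b) = (s k \<odot> s b) \<odot> sdesc a b" using Suc by (simp add: sdesc_Suc)
    also have "\<dots> = s b \<odot> (s k \<odot> sdesc a b)" using far by simp
    also have "\<dots> = s b \<odot> sdesc a b \<odot> s (k+1)" using Suc True by simp
    finally show ?thesis using Suc by (simp add: sdesc_Suc)
  next
    case False
    then have b: "b = k + 1" using Suc by simp
    have e1: "sdesc a (Suc b) = s (k+1) \<odot> s k \<odot> sdesc a k"
      using b Suc by (simp add: sdesc_Suc)
    have c: "s (k+1) \<odot> sdesc a k = sdesc a k \<odot> s (k+1)"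
      using Suc b by (intro s_sdesc_commute) auto
    have "s k \<odot> sdesc a (Suc b) = (s k \<odot> s (k+1) \<odot> s k) \<odot> sdesc a k" using e1 by simp
    also have "\<dots> = (s (k+1) \<odot> s k \<odot> s (k+1)) \<odot> sdesc a k"
      using Suc b by (simp only: s_braid)
    also have "\<dots> = s (k+1) \<odot> s k \<odot> (s (k+1) \<odot> sdesc a k)" by simp
    also have "\<dots> = s (k+1) \<odot> s k \<odot> sdesc a k \<odot> s (k+1)" using c by simp
    finally show ?thesis using e1 by simp
  qed
qed

lemma s_sdesc_top: "1 \<le> a \<Longrightarrow> a < b \<Longrightarrow> b \<le> n \<Longrightarrow> s (b-1) \<odot> sdesc a b = sdesc a (b-1)"
proof -
  assume a: "1 \<le> a" "a < b" "b \<le> n"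
  then have "sdesc a b = s (b-1) \<odot> sdesc a (b-1)" using sdesc_Suc[of a "b-1"] by simp
  then show ?thesis using a by (simp add: s_s_cancel)
qed

lemma s_sdesc_extend: "a \<le> b \<Longrightarrow> s b \<odot> sdesc a b = sdesc a (b+1)"
  by (simp add: sdesc_Suc)

text \<open>With s k standing for F_{k,k+1} and X for an element acting on the first two factors,
  ovl a b X is X_{\<overline>{ab}}.\<close>

definition ovl_lt :: "nat \<Rightarrow> nat \<Rightarrow> 'a \<Rightarrow> 'a" where
  "ovl_lt a b X = sdesc 1 a \<odot> sdesc 2 b \<odot> X \<odot> sasc 2 b \<odot> sasc 1 a"

definition ovl :: "nat \<Rightarrow> nat \<Rightarrow> 'a \<Rightarrow> 'a" where
  "ovl a b X = (if a < b then ovl_lt a b X else ovl_lt b a (s 1 \<odot> X \<odot> s 1))"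

lemma ovl_lt_closed[simp]: "ovl_lt a b X \<in> M" by (simp add: ovl_lt_def)
lemma ovl_closed[simp]: "ovl a b X \<in> M" by (simp add: ovl_def)

lemma conj_ovl_lt_by_factorization:
  assumes k: "1 \<le> k" "k < n" and ab: "1 \<le> a" "a \<le> n" "b \<le> n"
    and ab2: "1 \<le> a2" "a2 \<le> n" "b2 \<le> n"
    and u: "u \<odot> u = e" "u \<in> M" and eq: "s k \<odot> (sdesc 1 a \<odot> sdesc 2 b) = (sdesc 1 a2 \<odot> sdesc 2 b2) \<odot> u"
  shows "s k \<odot> ovl_lt a b Y \<odot> s k = ovl_lt a2 b2 (u \<odot> Y \<odot> u)"
proof -
  have W: "(sdesc 1 a \<odot> sdesc 2 b) \<odot> (sasc 2 b \<odot> sasc 1 a) = e" "(sasc 2 b \<odot> sasc 1 a) \<odot> (sdesc 1 a \<odot> sdesc 2 b) = e"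
    using ab by (simp_all add: sdesc_sasc sasc_sdesc)
  have W2: "(sdesc 1 a2 \<odot> sdesc 2 b2) \<odot> (sasc 2 b2 \<odot> sasc 1 a2) = e" "(sasc 2 b2 \<odot> sasc 1 a2) \<odot> (sdesc 1 a2 \<odot> sdesc 2 b2) = e"
    using ab2 by (simp_all add: sdesc_sasc sasc_sdesc)
  have "s k \<odot> (sdesc 1 a \<odot> sdesc 2 b) \<odot> Y \<odot> (sasc 2 b \<odot> sasc 1 a) \<odot> s k
      = (sdesc 1 a2 \<odot> sdesc 2 b2) \<odot> (u \<odot> Y \<odot> u) \<odot> (sasc 2 b2 \<odot> sasc 1 a2)"
    by (rule conj_by_factorization[OF s_inv[OF k] s_closed W _ _ W2 _ _ u eq]) simp_all
  then show ?thesis by (simp add: ovl_lt_def)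
qed

lemma s_conj_commuting: "3 \<le> j \<Longrightarrow> j < n \<Longrightarrow> Y \<in> M \<Longrightarrow> s j \<odot> Y = Y \<odot> s j \<Longrightarrow> s j \<odot> Y \<odot> s j = Y"
proof -
  assume a: "3 \<le> j" "j < n" "Y \<in> M" "s j \<odot> Y = Y \<odot> s j"
  have "s j \<odot> Y \<odot> s j = Y \<odot> (s j \<odot> s j)" using eq_mult_right[OF a(4)[symmetric], of "s j"] by simp
  then show ?thesis using a s_inv by simp
qed

lemma s_sdesc_diagonal: "1 \<le> a \<Longrightarrow> a < n \<Longrightarrow> s a \<odot> (sdesc 1 a \<odot> sdesc 2 (a+1)) = (sdesc 1 a \<odot> sdesc 2 (a+1)) \<odot> s 1"
proof (induction a)
  case 0 then show ?case by simp
next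
  case (Suc a)
  show ?case
  proof (cases "a = 0")
    case True then show ?thesis by (simp add: sdesc_empty)
  next
    case False
    then have a1: "1 \<le> a" "a < n" using Suc by auto
    have IH: "s a \<odot> (sdesc 1 a \<odot> sdesc 2 (a+1)) = (sdesc 1 a \<odot> sdesc 2 (a+1)) \<odot> s 1"
      using Suc a1 by simp
    have c: "s (a+1) \<odot> sdesc 1 a = sdesc 1 a \<odot> s (a+1)"
      using a1 Suc by (intro s_sdesc_commute) auto
    have Q: "sdesc 1 (Suc a) \<odot> sdesc 2 (Suc a + 1) = s a \<odot> s (a+1) \<odot> (sdesc 1 a \<odot> sdesc 2 (a+1))"
    proof -
      have "sdesc 1 (Suc a) \<odot> sdesc 2 (Suc a + 1) = s a \<odot> (sdesc 1 a \<odot> s (a+1)) \<odot> sdesc 2 (a+1)"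
        using a1 by (simp add: sdesc_Suc)
      also have "\<dots> = s a \<odot> (s (a+1) \<odot> sdesc 1 a) \<odot> sdesc 2 (a+1)" using c by simp
      finally show ?thesis by simp
    qed
    have "s (Suc a) \<odot> (sdesc 1 (Suc a) \<odot> sdesc 2 (Suc a + 1))
        = (s (a+1) \<odot> s a \<odot> s (a+1)) \<odot> (sdesc 1 a \<odot> sdesc 2 (a+1))" using Q by simp
    also have "\<dots> = (s a \<odot> s (a+1) \<odot> s a) \<odot> (sdesc 1 a \<odot> sdesc 2 (a+1))"
      using a1 Suc by (simp only: s_braid)
    also have "\<dots> = s a \<odot> s (a+1) \<odot> (s a \<odot> (sdesc 1 a \<odot> sdesc 2 (a+1)))" by simp
    also have "\<dots> = s a \<odot> s (a+1) \<odot> ((sdesc 1 a \<odot> sdesc 2 (a+1)) \<odot> s 1)" using IH by simp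
    finally show ?thesis using Q by simp
  qed
qed

text \<open>Conjugating by s k either leaves the factors 1, 2 of X untouched (s k turns into a
  generator s j with j \<ge> 3, which commutes with X), or relabels the pair (a, b), or, when
  (a, b) = (k, k + 1), exchanges the first two factors of X.\<close>

lemma conj_ovl_lt_passing:
  assumes k: "1 \<le> k" "k < n" and ab: "1 \<le> a" "a < b" "b \<le> n"
    and far: "k + 1 < a \<or> a < k \<and> k + 1 < b \<or> b < k"
    and X: "X \<in> M" "\<And>j. 3 \<le> j \<Longrightarrow> j < n \<Longrightarrow> s j \<odot> X = X \<odot> s j"
  shows "s k \<odot> ovl_lt a b X \<odot> s k = ovl_lt a b X"
proof -
  obtain j where j: "3 \<le> j" "j < n" "s k \<odot> (sdesc 1 a \<odot> sdesc 2 b) = (sdesc 1 a \<odot> sdesc 2 b) \<odot> s j"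
  proof -
    consider "k + 1 < a" | "a < k" "k + 1 < b" | "b < k" using far by blast
    then show thesis
    proof cases
      case 1
      have c: "s k \<odot> sdesc 1 a = sdesc 1 a \<odot> s (k+1)" "s (k+1) \<odot> sdesc 2 b = sdesc 2 b \<odot> s (k+2)"
        using 1 k ab by (simp_all add: s_sdesc_shift)
      show thesis using c 1 k ab eq2_mult_right[OF c(1)] by (intro that[of "k+2"]) simp_all
    next
      case 2
      have c: "s k \<odot> sdesc 1 a = sdesc 1 a \<odot> s k" "s k \<odot> sdesc 2 b = sdesc 2 b \<odot> s (k+1)"
        using 2 k ab by (simp_all add: s_sdesc_commute s_sdesc_shift)
      show thesis using c 2 ab eq2_mult_right[OF c(1)] by (intro that[of "k+1"]) simp_all
    next
      case 3
      have c: "s k \<odot> sdesc 1 a = sdesc 1 a \<odot> s k" "s k \<odot> sdesc 2 b = sdesc 2 b \<odot> s k"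
        using 3 k ab by (simp_all add: s_sdesc_commute)
      show thesis using c 3 ab k eq2_mult_right[OF c(1)] by (intro that[of k]) simp_all
    qed
  qed
  then have "s k \<odot> ovl_lt a b X \<odot> s k = ovl_lt a b (s j \<odot> X \<odot> s j)"
    using k ab by (intro conj_ovl_lt_by_factorization) (simp_all add: s_inv)
  also have "s j \<odot> X \<odot> s j = X" using j X by (intro s_conj_commuting) auto
  finally show ?thesis .
qed

lemma conj_ovl_lt_moving:
  assumes k: "1 \<le> k" "k < n" and ab: "1 \<le> a" "a < b" "b \<le> n"
    and moving: "k + 1 = a \<or> k = a \<and> b \<noteq> a + 1 \<or> a < k \<and> k + 1 = b \<or> k = b" and "Y \<in> M"
  shows "s k \<odot> ovl_lt a b Y \<odot> s k = ovl_lt (swap_adj k a) (swap_adj k b) Y"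
proof -
  have "s k \<odot> (sdesc 1 a \<odot> sdesc 2 b) = (sdesc 1 (swap_adj k a) \<odot> sdesc 2 (swap_adj k b)) \<odot> e"
  proof -
    consider "k + 1 = a" | "k = a" "b \<noteq> a + 1" | "a < k" "k + 1 = b" | "k = b" using moving by blast
    then show ?thesis
    proof cases
      case 1
      then have c: "s k \<odot> sdesc 1 a = sdesc 1 k" using k ab s_sdesc_top[of 1 a] by (simp add: 1[symmetric])
      show ?thesis using 1 ab eq_mult_right[OF c] by (simp add: transpose_def)
    next
      case 2
      then have c: "s k \<odot> sdesc 1 a = sdesc 1 (Suc a)" using ab s_sdesc_extend[of 1 a] by simp
      show ?thesis using 2 ab eq_mult_right[OF c] by (simp add: transpose_def)
    next
      case 3
      then have c: "s k \<odot> sdesc 1 a = sdesc 1 a \<odot> s k" "s k \<odot> sdesc 2 b = sdesc 2 k"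
        using k ab s_sdesc_top[of 2 b] by (simp_all add: s_sdesc_commute flip: 3(2))
      show ?thesis using 3 c eq2_mult_right[OF c(1)] by (simp add: transpose_def)
    next
      case 4
      then have c: "s k \<odot> sdesc 1 a = sdesc 1 a \<odot> s k" "s k \<odot> sdesc 2 b = sdesc 2 (Suc b)"
        using k ab s_sdesc_extend[of 2 b] by (simp_all add: s_sdesc_commute)
      show ?thesis using 4 ab c eq2_mult_right[OF c(1)] by (simp add: transpose_def)
    qed
  qed
  moreover have "1 \<le> swap_adj k a" "swap_adj k a \<le> n" "swap_adj k b \<le> n"
    using k ab by (auto simp: transpose_def)
  ultimately show ?thesis
    using k ab assms(7) conj_ovl_lt_by_factorization[of k a b "swap_adj k a" "swap_adj k b" e Y] by simp
qed

lemma conj_ovl_lt_diagonal: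
  assumes "1 \<le> k" "k < n" "Y \<in> M"
  shows "s k \<odot> ovl_lt k (k + 1) Y \<odot> s k = ovl_lt k (k + 1) (s 1 \<odot> Y \<odot> s 1)"
  using assms s_sdesc_diagonal[of k] s_inv[of 1]
  by (intro conj_ovl_lt_by_factorization) simp_all

lemma conj_ovl_lt:
  assumes k: "1 \<le> k" "k < n" and ab: "1 \<le> a" "a < b" "b \<le> n"
    and X: "X \<in> M" "\<And>j. 3 \<le> j \<Longrightarrow> j < n \<Longrightarrow> s j \<odot> X = X \<odot> s j"
  shows "s k \<odot> ovl_lt a b X \<odot> s k = (if k = a \<and> b = a + 1 then ovl_lt a b (s 1 \<odot> X \<odot> s 1)
                                 else ovl_lt (swap_adj k a) (swap_adj k b) X)"
proof -
  consider "k = a \<and> b = a + 1" | "k + 1 < a \<or> a < k \<and> k + 1 < b \<or> b < k"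
    | "k + 1 = a \<or> k = a \<and> b \<noteq> a + 1 \<or> a < k \<and> k + 1 = b \<or> k = b" by linarith
  then show ?thesis
  proof cases
    case 1
    then show ?thesis using conj_ovl_lt_diagonal k X by auto
  next
    case 2
    moreover have "swap_adj k a = a" "swap_adj k b = b" using 2 ab by (auto simp: transpose_def)
    ultimately show ?thesis using conj_ovl_lt_passing[OF k ab _ X] by auto
  next
    case 3
    then show ?thesis using conj_ovl_lt_moving[OF k ab _ X(1)] by auto
  qed
qed

lemma s_commute_conj_s1:
  assumes X: "X \<in> M" "\<And>j. 3 \<le> j \<Longrightarrow> j < n \<Longrightarrow> s j \<odot> X = X \<odot> s j"
  shows "\<And>j. 3 \<le> j \<Longrightarrow> j < n \<Longrightarrow> s j \<odot> (s 1 \<odot> X \<odot> s 1) = (s 1 \<odot> X \<odot> s 1) \<odot> s j"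
proof -
  fix j assume j: "3 \<le> j" "j < n"
  have c1: "s j \<odot> s 1 = s 1 \<odot> s j" using j by (intro s_far[symmetric]) auto
  have "s j \<odot> (s 1 \<odot> X \<odot> s 1) = s 1 \<odot> (s j \<odot> X) \<odot> s 1" using eq2_mult_right[OF c1] by simp
  also have "\<dots> = s 1 \<odot> X \<odot> (s j \<odot> s 1)" using X j by simp
  also have "\<dots> = (s 1 \<odot> X \<odot> s 1) \<odot> s j" using c1 by simp
  finally show "s j \<odot> (s 1 \<odot> X \<odot> s 1) = (s 1 \<odot> X \<odot> s 1) \<odot> s j" .
qed

theorem conj_ovl:
  assumes k: "1 \<le> k" "k < n" and ab: "a \<in> {1..n}" "b \<in> {1..n}" "a \<noteq> b"
    and X: "X \<in> M" "\<And>j. 3 \<le> j \<Longrightarrow> j < n \<Longrightarrow> s j \<odot> X = X \<odot> s j"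
  shows "s k \<odot> ovl a b X \<odot> s k = ovl (swap_adj k a) (swap_adj k b) X"
proof (cases "a < b")
  case True
  note c = conj_ovl_lt[OF k _ True _ X]
  show ?thesis
  proof (cases "k = a \<and> b = a + 1")
    case True
    then show ?thesis using c ab \<open>a < b\<close> by (simp add: ovl_def transpose_def)
  next
    case False
    then have "swap_adj k a < swap_adj k b" using \<open>a < b\<close> by (auto simp: transpose_def)
    then show ?thesis using c ab \<open>a < b\<close> False by (auto simp: ovl_def)
  qed
next
  case False
  then have ba: "b < a" using ab by simp
  have X': "s 1 \<odot> X \<odot> s 1 \<in> M" by simp
  note c = conj_ovl_lt[OF k _ ba _ X' s_commute_conj_s1[OF X]]
  show ?thesis
  proof (cases "k = b \<and> a = b + 1")
    case True
    have "s 1 \<odot> s 1 \<odot> X \<odot> s 1 \<odot> s 1 = X"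
      using s_inv[of 1] k X by (simp add: s_s_cancel)
    then show ?thesis using c ab ba True by (simp add: ovl_def transpose_def)
  next
    case False
    then have "swap_adj k b < swap_adj k a" using ba by (auto simp: transpose_def)
    then show ?thesis using c ab ba False by (auto simp: ovl_def)
  qed
qed

end

section \<open>Injective tuples and adjacent transpositions\<close>

definition inj_tuple :: "nat \<Rightarrow> nat \<Rightarrow> nat list \<Rightarrow> bool" where
  "inj_tuple n m t \<longleftrightarrow> distinct t \<and> set t \<subseteq> {1..n} \<and> length t = m"

definition displacement :: "nat list \<Rightarrow> int" where
  "displacement t = (\<Sum>p<length t. (int (t!p) - int p - 1)^2)"

lemma displacement_nonneg: "0 \<le> displacement t"
  by (simp add: displacement_def sum_nonneg)

lemma inj_tuple_map_swap: "inj_tuple n m t \<Longrightarrow> 1 \<le> k \<Longrightarrow> k < n \<Longrightarrow> inj_tuple n m (map (swap_adj k) t)"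
proof -
  assume a: "inj_tuple n m t" "1 \<le> k" "k < n"
  have "set (map (swap_adj k) t) \<subseteq> {1..n}"
  proof
    fix y assume "y \<in> set (map (swap_adj k) t)"
    then obtain x where "x \<in> set t" "y = swap_adj k x" by auto
    then show "y \<in> {1..n}" using a swap_adj_range[of k n x] by (auto simp: inj_tuple_def)
  qed
  then show ?thesis using a by (auto simp: inj_tuple_def distinct_map inj_on_def swap_adj_eq_iff)
qed

lemma displacement_diff:
  assumes "length t' = length t" "\<And>p. p < length t \<Longrightarrow> p \<notin> S \<Longrightarrow> t'!p = t!p" "S \<subseteq> {..<length t}"
  shows "displacement t' - displacement t = (\<Sum>p\<in>S. (int (t'!p) - int p - 1)^2 - (int (t!p) - int p - 1)^2)"
proof -
  have "displacement t' - displacement t = (\<Sum>p<length t. (int (t'!p) - int p - 1)^2 - (int (t!p) - int p - 1)^2)"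
    using assms(1) by (simp add: displacement_def sum_subtractf)
  also have "\<dots> = (\<Sum>p\<in>S. (int (t'!p) - int p - 1)^2 - (int (t!p) - int p - 1)^2)"
    using assms by (intro sum.mono_neutral_right) auto
  finally show ?thesis .
qed

lemma least_misplaced:
  assumes "inj_tuple n m t" "t \<noteq> [Suc 0..<Suc m]"
  obtains p0 where "p0 < m" "Suc p0 < t!p0" "\<And>p. p < p0 \<Longrightarrow> t!p = Suc p"
proof -
  have lt: "length t = m" and dt: "distinct t" and st: "set t \<subseteq> {1..n}"
    using assms(1) by (auto simp: inj_tuple_def)
  have "\<exists>p<m. t!p \<noteq> Suc p"
  proof (rule ccontr)
    assume "\<not> ?thesis"
    then have "t = [Suc 0..<Suc m]" using lt by (intro nth_equalityI) (auto simp del: upt_Suc)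
    then show False using assms(2) by simp
  qed
  then obtain p0 where p0: "p0 < m" "t!p0 \<noteq> Suc p0" and least: "\<And>p. p < p0 \<Longrightarrow> t!p = Suc p"
    using exists_least_iff[of "\<lambda>p. p < m \<and> t!p \<noteq> Suc p"] by (metis (no_types, lifting) less_trans)
  have big: "Suc p0 < t!p0"
  proof (rule ccontr)
    assume "\<not> Suc p0 < t!p0"
    moreover have "1 \<le> t!p0" using st p0 lt nth_mem[of p0 t] by (auto simp: subset_iff)
    ultimately have "t!(t!p0 - 1) = t!p0" "t!p0 - 1 < p0" using p0 least[of "t!p0 - 1"] by auto
    then show False using dt p0 lt by (simp add: nth_eq_iff_index_eq)
  qed
  show thesis by (rule that[OF p0(1) big least])
qed

lemma displacement_swap_decrease:
  assumes dt: "distinct t" and p0: "p0 < length t" "t!p0 = Suc k" "p0 < k"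
    and right: "\<And>p. p < length t \<Longrightarrow> t!p = k \<Longrightarrow> p0 < p"
  shows "displacement (map (swap_adj k) t) < displacement t"
proof -
  define t' where "t' = map (swap_adj k) t"
  have t'p0: "t'!p0 = k" using p0 by (simp add: t'_def)
  have other: "t'!p = t!p" if "p < length t" "t!p \<noteq> k" "p \<noteq> p0" for p
  proof -
    have "t!p \<noteq> Suc k" using that p0 nth_eq_iff_index_eq[OF dt, of p p0] by auto
    then show ?thesis using that by (simp add: t'_def)
  qed
  show ?thesis
  proof (cases "k \<in> set t")
    case False
    then have "t!p \<noteq> k" if "p < length t" for p using that nth_mem by blast
    then have "displacement t' - displacement t
        = (\<Sum>p\<in>{p0}. (int (t'!p) - int p - 1)^2 - (int (t!p) - int p - 1)^2)"
      using p0 other by (intro displacement_diff) (auto simp: t'_def)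
    also have "\<dots> = (int k - int p0 - 1)^2 - (int k - int p0)^2" using t'p0 p0 by simp
    also have "\<dots> < 0" using p0 by (simp add: power2_eq_square algebra_simps)
    finally show ?thesis by (simp add: t'_def)
  next
    case True
    then obtain p1 where p1: "p1 < length t" "t!p1 = k" by (metis in_set_conv_nth)
    then have "p0 < p1" by (rule right)
    have ne: "t!p \<noteq> k" if "p < length t" "p \<noteq> p1" for p
      using that p1 nth_eq_iff_index_eq[OF dt] by metis
    have "displacement t' - displacement t
        = (\<Sum>p\<in>{p0, p1}. (int (t'!p) - int p - 1)^2 - (int (t!p) - int p - 1)^2)"
      using p0 p1 other ne by (intro displacement_diff) (auto simp: t'_def)
    also have "\<dots> = ((int k - int p0 - 1)^2 - (int k - int p0)^2) + ((int k - int p1)^2 - (int k - int p1 - 1)^2)"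
      using t'p0 p0 p1 \<open>p0 < p1\<close> by (simp add: t'_def)
    also have "\<dots> = 2 * (int p0 - int p1)" by (simp add: power2_eq_square algebra_simps)
    also have "\<dots> < 0" using \<open>p0 < p1\<close> by simp
    finally show ?thesis by (simp add: t'_def)
  qed
qed

lemma displacement_decrease:
  assumes t: "inj_tuple n m t" and "t \<noteq> [Suc 0..<Suc m]"
  obtains k where "1 \<le> k" "k < n" "displacement (map (swap_adj k) t) < displacement t"
proof -
  obtain p0 where p0: "p0 < m" "Suc p0 < t!p0" and least: "\<And>p. p < p0 \<Longrightarrow> t!p = Suc p"
    using least_misplaced[OF assms] by blast
  define k where "k = t!p0 - 1"
  have lt: "length t = m" and "distinct t" "t!p0 \<in> {1..n}"
    using t p0 nth_mem[of p0 t] by (auto simp: inj_tuple_def subset_iff)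
  then have k: "1 \<le> k" "k < n" "t!p0 = Suc k" "p0 < k" using p0 by (auto simp: k_def)
  have "displacement (map (swap_adj k) t) < displacement t"
  proof (rule displacement_swap_decrease)
    fix p assume "p < length t" "t!p = k"
    then show "p0 < p" using least[of p] k by (cases "p = p0"; cases "p < p0") auto
  qed (use \<open>distinct t\<close> p0 k lt in auto)
  with k show thesis by (intro that)
qed

lemma inj_tuple_induct:
  assumes base: "m \<le> n \<Longrightarrow> Q [Suc 0..<Suc m]"
    and step: "\<And>k t. 1 \<le> k \<Longrightarrow> k < n \<Longrightarrow> inj_tuple n m t \<Longrightarrow> Q t \<Longrightarrow> Q (map (swap_adj k) t)"
  shows "inj_tuple n m t \<Longrightarrow> Q t"
proof (induction "nat (displacement t)" arbitrary: t rule: less_induct)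
  case less
  show ?case
  proof (cases "t = [Suc 0..<Suc m]")
    case True
    have "m \<le> n"
    proof (cases m)
      case (Suc m')
      then have "m \<in> set t" using True by simp
      then show ?thesis using less.prems by (auto simp: inj_tuple_def)
    qed simp
    then show ?thesis using base True by simp
  next
    case False
    obtain k where k: "1 \<le> k" "k < n" "displacement (map (swap_adj k) t) < displacement t"
      using displacement_decrease[OF less.prems False] .
    have v': "inj_tuple n m (map (swap_adj k) t)" using inj_tuple_map_swap less.prems k by blast
    have "Q (map (swap_adj k) t)"
      using less.hyps[of "map (swap_adj k) t"] k v' displacement_nonneg[of "map (swap_adj k) t"] by simp
    then have "Q (map (swap_adj k) (map (swap_adj k) t))" using step k v' by blast
    then show ?thesis by (simp add: comp_def)
  qed
qed

section \<open>Commutation of the abstract difference operators\<close>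

context carrier_monoid
begin

lemma commute_mprod:
  assumes "\<And>k. k \<in> set ks \<Longrightarrow> x \<odot> f k = f k \<odot> x" "x \<in> M"
  shows "x \<odot> mprod (map f ks) = mprod (map f ks) \<odot> x"
  using assms(1)
proof (induction ks)
  case Nil then show ?case using assms(2) by simp
next
  case (Cons k ks)
  have "x \<odot> mprod (map f (k # ks)) = (x \<odot> f k) \<odot> mprod (map f ks)" by simp
  also have "\<dots> = f k \<odot> (x \<odot> mprod (map f ks))" using Cons by simp
  also have "\<dots> = f k \<odot> mprod (map f ks) \<odot> x" using Cons by simp
  finally show ?case by simp
qed

lemma mprod_commute_mprod:
  assumes "\<And>k l. k \<in> set ks \<Longrightarrow> l \<in> set ls \<Longrightarrow> f k \<odot> h l = h l \<odot> f k"
    and f_closed: "\<And>k. f k \<in> M"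
  shows "mprod (map f ks) \<odot> mprod (map h ls) = mprod (map h ls) \<odot> mprod (map f ks)"
  using assms(1)
proof (induction ks)
  case Nil then show ?case by simp
next
  case (Cons k ks)
  have c: "f k \<odot> mprod (map h ls) = mprod (map h ls) \<odot> f k"
    using Cons.prems f_closed by (intro commute_mprod) auto
  have "mprod (map f (k # ks)) \<odot> mprod (map h ls) = f k \<odot> (mprod (map f ks) \<odot> mprod (map h ls))"
    by simp
  also have "\<dots> = f k \<odot> mprod (map h ls) \<odot> mprod (map f ks)" using Cons by simp
  also have "\<dots> = mprod (map h ls) \<odot> f k \<odot> mprod (map f ks)" using eq_mult_right[OF c] by simp
  finally show ?case by simp
qed

lemma mprod_interleave:
  assumes "distinct ks"
    and "\<And>k l. k \<in> set ks \<Longrightarrow> l \<in> set ks \<Longrightarrow> k \<noteq> l \<Longrightarrow> f l \<odot> h k = h k \<odot> f l"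
    and h_closed: "\<And>k. h k \<in> M"
  shows "mprod (map f ks) \<odot> mprod (map h ks) = mprod (map (\<lambda>k. f k \<odot> h k) ks)"
  using assms(1,2)
proof (induction ks)
  case Nil then show ?case by simp
next
  case (Cons k ks)
  have "h k \<odot> mprod (map f ks) = mprod (map f ks) \<odot> h k"
    using Cons.prems h_closed by (intro commute_mprod) (simp_all, metis)
  then have "mprod (map f ks) \<odot> mprod (map h (k # ks)) = h k \<odot> mprod (map f ks) \<odot> mprod (map h ks)"
    by (simp flip: assoc)
  then show ?case using Cons by simp
qed

lemma pass_mprod:
  assumes "\<And>k. k \<in> set ks \<Longrightarrow> c \<odot> (f k \<odot> h k) = (h k \<odot> f k) \<odot> c" and "c \<in> M"
  shows "c \<odot> mprod (map (\<lambda>k. f k \<odot> h k) ks) = mprod (map (\<lambda>k. h k \<odot> f k) ks) \<odot> c"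
  using assms(1)
proof (induction ks)
  case Nil then show ?case using assms(2) by simp
next
  case (Cons k ks)
  have "c \<odot> mprod (map (\<lambda>k. f k \<odot> h k) (k # ks))
      = (c \<odot> (f k \<odot> h k)) \<odot> mprod (map (\<lambda>k. f k \<odot> h k) ks)" by simp
  also have "\<dots> = (h k \<odot> f k) \<odot> (c \<odot> mprod (map (\<lambda>k. f k \<odot> h k) ks))" using Cons by simp
  also have "\<dots> = (h k \<odot> f k) \<odot> mprod (map (\<lambda>k. h k \<odot> f k) ks) \<odot> c" using Cons by simp
  finally show ?case by simp
qed

lemma mprod_yang_baxter:
  assumes "distinct ks"
    and fh: "\<And>k l. k \<in> set ks \<Longrightarrow> l \<in> set ks \<Longrightarrow> k \<noteq> l \<Longrightarrow> f k \<odot> h l = h l \<odot> f k"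
    and yb: "\<And>k. k \<in> set ks \<Longrightarrow> c \<odot> (f k \<odot> h k) = (h k \<odot> f k) \<odot> c"
    and closed: "c \<in> M" "\<And>k. f k \<in> M" "\<And>k. h k \<in> M"
  shows "c \<odot> mprod (map f ks) \<odot> mprod (map h ks) = mprod (map h ks) \<odot> mprod (map f ks) \<odot> c"
proof -
  have fh': "mprod (map f ks) \<odot> mprod (map h ks) = mprod (map (\<lambda>k. f k \<odot> h k) ks)"
    using assms(1) closed by (intro mprod_interleave) (auto intro: fh)
  have hf': "mprod (map h ks) \<odot> mprod (map f ks) = mprod (map (\<lambda>k. h k \<odot> f k) ks)"
    using assms(1) closed by (intro mprod_interleave) (auto intro: fh[symmetric])
  have "c \<odot> mprod (map f ks) \<odot> mprod (map h ks) = c \<odot> mprod (map (\<lambda>k. f k \<odot> h k) ks)"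
    by (simp add: fh')
  also have "\<dots> = (mprod (map h ks) \<odot> mprod (map f ks)) \<odot> c"
    unfolding hf' using yb closed(1) by (rule pass_mprod)
  finally show ?thesis by simp
qed

end

text \<open>An abstract model of the operators in \<Delta>_i: r a b x y stands for \<R>_{\<overline>{ab}}(x,y),
  g a for g_{\<overline>a}, and unshift for the action of T^{-1} on a spectral parameter.  The
  predicates distinct3 and unitary_point describe the spectral parameters at which the
  Yang--Baxter relation and unitarity hold.\<close>

locale yb_system = carrier_monoid +
  fixes n :: nat and r :: "nat \<Rightarrow> nat \<Rightarrow> 'c \<Rightarrow> 'c \<Rightarrow> 'a" and g :: "nat \<Rightarrow> 'a"
    and unshift :: "'c \<Rightarrow> 'c"
    and distinct3 :: "'c \<Rightarrow> 'c \<Rightarrow> 'c \<Rightarrow> bool" and unitary_point :: "'c \<Rightarrow> 'c \<Rightarrow> bool"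
  assumes r_closed[simp]: "r a b x y \<in> M" and g_closed[simp]: "g a \<in> M"
    and yang_baxter: "a \<in> {1..n} \<Longrightarrow> b \<in> {1..n} \<Longrightarrow> c \<in> {1..n} \<Longrightarrow> distinct [a,b,c] \<Longrightarrow>
       distinct3 x y z \<Longrightarrow> r a b x y \<odot> r a c x z \<odot> r b c y z = r b c y z \<odot> r a c x z \<odot> r a b x y"
    and unitarity: "a \<in> {1..n} \<Longrightarrow> b \<in> {1..n} \<Longrightarrow> a \<noteq> b \<Longrightarrow> unitary_point x y \<Longrightarrow>
       r a b x y \<odot> r b a y x = e"
    and r_far_commute: "a \<in> {1..n} \<Longrightarrow> b \<in> {1..n} \<Longrightarrow> c \<in> {1..n} \<Longrightarrow> d \<in> {1..n} \<Longrightarrow>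
       distinct [a,b,c,d] \<Longrightarrow> r a b x y \<odot> r c d z w = r c d z w \<odot> r a b x y"
    and g_r_far_commute: "a \<in> {1..n} \<Longrightarrow> c \<in> {1..n} \<Longrightarrow> d \<in> {1..n} \<Longrightarrow> distinct [a,c,d] \<Longrightarrow>
       g a \<odot> r c d x y = r c d x y \<odot> g a"
    and g_commute: "a \<in> {1..n} \<Longrightarrow> b \<in> {1..n} \<Longrightarrow> a \<noteq> b \<Longrightarrow> g a \<odot> g b = g b \<odot> g a"
    and g_pair_r_commute: "a \<in> {1..n} \<Longrightarrow> b \<in> {1..n} \<Longrightarrow> a \<noteq> b \<Longrightarrow>
       (g a \<odot> g b) \<odot> r a b x y = r a b x y \<odot> (g a \<odot> g b)"
    and r_unshift: "r a b (unshift x) (unshift y) = r a b x y"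
begin

definition down :: "nat \<Rightarrow> (nat \<Rightarrow> 'c) \<Rightarrow> 'a" where
  "down i v = mprod (map (\<lambda>k. r i k (v i) (v k)) (rev [1..<i]))"

definition up :: "nat \<Rightarrow> (nat \<Rightarrow> 'c) \<Rightarrow> 'a" where
  "up i v = mprod (map (\<lambda>k. r i k (v i) (v k)) (rev [Suc i..<Suc n]))"

lemma mprod_r_fun_upd_other:
  "a \<notin> set ks \<Longrightarrow> mprod (map (\<lambda>k. r b k y ((v(a := x)) k)) ks) = mprod (map (\<lambda>k. r b k y (v k)) ks)"
  by (induction ks) auto

lemma down_split:
  assumes "1 \<le> i" "i < j"
  shows "down j v = mprod (map (\<lambda>k. r j k (v j) (v k)) (rev [Suc i..<j])) \<odot> r j i (v j) (v i)
                   \<odot> mprod (map (\<lambda>k. r j k (v j) (v k)) (rev [1..<i]))"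
proof -
  have "[1..<j] = [1..<i] @ i # [Suc i..<j]"
    using assms upt_add_eq_append[of 1 i "j - i"] by (simp add: upt_conv_Cons del: upt_Suc)
  then show ?thesis by (simp add: down_def)
qed

lemma up_split:
  assumes "i < j" "j \<le> n"
  shows "up i v = mprod (map (\<lambda>k. r i k (v i) (v k)) (rev [Suc j..<Suc n])) \<odot> r i j (v i) (v j)
                 \<odot> mprod (map (\<lambda>k. r i k (v i) (v k)) (rev [Suc i..<j]))"
proof -
  have "[Suc i..<Suc n] = [Suc i..<j] @ j # [Suc j..<Suc n]"
    using assms upt_add_eq_append[of "Suc i" j "Suc n - j"] by (simp add: upt_conv_Cons del: upt_Suc)
  then show ?thesis by (simp add: up_def)
qed

end

locale yb_pair = yb_system +
  fixes i j :: nat and u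
  assumes ij: "1 \<le> i" "i < j" "j \<le> n"
    and unitary_unshifted: "unitary_point (unshift (u i)) (u j)"
    and unitary: "unitary_point (u j) (u i)"
    and distinct_below: "\<And>k. 1 \<le> k \<Longrightarrow> k < i \<Longrightarrow> distinct3 (u i) (u j) (u k)"
    and distinct_between: "\<And>k. i < k \<Longrightarrow> k < j \<Longrightarrow> distinct3 (unshift (u i)) (u j) (u k)"
    and distinct_beyond: "\<And>k. j < k \<Longrightarrow> k \<le> n \<Longrightarrow>
       distinct3 (unshift (u i)) (unshift (u j)) (u k)"
begin

abbreviation "below \<equiv> rev [1..<i]"
abbreviation "between \<equiv> rev [Suc i..<j]"
abbreviation "beyond \<equiv> rev [Suc j..<Suc n]"

abbreviation "Ri \<equiv> \<lambda>k. r i k (u i) (u k)"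
abbreviation "Ri' \<equiv> \<lambda>k. r i k (unshift (u i)) (u k)"
abbreviation "Rj \<equiv> \<lambda>k. r j k (u j) (u k)"
abbreviation "Rj' \<equiv> \<lambda>k. r j k (unshift (u j)) (u k)"

lemma other_index:
  "k \<in> set below \<union> set between \<union> set beyond \<Longrightarrow> k \<in> {1..n} \<and> k \<noteq> i \<and> k \<noteq> j"
  using ij by auto

lemma r_i_commute_r_j:
  assumes "k \<in> set below \<union> set between \<union> set beyond" "l \<in> set below \<union> set between \<union> set beyond"
    and "k \<noteq> l"
  shows "r i k x y \<odot> r j l z w = r j l z w \<odot> r i k x y"
  using assms other_index[of k] other_index[of l] ij by (intro r_far_commute) auto

lemma i_block_commute_j_block:
  assumes "set ks \<inter> set ls = {}" "set ks \<union> set ls \<subseteq> set below \<union> set between \<union> set beyond"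
  shows "mprod (map (\<lambda>k. r i k (x k) (y k)) ks) \<odot> mprod (map (\<lambda>l. r j l (z l) (w l)) ls)
       = mprod (map (\<lambda>l. r j l (z l) (w l)) ls) \<odot> mprod (map (\<lambda>k. r i k (x k) (y k)) ks)"
proof (rule mprod_commute_mprod)
  fix k l assume "k \<in> set ks" "l \<in> set ls"
  with assms show "r i k (x k) (y k) \<odot> r j l (z l) (w l) = r j l (z l) (w l) \<odot> r i k (x k) (y k)"
    by (intro r_i_commute_r_j) blast+
qed simp

lemma g_commute_block:
  assumes "{a, b} = {i, j}" "set ks \<subseteq> set below \<union> set between \<union> set beyond"
  shows "g a \<odot> mprod (map (\<lambda>k. r b k (x k) (y k)) ks) = mprod (map (\<lambda>k. r b k (x k) (y k)) ks) \<odot> g a"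
proof (rule commute_mprod)
  fix k assume "k \<in> set ks"
  then have "k \<in> {1..n} \<and> k \<noteq> a \<and> k \<noteq> b" using assms other_index by blast
  moreover have "a \<in> {1..n}" "b \<in> {1..n}" "a \<noteq> b" using assms(1) ij by (auto simp: doubleton_eq_iff)
  ultimately show "g a \<odot> r b k (x k) (y k) = r b k (x k) (y k) \<odot> g a"
    by (intro g_r_far_commute) auto
qed simp

lemma lhs_factors:
  "down i u = mprod (map Ri below)"
  "up i (u(i := unshift (u i))) = mprod (map Ri' beyond) \<odot> Ri' j \<odot> mprod (map Ri' between)"
  "down j (u(i := unshift (u i)))
     = mprod (map Rj between) \<odot> r j i (u j) (unshift (u i)) \<odot> mprod (map Rj below)"
  "up j (u(i := unshift (u i), j := unshift (u j))) = mprod (map Rj' beyond)"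
  using ij by (simp_all add: down_def[of i] up_def[of j] up_split down_split mprod_r_fun_upd_other
      fun_upd_same fun_upd_other del: fun_upd_apply upt_Suc)

lemma rhs_factors:
  "down j u = mprod (map Rj between) \<odot> Rj i \<odot> mprod (map Rj below)"
  "up j (u(j := unshift (u j))) = mprod (map Rj' beyond)"
  "down i (u(j := unshift (u j))) = mprod (map Ri below)"
  "up i (u(i := unshift (u i), j := unshift (u j)))
     = mprod (map Ri' beyond) \<odot> Ri j \<odot> mprod (map Ri' between)"
  using ij by (simp_all add: down_def[of i] up_def[of j] up_split down_split mprod_r_fun_upd_other
      r_unshift fun_upd_same fun_upd_other del: fun_upd_apply upt_Suc)

lemma lhs_normal_form:
  "down i u \<odot> g i \<odot> up i (u(i := unshift (u i))) \<odot> down j (u(i := unshift (u i))) \<odot> g j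
     \<odot> up j (u(i := unshift (u i), j := unshift (u j)))
   = mprod (map Rj between) \<odot> mprod (map Ri below) \<odot> mprod (map Rj below) \<odot> g j \<odot> g i
     \<odot> mprod (map Ri' beyond) \<odot> mprod (map Rj' beyond) \<odot> mprod (map Ri' between)"
proof -
  let ?rji = "r j i (u j) (unshift (u i))"
  have yb: "Ri' j \<odot> mprod (map Ri' between) \<odot> mprod (map Rj between)
      = mprod (map Rj between) \<odot> mprod (map Ri' between) \<odot> Ri' j"
  proof (rule mprod_yang_baxter)
    fix k assume "k \<in> set between"
    then show "Ri' j \<odot> (Ri' k \<odot> Rj k) = (Rj k \<odot> Ri' k) \<odot> Ri' j"
      using yang_baxter[of i j k] distinct_between[of k] ij by simp
  qed (auto intro: r_i_commute_r_j)
  have "Ri' j \<odot> ?rji = e"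
    using unitarity[OF _ _ _ unitary_unshifted] ij by simp
  then have middle: "Ri' j \<odot> mprod (map Ri' between) \<odot> mprod (map Rj between) \<odot> ?rji
      = mprod (map Rj between) \<odot> mprod (map Ri' between)"
    using eq_mult_right[OF yb, of ?rji] by simp
  have c: "mprod (map Ri' beyond) \<odot> mprod (map Rj between) = mprod (map Rj between) \<odot> mprod (map Ri' beyond)"
    "mprod (map Ri below) \<odot> mprod (map Rj between) = mprod (map Rj between) \<odot> mprod (map Ri below)"
    "mprod (map Ri' between) \<odot> mprod (map Rj below) = mprod (map Rj below) \<odot> mprod (map Ri' between)"
    "mprod (map Ri' between) \<odot> mprod (map Rj' beyond) = mprod (map Rj' beyond) \<odot> mprod (map Ri' between)"
    "mprod (map Ri' beyond) \<odot> mprod (map Rj below) = mprod (map Rj below) \<odot> mprod (map Ri' beyond)"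
    using ij by (auto intro!: i_block_commute_j_block simp del: upt_Suc)
  have cg: "g i \<odot> mprod (map Rj between) = mprod (map Rj between) \<odot> g i"
    "g i \<odot> mprod (map Rj below) = mprod (map Rj below) \<odot> g i"
    "mprod (map Ri' between) \<odot> g j = g j \<odot> mprod (map Ri' between)"
    "mprod (map Ri' beyond) \<odot> g j = g j \<odot> mprod (map Ri' beyond)"
    "g i \<odot> g j = g j \<odot> g i"
    using ij by (auto intro!: g_commute_block g_commute_block[symmetric] g_commute simp del: upt_Suc)
  have "down i u \<odot> g i \<odot> up i (u(i := unshift (u i))) \<odot> down j (u(i := unshift (u i))) \<odot> g j
      \<odot> up j (u(i := unshift (u i), j := unshift (u j)))
    = mprod (map Ri below) \<odot> g i \<odot> mprod (map Ri' beyond)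
      \<odot> (Ri' j \<odot> mprod (map Ri' between) \<odot> mprod (map Rj between) \<odot> ?rji)
      \<odot> mprod (map Rj below) \<odot> g j \<odot> mprod (map Rj' beyond)"
    by (simp add: lhs_factors)
  also have "\<dots> = mprod (map Ri below) \<odot> g i \<odot> mprod (map Ri' beyond) \<odot> mprod (map Rj between)
      \<odot> mprod (map Ri' between) \<odot> mprod (map Rj below) \<odot> g j \<odot> mprod (map Rj' beyond)"
    unfolding middle by simp
  also have "\<dots> = mprod (map Rj between) \<odot> mprod (map Ri below) \<odot> mprod (map Rj below) \<odot> g j \<odot> g i
     \<odot> mprod (map Ri' beyond) \<odot> mprod (map Rj' beyond) \<odot> mprod (map Ri' between)"
    by (simp only: assoc c cg c[THEN eq2_mult_right] cg[THEN eq2_mult_right])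
  finally show ?thesis .
qed

lemma rhs_normal_form:
  "down j u \<odot> g j \<odot> up j (u(j := unshift (u j))) \<odot> down i (u(j := unshift (u j))) \<odot> g i
     \<odot> up i (u(i := unshift (u i), j := unshift (u j)))
   = mprod (map Rj between) \<odot> mprod (map Ri below) \<odot> mprod (map Rj below) \<odot> g j \<odot> g i
     \<odot> mprod (map Ri' beyond) \<odot> mprod (map Rj' beyond) \<odot> mprod (map Ri' between)"
proof -
  have yb_below: "Ri j \<odot> mprod (map Ri below) \<odot> mprod (map Rj below)
      = mprod (map Rj below) \<odot> mprod (map Ri below) \<odot> Ri j"
  proof (rule mprod_yang_baxter)
    fix k assume "k \<in> set below"
    then show "Ri j \<odot> (Ri k \<odot> Rj k) = (Rj k \<odot> Ri k) \<odot> Ri j"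
      using yang_baxter[of i j k] distinct_below[of k] ij by simp
  qed (auto intro: r_i_commute_r_j)
  have yb_beyond: "Ri j \<odot> mprod (map Ri' beyond) \<odot> mprod (map Rj' beyond)
      = mprod (map Rj' beyond) \<odot> mprod (map Ri' beyond) \<odot> Ri j"
  proof (rule mprod_yang_baxter)
    fix k assume "k \<in> set beyond"
    then have "j < k" "k \<le> n" by auto
    then show "Ri j \<odot> (Ri' k \<odot> Rj' k) = (Rj' k \<odot> Ri' k) \<odot> Ri j"
      using yang_baxter[of i j k "unshift (u i)" "unshift (u j)" "u k"] distinct_beyond[of k] ij
      by (simp add: r_unshift)
  qed (auto intro: r_i_commute_r_j)
  have unit: "Rj i \<odot> Ri j = e"
    using unitarity[OF _ _ _ unitary] ij by simp
  have gg: "g j \<odot> g i \<odot> Ri j = Ri j \<odot> g j \<odot> g i"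
    using g_pair_r_commute[of i j] g_commute[of i j] ij by (simp flip: assoc)
  have c: "mprod (map Rj' beyond) \<odot> mprod (map Ri below) = mprod (map Ri below) \<odot> mprod (map Rj' beyond)"
    using ij by (auto intro!: i_block_commute_j_block[symmetric] simp del: upt_Suc)
  have cg: "g j \<odot> mprod (map Ri below) = mprod (map Ri below) \<odot> g j"
    "mprod (map Rj' beyond) \<odot> g i = g i \<odot> mprod (map Rj' beyond)"
    using ij by (auto intro!: g_commute_block g_commute_block[symmetric] simp del: upt_Suc)
  have "down j u \<odot> g j \<odot> up j (u(j := unshift (u j))) \<odot> down i (u(j := unshift (u j))) \<odot> g i
      \<odot> up i (u(i := unshift (u i), j := unshift (u j)))
    = mprod (map Rj between) \<odot> Rj i \<odot> mprod (map Rj below) \<odot> mprod (map Ri below) \<odot> g j \<odot> g i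
      \<odot> mprod (map Rj' beyond) \<odot> mprod (map Ri' beyond) \<odot> Ri j \<odot> mprod (map Ri' between)"
    by (simp only: rhs_factors assoc c cg c[THEN eq2_mult_right] cg[THEN eq2_mult_right])
  also have "\<dots> = mprod (map Rj between) \<odot> Rj i \<odot> Ri j \<odot> mprod (map Ri below) \<odot> mprod (map Rj below)
      \<odot> g j \<odot> g i \<odot> mprod (map Ri' beyond) \<odot> mprod (map Rj' beyond) \<odot> mprod (map Ri' between)"
    using eq_mult_right[OF yb_beyond[symmetric]] eq_mult_right[OF gg]
      eq_mult_right[OF yb_below[symmetric]] by simp
  also have "\<dots> = mprod (map Rj between) \<odot> mprod (map Ri below) \<odot> mprod (map Rj below) \<odot> g j \<odot> g i
     \<odot> mprod (map Ri' beyond) \<odot> mprod (map Rj' beyond) \<odot> mprod (map Ri' between)"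
    using eq_mult_right[OF unit] by simp
  finally show ?thesis .
qed

end

theorem (in yb_system) down_g_up_commute:
  assumes "1 \<le> i" "i < j" "j \<le> n"
    and "unitary_point (unshift (u i)) (u j)" "unitary_point (u j) (u i)"
    and "\<And>k. 1 \<le> k \<Longrightarrow> k < i \<Longrightarrow> distinct3 (u i) (u j) (u k)"
    and "\<And>k. i < k \<Longrightarrow> k < j \<Longrightarrow> distinct3 (unshift (u i)) (u j) (u k)"
    and "\<And>k. j < k \<Longrightarrow> k \<le> n \<Longrightarrow> distinct3 (unshift (u i)) (unshift (u j)) (u k)"
  shows "down i u \<odot> g i \<odot> up i (u(i := unshift (u i))) \<odot> down j (u(i := unshift (u i))) \<odot> g j
           \<odot> up j (u(i := unshift (u i), j := unshift (u j)))
       = down j u \<odot> g j \<odot> up j (u(j := unshift (u j))) \<odot> down i (u(j := unshift (u j))) \<odot> g i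
           \<odot> up i (u(i := unshift (u i), j := unshift (u j)))"
proof -
  interpret yb_pair mul e M n r g unshift distinct3 unitary_point i j u
    using assms by unfold_locales
  show ?thesis by (simp only: lhs_normal_form rhs_normal_form)
qed

section \<open>Relations among the overlined operators\<close>

lemma inj_tuple_nth: "inj_tuple n m t \<Longrightarrow> i < m \<Longrightarrow> t ! i \<in> {1..n}"
  unfolding inj_tuple_def by (metis nth_mem subsetD)

lemma inj_tuple_nth_neq: "inj_tuple n m t \<Longrightarrow> i < m \<Longrightarrow> j < m \<Longrightarrow> i \<noteq> j \<Longrightarrow> t ! i \<noteq> t ! j"
  unfolding inj_tuple_def by (simp add: nth_eq_iff_index_eq)

lemma nth_map_inj_tuple: "inj_tuple n m t \<Longrightarrow> i < m \<Longrightarrow> map f t ! i = f (t ! i)"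
  by (simp add: inj_tuple_def)

text \<open>Every injective tuple is reached from [1, ..., m] by adjacent transpositions.\<close>

lemma (in coxeter_gens) eq_by_swap_covariance:
  assumes "inj_tuple n m t"
    and base: "m \<le> n \<Longrightarrow> L [Suc 0..<Suc m] = R [Suc 0..<Suc m]"
    and L: "\<And>k t. 1 \<le> k \<Longrightarrow> k < n \<Longrightarrow> inj_tuple n m t \<Longrightarrow> L (map (swap_adj k) t) = s k \<odot> L t \<odot> s k"
    and R: "\<And>k t. 1 \<le> k \<Longrightarrow> k < n \<Longrightarrow> inj_tuple n m t \<Longrightarrow> R (map (swap_adj k) t) = s k \<odot> R t \<odot> s k"
  shows "L t = R t"
  by (rule inj_tuple_induct[where Q = "\<lambda>t. L t = R t", OF _ _ assms(1)]) (simp_all add: base L R del: upt_Suc)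

text \<open>P k X models X_{k,k+1} and G models g_{\<overline>1}; good X means X_{k+1,k+2} F_{k,k+1} F_{k+1,k+2}
  = F_{k,k+1} F_{k+1,k+2} X_{k,k+1}.\<close>

locale placed_gens = coxeter_gens +
  fixes P :: "nat \<Rightarrow> 'x \<Rightarrow> 'a" and G :: 'a and good :: "'x \<Rightarrow> bool"
  assumes P_closed[simp]: "P k X \<in> M" and G_closed[simp]: "G \<in> M"
    and s_P1_commute: "3 \<le> j \<Longrightarrow> j < n \<Longrightarrow> s j \<odot> P 1 X = P 1 X \<odot> s j"
    and P_far_commute: "1 \<le> k \<Longrightarrow> k + 1 < l \<Longrightarrow> l < n \<Longrightarrow> P k X \<odot> P l Y = P l Y \<odot> P k X"
    and P_shift: "good X \<Longrightarrow> 1 \<le> k \<Longrightarrow> k + 1 < n \<Longrightarrow>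
       P (k+1) X \<odot> s k \<odot> s (k+1) = s k \<odot> s (k+1) \<odot> P k X"
    and s_G_commute: "2 \<le> j \<Longrightarrow> j < n \<Longrightarrow> s j \<odot> G = G \<odot> s j"
    and G_P_commute: "2 \<le> k \<Longrightarrow> k < n \<Longrightarrow> G \<odot> P k X = P k X \<odot> G"
begin

definition bar2 :: "nat \<Rightarrow> nat \<Rightarrow> 'x \<Rightarrow> 'a" where "bar2 a b X = ovl a b (P 1 X)"
definition bar1 :: "nat \<Rightarrow> 'a" where "bar1 a = sdesc 1 a \<odot> G \<odot> sasc 1 a"

lemma bar2_closed[simp]: "bar2 a b X \<in> M" by (simp add: bar2_def)
lemma bar1_closed[simp]: "bar1 a \<in> M" by (simp add: bar1_def)

lemma bar2_swap:
  "1 \<le> k \<Longrightarrow> k < n \<Longrightarrow> a \<in> {1..n} \<Longrightarrow> b \<in> {1..n} \<Longrightarrow> a \<noteq> b \<Longrightarrow>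
   bar2 (swap_adj k a) (swap_adj k b) X = s k \<odot> bar2 a b X \<odot> s k"
  unfolding bar2_def using s_P1_commute by (intro conj_ovl[symmetric]) auto

lemma s_conj_G: "2 \<le> j \<Longrightarrow> j < n \<Longrightarrow> s j \<odot> G \<odot> s j = G"
  using eq_mult_right[OF s_G_commute, of j "s j"] s_inv[of j] by simp

lemma bar1_swap:
  assumes k: "1 \<le> k" "k < n" and a: "a \<in> {1..n}"
  shows "bar1 (swap_adj k a) = s k \<odot> bar1 a \<odot> s k"
proof -
  have conj: "s k \<odot> bar1 a \<odot> s k = sdesc 1 a2 \<odot> (u \<odot> G \<odot> u) \<odot> sasc 1 a2"
    if "1 \<le> a2" "a2 \<le> n" "u \<odot> u = e" "u \<in> M" "s k \<odot> sdesc 1 a = sdesc 1 a2 \<odot> u" for a2 u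
    using conj_by_factorization[OF s_inv[OF k] s_closed _ _ _ _ _ _ _ _ that(3-5), of "sasc 1 a" "sasc 1 a2" G]
      a that(1,2) by (simp add: bar1_def sdesc_sasc sasc_sdesc)
  consider "k + 1 < a" | "k + 1 = a" | "k = a" | "a < k" using a by linarith
  then show ?thesis
  proof cases
    case 1
    then have "s k \<odot> bar1 a \<odot> s k = sdesc 1 a \<odot> (s (k+1) \<odot> G \<odot> s (k+1)) \<odot> sasc 1 a"
      using k a by (intro conj) (auto simp: s_inv s_sdesc_shift)
    also have "s (k+1) \<odot> G \<odot> s (k+1) = G" using 1 k a by (intro s_conj_G) auto
    finally show ?thesis using 1 by (simp add: bar1_def)
  next
    case 2
    then have "s k \<odot> bar1 a \<odot> s k = sdesc 1 k \<odot> (e \<odot> G \<odot> e) \<odot> sasc 1 k"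
      using k a s_sdesc_top[of 1 a] by (intro conj) auto
    then show ?thesis using 2 by (simp add: bar1_def)
  next
    case 3
    then have "s k \<odot> bar1 a \<odot> s k = sdesc 1 (a+1) \<odot> (e \<odot> G \<odot> e) \<odot> sasc 1 (a+1)"
      using k a s_sdesc_extend[of 1 a] by (intro conj) auto
    then show ?thesis using 3 by (simp add: bar1_def)
  next
    case 4
    then have "s k \<odot> bar1 a \<odot> s k = sdesc 1 a \<odot> (s k \<odot> G \<odot> s k) \<odot> sasc 1 a"
      using k a by (intro conj) (auto simp: s_inv s_sdesc_commute)
    also have "s k \<odot> G \<odot> s k = G" using 4 k a by (intro s_conj_G) auto
    finally show ?thesis using 4 by (simp add: bar1_def)
  qed
qed

lemma bar2_swap_nth:
  "inj_tuple n m t \<Longrightarrow> i < m \<Longrightarrow> j < m \<Longrightarrow> i \<noteq> j \<Longrightarrow> 1 \<le> k \<Longrightarrow> k < n \<Longrightarrow>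
   bar2 (map (swap_adj k) t ! i) (map (swap_adj k) t ! j) X = s k \<odot> bar2 (t!i) (t!j) X \<odot> s k"
  by (metis bar2_swap inj_tuple_nth inj_tuple_nth_neq nth_map_inj_tuple)

lemma bar1_swap_nth:
  "inj_tuple n m t \<Longrightarrow> i < m \<Longrightarrow> 1 \<le> k \<Longrightarrow> k < n \<Longrightarrow>
   bar1 (map (swap_adj k) t ! i) = s k \<odot> bar1 (t!i) \<odot> s k"
  by (metis bar1_swap inj_tuple_nth nth_map_inj_tuple)

lemma bar2_adjacent: "good X \<Longrightarrow> 1 \<le> k \<Longrightarrow> k < n \<Longrightarrow> bar2 k (k+1) X = P k X"
proof (induction k)
  case 0 then show ?case by simp
next
  case (Suc k)
  show ?case
  proof (cases "k = 0")
    case True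
    then show ?thesis by (simp add: bar2_def ovl_def ovl_lt_def sdesc_empty sasc_empty)
  next
    case False
    then have k: "1 \<le> k" "k + 1 < n" using Suc by auto
    have "bar2 (k+1) (k+2) X = s k \<odot> (s (k+1) \<odot> bar2 k (k+1) X \<odot> s (k+1)) \<odot> s k"
      using k bar2_swap[of "k+1" k "k+1" X] bar2_swap[of k k "k+2" X] by simp
    also have "\<dots> = (s k \<odot> s (k+1) \<odot> P k X) \<odot> s (k+1) \<odot> s k" using Suc k by simp
    also have "\<dots> = (P (k+1) X \<odot> s k \<odot> s (k+1)) \<odot> s (k+1) \<odot> s k"
      using P_shift[OF Suc.prems(1) k] by simp
    also have "\<dots> = P (k+1) X" using k by (simp add: s_s_cancel s_inv)
    finally show ?thesis by simp
  qed
qed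

lemma bar2_1_2: "bar2 (Suc 0) 2 X = P (Suc 0) X"
  by (simp add: bar2_def ovl_def ovl_lt_def sdesc_empty sasc_empty)

lemma bar2_2_1: "bar2 2 (Suc 0) X = s (Suc 0) \<odot> P (Suc 0) X \<odot> s (Suc 0)"
  by (simp add: bar2_def ovl_def ovl_lt_def sdesc_empty sasc_empty)

lemma bar2_1_3: "bar2 (Suc 0) 3 X = s 2 \<odot> P (Suc 0) X \<odot> s 2"
  by (simp add: bar2_def ovl_def ovl_lt_def sdesc_empty sasc_empty sdesc_def sasc_def
      numeral_3_eq_3 numeral_2_eq_2)

lemma bar1_1: "bar1 (Suc 0) = G"
  by (simp add: bar1_def sdesc_empty sasc_empty)

lemma bar1_2: "bar1 2 = s 1 \<odot> G \<odot> s 1"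
  by (simp add: bar1_def sdesc_def sasc_def numeral_2_eq_2)

lemma bar2_yang_baxter:
  assumes "good X3"
    and base: "3 \<le> n \<Longrightarrow>
      P 1 X1 \<odot> (s 2 \<odot> P 1 X2 \<odot> s 2) \<odot> P 2 X3 = P 2 X3 \<odot> (s 2 \<odot> P 1 X2 \<odot> s 2) \<odot> P 1 X1"
    and "a \<in> {1..n}" "b \<in> {1..n}" "c \<in> {1..n}" "distinct [a, b, c]"
  shows "bar2 a b X1 \<odot> bar2 a c X2 \<odot> bar2 b c X3 = bar2 b c X3 \<odot> bar2 a c X2 \<odot> bar2 a b X1"
proof -
  have "(\<lambda>t. bar2 (t!0) (t!1) X1 \<odot> bar2 (t!0) (t!2) X2 \<odot> bar2 (t!1) (t!2) X3) [a, b, c]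
      = (\<lambda>t. bar2 (t!1) (t!2) X3 \<odot> bar2 (t!0) (t!2) X2 \<odot> bar2 (t!0) (t!1) X1) [a, b, c]"
  proof (rule eq_by_swap_covariance)
    show "3 \<le> n \<Longrightarrow> bar2 ([Suc 0..<Suc 3]!0) ([Suc 0..<Suc 3]!1) X1
      \<odot> bar2 ([Suc 0..<Suc 3]!0) ([Suc 0..<Suc 3]!2) X2 \<odot> bar2 ([Suc 0..<Suc 3]!1) ([Suc 0..<Suc 3]!2) X3
      = bar2 ([Suc 0..<Suc 3]!1) ([Suc 0..<Suc 3]!2) X3 \<odot> bar2 ([Suc 0..<Suc 3]!0) ([Suc 0..<Suc 3]!2) X2
      \<odot> bar2 ([Suc 0..<Suc 3]!0) ([Suc 0..<Suc 3]!1) X1"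
      using base bar2_adjacent[OF \<open>good X3\<close>, of 2] bar2_1_2 bar2_1_3 by (simp add: upt_rec eval_nat_numeral)
  qed (use assms in \<open>simp_all add: inj_tuple_def bar2_swap_nth s_s_cancel del: nth_map\<close>)
  then show ?thesis by simp
qed

lemma bar2_unitary:
  assumes base: "2 \<le> n \<Longrightarrow> P 1 X \<odot> (s 1 \<odot> P 1 Y \<odot> s 1) = e"
    and "a \<in> {1..n}" "b \<in> {1..n}" "a \<noteq> b"
  shows "bar2 a b X \<odot> bar2 b a Y = e"
proof -
  have "(\<lambda>t. bar2 (t!0) (t!1) X \<odot> bar2 (t!1) (t!0) Y) [a, b] = (\<lambda>t. e) [a, b]"
  proof (rule eq_by_swap_covariance)
    show "2 \<le> n \<Longrightarrow> bar2 ([Suc 0..<Suc 2]!0) ([Suc 0..<Suc 2]!1) X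
      \<odot> bar2 ([Suc 0..<Suc 2]!1) ([Suc 0..<Suc 2]!0) Y = e"
      using base bar2_1_2 bar2_2_1 by (simp add: upt_rec eval_nat_numeral)
  qed (use assms in \<open>simp_all add: inj_tuple_def bar2_swap_nth s_s_cancel s_inv del: nth_map\<close>)
  then show ?thesis by simp
qed

lemma bar2_far_commute:
  assumes "good X" "good Y" "a \<in> {1..n}" "b \<in> {1..n}" "c \<in> {1..n}" "d \<in> {1..n}" "distinct [a, b, c, d]"
  shows "bar2 a b X \<odot> bar2 c d Y = bar2 c d Y \<odot> bar2 a b X"
proof -
  have "(\<lambda>t. bar2 (t!0) (t!1) X \<odot> bar2 (t!2) (t!3) Y) [a, b, c, d]
      = (\<lambda>t. bar2 (t!2) (t!3) Y \<odot> bar2 (t!0) (t!1) X) [a, b, c, d]"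
  proof (rule eq_by_swap_covariance)
    show "4 \<le> n \<Longrightarrow> bar2 ([Suc 0..<Suc 4]!0) ([Suc 0..<Suc 4]!1) X \<odot> bar2 ([Suc 0..<Suc 4]!2) ([Suc 0..<Suc 4]!3) Y
      = bar2 ([Suc 0..<Suc 4]!2) ([Suc 0..<Suc 4]!3) Y \<odot> bar2 ([Suc 0..<Suc 4]!0) ([Suc 0..<Suc 4]!1) X"
      using bar2_adjacent[OF assms(1), of 1] bar2_adjacent[OF assms(2), of 3] P_far_commute[of 1 3 X Y]
      by (simp add: upt_rec eval_nat_numeral)
  qed (use assms in \<open>simp_all add: inj_tuple_def bar2_swap_nth s_s_cancel del: nth_map\<close>)
  then show ?thesis by simp
qed

lemma bar1_bar2_commute:
  assumes "good X" "a \<in> {1..n}" "b \<in> {1..n}" "c \<in> {1..n}" "distinct [a, b, c]"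
  shows "bar1 a \<odot> bar2 b c X = bar2 b c X \<odot> bar1 a"
proof -
  have "(\<lambda>t. bar1 (t!0) \<odot> bar2 (t!1) (t!2) X) [a, b, c] = (\<lambda>t. bar2 (t!1) (t!2) X \<odot> bar1 (t!0)) [a, b, c]"
  proof (rule eq_by_swap_covariance)
    show "3 \<le> n \<Longrightarrow> bar1 ([Suc 0..<Suc 3]!0) \<odot> bar2 ([Suc 0..<Suc 3]!1) ([Suc 0..<Suc 3]!2) X
      = bar2 ([Suc 0..<Suc 3]!1) ([Suc 0..<Suc 3]!2) X \<odot> bar1 ([Suc 0..<Suc 3]!0)"
      using bar2_adjacent[OF assms(1), of 2] G_P_commute[of 2 X] bar1_1 by (simp add: upt_rec eval_nat_numeral)
  qed (use assms in \<open>simp_all add: inj_tuple_def bar2_swap_nth bar1_swap_nth s_s_cancel del: nth_map\<close>)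
  then show ?thesis by simp
qed

lemma bar1_pair_bar2_commute:
  assumes base: "2 \<le> n \<Longrightarrow> (G \<odot> bar1 2) \<odot> P 1 X = P 1 X \<odot> (G \<odot> bar1 2)"
    and "a \<in> {1..n}" "b \<in> {1..n}" "a \<noteq> b"
  shows "(bar1 a \<odot> bar1 b) \<odot> bar2 a b X = bar2 a b X \<odot> (bar1 a \<odot> bar1 b)"
proof -
  have "(\<lambda>t. bar1 (t!0) \<odot> bar1 (t!1) \<odot> bar2 (t!0) (t!1) X) [a, b]
      = (\<lambda>t. bar2 (t!0) (t!1) X \<odot> bar1 (t!0) \<odot> bar1 (t!1)) [a, b]"
  proof (rule eq_by_swap_covariance)
    show "2 \<le> n \<Longrightarrow> bar1 ([Suc 0..<Suc 2]!0) \<odot> bar1 ([Suc 0..<Suc 2]!1) \<odot> bar2 ([Suc 0..<Suc 2]!0) ([Suc 0..<Suc 2]!1) X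
      = bar2 ([Suc 0..<Suc 2]!0) ([Suc 0..<Suc 2]!1) X \<odot> bar1 ([Suc 0..<Suc 2]!0) \<odot> bar1 ([Suc 0..<Suc 2]!1)"
      using base bar1_1 bar2_1_2 by (simp add: upt_rec eval_nat_numeral)
  qed (use assms in \<open>simp_all add: inj_tuple_def bar2_swap_nth bar1_swap_nth s_s_cancel del: nth_map\<close>)
  then show ?thesis by simp
qed

end

section \<open>The concrete model\<close>

definition rops :: "nat \<Rightarrow> nat \<Rightarrow> op set" where "rops N n = {A. restr N n A = A}"

definition placed :: "nat \<Rightarrow> nat \<Rightarrow> nat \<Rightarrow> op \<Rightarrow> op" where
  "placed N n k X = restr N n (place2 k X)"

definition placed_g :: "nat \<Rightarrow> nat \<Rightarrow> (nat \<Rightarrow> nat \<Rightarrow> complex) \<Rightarrow> op" where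
  "placed_g N n g = restr N n (place1 g)"

lemma carrier_monoid_rmul: "carrier_monoid (rmul N n) (rone N n) (rops N n)"
  by unfold_locales (auto simp: rops_def rmul_assoc)

lemma restr_placed[simp]: "restr N n (placed N n k X) = placed N n k X" by (simp add: placed_def)
lemma restr_placed_g[simp]: "restr N n (placed_g N n g) = placed_g N n g" by (simp add: placed_g_def)
lemma placed_rops[simp]: "placed N n k X \<in> rops N n" by (simp add: rops_def)
lemma placed_g_rops[simp]: "placed_g N n g \<in> rops N n" by (simp add: rops_def)
lemma rmul_rops[simp]: "rmul N n A B \<in> rops N n" by (simp add: rops_def)
lemma rone_rops[simp]: "rone N n \<in> rops N n" by (simp add: rops_def)
lemma restr_rops[simp]: "restr N n A \<in> rops N n" by (simp add: rops_def)

lemma placed_embed: "1 \<le> k \<Longrightarrow> k + 1 \<le> n \<Longrightarrow> placed N n k X = restr N n (embed n (k-1) 2 X)"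
  unfolding placed_def by (rule restr_place2_embed)

lemma rmul_placed: "1 \<le> k \<Longrightarrow> k + 1 \<le> n \<Longrightarrow> rmul N n (placed N n k X) (placed N n k Y) = placed N n k (opmul N 2 X Y)"
  by (simp add: placed_embed rmul_embed)

lemma placed_opeq: "1 \<le> k \<Longrightarrow> k + 1 \<le> n \<Longrightarrow> opeq N 2 X Y \<Longrightarrow> placed N n k X = placed N n k Y"
  by (simp add: placed_embed restr_embed_opeq)

lemma placed_opid: "1 \<le> k \<Longrightarrow> k + 1 \<le> n \<Longrightarrow> placed N n k opid = rone N n"
  by (simp add: placed_embed restr_embed_opid)

lemma place2_add: "place2 k (opadd X Y) = opadd (place2 k X) (place2 k Y)"
  by (intro ext) (auto simp: place2_def opadd_def)

lemma place2_scale: "place2 k (opscale c X) = opscale c (place2 k X)"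
  by (intro ext) (auto simp: place2_def opscale_def)

lemma placed_opadd: "placed N n k (opadd X Y) = opadd (placed N n k X) (placed N n k Y)"
  by (simp add: placed_def place2_add restr_opadd)

lemma placed_opscale: "placed N n k (opscale c X) = opscale c (placed N n k X)"
  by (simp add: placed_def place2_scale restr_opscale)

lemma placed_far_commute: "1 \<le> k \<Longrightarrow> k + 1 < l \<Longrightarrow> l + 1 \<le> n \<Longrightarrow>
   rmul N n (placed N n k X) (placed N n l Y) = rmul N n (placed N n l Y) (placed N n k X)"
proof -
  assume a: "1 \<le> k" "k + 1 < l" "l + 1 \<le> n"
  have "rmul N n (embed n (k-1) 2 X) (embed n (l-1) 2 Y) = rmul N n (embed n (l-1) 2 Y) (embed n (k-1) 2 X)"
    using a by (intro rmul_embed_disjoint_commute) auto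
  then show ?thesis using a by (simp add: placed_embed)
qed

lemma placed_g_embed: "1 \<le> n \<Longrightarrow> placed_g N n g = restr N n (embed n 0 1 (\<lambda>a b. g (a!0) (b!0)))"
  unfolding placed_g_def by (rule restr_place1_embed)

lemma placed_g_commute: "2 \<le> k \<Longrightarrow> k + 1 \<le> n \<Longrightarrow> rmul N n (placed_g N n g) (placed N n k X) = rmul N n (placed N n k X) (placed_g N n g)"
proof -
  assume a: "2 \<le> k" "k + 1 \<le> n"
  have "rmul N n (embed n 0 1 (\<lambda>a b. g (a!0) (b!0))) (embed n (k-1) 2 X) = rmul N n (embed n (k-1) 2 X) (embed n 0 1 (\<lambda>a b. g (a!0) (b!0)))"
    using a by (intro rmul_embed_disjoint_commute) auto
  then show ?thesis using a by (simp add: placed_embed placed_g_embed)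
qed

lemma restr_embed3_opmul: "j + 3 \<le> n \<Longrightarrow>
   restr N n (embed n j 3 (opmul N 3 A B)) = rmul N n (restr N n (embed n j 3 A)) (restr N n (embed n j 3 B))"
  by (simp add: rmul_embed)

lemma restr_embed3_place2_first:
  "1 \<le> k \<Longrightarrow> Suc k < n \<Longrightarrow> restr N n (embed n (k - Suc 0) 3 (place2 (Suc 0) X)) = placed N n k X"
  using restr_embed3_place2[of "k - 1" n 1 N X] by (simp add: placed_embed)

lemma restr_embed3_place2_second:
  "1 \<le> k \<Longrightarrow> Suc k < n \<Longrightarrow> restr N n (embed n (k - Suc 0) 3 (place2 2 X)) = placed N n (Suc k) X"
  using restr_embed3_place2[of "k - 1" n 2 N X] by (simp add: placed_embed)

lemma restr_embed3_opprod: "j + 3 \<le> n \<Longrightarrow>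
   restr N n (embed n j 3 (opprod N 3 L)) = foldr (rmul N n) (map (\<lambda>A. restr N n (embed n j 3 A)) L) (rone N n)"
proof (induction L)
  case Nil then show ?case by (simp add: opprod_def restr_embed_opid)
next
  case (Cons A L)
  have "restr N n (embed n j 3 (opprod N 3 (A # L))) = rmul N n (restr N n (embed n j 3 A)) (restr N n (embed n j 3 (opprod N 3 L)))"
    using Cons.prems by (simp add: opprod_def restr_embed3_opmul)
  then show ?case using Cons by simp
qed

lemma restr_embed3_opeq:
  assumes "1 \<le> k" "k + 2 \<le> n" "opeq N 3 A B"
  shows "restr N n (embed n (k-1) 3 A) = restr N n (embed n (k-1) 3 B)"
  using assms by (intro restr_embed_opeq) auto

lemma placed_F_involutive:
  assumes "involutive_symmetry N F" "1 \<le> k" "k < n"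
  shows "rmul N n (placed N n k F) (placed N n k F) = rone N n"
proof -
  have "opeq N 2 (opmul N 2 F F) opid" using assms by (simp add: involutive_symmetry_def)
  then show ?thesis using assms by (simp add: rmul_placed placed_opid placed_opeq[of k n N _ opid])
qed

lemma placed_braid:
  assumes "braiding N F" "1 \<le> k" "k + 1 < n"
  shows "rmul N n (placed N n k F) (rmul N n (placed N n (k+1) F) (placed N n k F))
       = rmul N n (placed N n (k+1) F) (rmul N n (placed N n k F) (placed N n (k+1) F))"
proof -
  have "opeq N 3 (opmul N 3 (place2 1 F) (opmul N 3 (place2 2 F) (place2 1 F)))
              (opmul N 3 (place2 2 F) (opmul N 3 (place2 1 F) (place2 2 F)))"
    using assms by (simp add: braiding_def)
  from restr_embed3_opeq[of k n, OF assms(2) _ this] assms show ?thesis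
    by (simp add: restr_embed3_opmul restr_embed3_place2_first restr_embed3_place2_second del: rmul_restr_left rmul_restr_right)
qed

lemma placed_compatible:
  assumes "compatible N X F" "1 \<le> k" "k + 1 < n"
  shows "rmul N n (placed N n k X) (rmul N n (placed N n (k+1) F) (placed N n k F))
       = rmul N n (placed N n (k+1) F) (rmul N n (placed N n k F) (placed N n (k+1) X))"
    and "rmul N n (placed N n (k+1) X) (rmul N n (placed N n k F) (placed N n (k+1) F))
       = rmul N n (placed N n k F) (rmul N n (placed N n (k+1) F) (placed N n k X))"
proof -
  have c1: "opeq N 3 (opprod N 3 [place2 1 X, place2 2 F, place2 1 F])
              (opprod N 3 [place2 2 F, place2 1 F, place2 2 X])"
   and c2: "opeq N 3 (opprod N 3 [place2 2 X, place2 1 F, place2 2 F])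
              (opprod N 3 [place2 1 F, place2 2 F, place2 1 X])"
    using assms by (auto simp: compatible_def)
  from restr_embed3_opeq[of k n, OF assms(2) _ c1] assms show "rmul N n (placed N n k X) (rmul N n (placed N n (k+1) F) (placed N n k F))
       = rmul N n (placed N n (k+1) F) (rmul N n (placed N n k F) (placed N n (k+1) X))"
    by (simp add: restr_embed3_opprod restr_embed3_place2_first restr_embed3_place2_second del: rmul_restr_left rmul_restr_right)
  from restr_embed3_opeq[of k n, OF assms(2) _ c2] assms show "rmul N n (placed N n (k+1) X) (rmul N n (placed N n k F) (placed N n (k+1) F))
       = rmul N n (placed N n k F) (rmul N n (placed N n (k+1) F) (placed N n k X))"
    by (simp add: restr_embed3_opprod restr_embed3_place2_first restr_embed3_place2_second del: rmul_restr_left rmul_restr_right)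
qed

definition moves_along :: "nat \<Rightarrow> nat \<Rightarrow> op \<Rightarrow> op \<Rightarrow> bool" where
  "moves_along N n F X \<longleftrightarrow> (\<forall>k. 1 \<le> k \<and> k + 1 < n \<longrightarrow>
     rmul N n (placed N n (k+1) X) (rmul N n (placed N n k F) (placed N n (k+1) F))
       = rmul N n (placed N n k F) (rmul N n (placed N n (k+1) F) (placed N n k X)))"

lemma coxeter_gens_concrete:
  assumes "involutive_symmetry N F"
  shows "coxeter_gens (rmul N n) (rone N n) (rops N n) n (\<lambda>k. placed N n k F)"
proof -
  interpret carrier_monoid "rmul N n" "rone N n" "rops N n" by (rule carrier_monoid_rmul)
  have br: "braiding N F" using assms by (simp add: involutive_symmetry_def)
  show ?thesis
  proof (unfold_locales)
    fix k assume "1 \<le> k" "k < n"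
    then show "rmul N n (placed N n k F) (placed N n k F) = rone N n" using placed_F_involutive[OF assms] by simp
  next
    fix k assume "1 \<le> k" "k + 1 < n"
    then show "rmul N n (placed N n k F) (rmul N n (placed N n (k+1) F) (placed N n k F))
       = rmul N n (placed N n (k+1) F) (rmul N n (placed N n k F) (placed N n (k+1) F))"
      using placed_braid[OF br] by simp
  next
    fix k l assume "1 \<le> k" "k + 1 < l" "l < n"
    then show "rmul N n (placed N n k F) (placed N n l F) = rmul N n (placed N n l F) (placed N n k F)"
      by (intro placed_far_commute) auto
  qed simp
qed

lemma placed_gens_concrete:
  assumes "involutive_symmetry N F"
  shows "placed_gens (rmul N n) (rone N n) (rops N n) n (\<lambda>k. placed N n k F) (placed N n) (placed_g N n g) (moves_along N n F)"
proof -
  interpret coxeter_gens "rmul N n" "rone N n" "rops N n" n "\<lambda>k. placed N n k F" by (rule coxeter_gens_concrete[OF assms])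
  show ?thesis
  proof (unfold_locales)
    fix j X assume "3 \<le> j" "j < n"
    then show "rmul N n (placed N n j F) (placed N n 1 X) = rmul N n (placed N n 1 X) (placed N n j F)"
      using placed_far_commute[of 1 j n N X F] by simp
  next
    fix k l X Y assume "1 \<le> k" "k + 1 < l" "l < n"
    then show "rmul N n (placed N n k X) (placed N n l Y) = rmul N n (placed N n l Y) (placed N n k X)"
      by (intro placed_far_commute) auto
  next
    fix X k assume "moves_along N n F X" "1 \<le> k" "k + 1 < n"
    then show "rmul N n (placed N n (k+1) X) (rmul N n (placed N n k F) (placed N n (k+1) F))
       = rmul N n (placed N n k F) (rmul N n (placed N n (k+1) F) (placed N n k X))"
      by (simp add: moves_along_def)
  next
    fix j assume "2 \<le> j" "j < n"
    then show "rmul N n (placed N n j F) (placed_g N n g) = rmul N n (placed_g N n g) (placed N n j F)"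
      using placed_g_commute[of j n N g F] by simp
  next
    fix k X assume "2 \<le> k" "k < n"
    then show "rmul N n (placed_g N n g) (placed N n k X) = rmul N n (placed N n k X) (placed_g N n g)"
      using placed_g_commute[of k n N g X] by simp
  qed simp_all
qed

section \<open>The spectral R-matrices\<close>

text \<open>R(u,v) = R + \<beta>(u,v) I and f(u,v) = f_const + \<beta>(u,v), while R^2 = \<kappa> R + I both for an
  involutive symmetry (\<kappa> = 0) and for a Hecke symmetry (\<kappa> = q - q^{-1}).\<close>

definition beta :: "bool \<Rightarrow> complex \<Rightarrow> complex \<Rightarrow> complex \<Rightarrow> complex" where
  "beta trig q u v = (if trig then - ((q - inverse q) * u / (u - v)) else - (1 / (u - v)))"

definition kappa :: "bool \<Rightarrow> complex \<Rightarrow> complex" where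
  "kappa trig q = (if trig then q - inverse q else 0)"

definition f_const :: "bool \<Rightarrow> complex \<Rightarrow> complex" where
  "f_const trig q = (if trig then q else 1)"

lemma Ruv_eq_beta: "Ruv trig q R u v = opadd R (opscale (beta trig q u v) opid)"
  by (simp add: Ruv_def beta_def)

lemma fuv_eq_beta: "fuv trig q u v = f_const trig q + beta trig q u v"
  by (simp add: fuv_def beta_def f_const_def)

lemma beta_yang_baxter:
  assumes "x \<noteq> y" "x \<noteq> z" "y \<noteq> z"
  shows "beta trig q x z * kappa trig q + beta trig q x z * beta trig q y z
       + beta trig q x y * beta trig q x z - beta trig q x y * beta trig q y z = 0"
proof -
  have *: "x - y \<noteq> 0" "x - z \<noteq> 0" "y - z \<noteq> 0" using assms by auto
  have trig: "(- (K * x / (x - z))) * K + (- (K * x / (x - z))) * (- (K * y / (y - z)))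
      + (- (K * x / (x - y))) * (- (K * x / (x - z))) - (- (K * x / (x - y))) * (- (K * y / (y - z))) = 0"
    for K using * by (simp add: divide_simps) (simp add: algebra_simps)
  have rat: "(- (1 / (x - z))) * (- (1 / (y - z))) + (- (1 / (x - y))) * (- (1 / (x - z)))
      - (- (1 / (x - y))) * (- (1 / (y - z))) = 0"
    using * by (simp add: divide_simps)
  show ?thesis using trig[of "q - inverse q"] rat by (simp add: beta_def kappa_def)
qed

lemma beta_antisym:
  assumes "x \<noteq> y"
  shows "beta trig q x y + beta trig q y x = - kappa trig q"
proof -
  have "x - y \<noteq> 0" "y - x \<noteq> 0" using assms by auto
  then have "- (K * x / (x - y)) + - (K * y / (y - x)) = - K" "- (1 / (x - y)) + - (1 / (y - x)) = 0" for K
    by (simp_all add: divide_simps) (simp add: algebra_simps)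
  then show ?thesis by (simp add: beta_def kappa_def)
qed

lemma f_const_kappa: "trig \<longrightarrow> q \<noteq> 0 \<Longrightarrow> f_const trig q * f_const trig q - f_const trig q * kappa trig q = 1"
  by (cases trig) (auto simp: f_const_def kappa_def field_simps)

lemma fuv_unitarity:
  assumes "x \<noteq> y" "trig \<longrightarrow> q \<noteq> 0" "fuv trig q x y \<noteq> 0" "fuv trig q y x \<noteq> 0"
  shows "inverse (fuv trig q x y) * inverse (fuv trig q y x) * (1 + beta trig q x y * beta trig q y x) = 1"
proof -
  have "fuv trig q x y * fuv trig q y x = 1 + beta trig q x y * beta trig q y x"
  proof -
    have "fuv trig q x y * fuv trig q y x
        = f_const trig q * f_const trig q + f_const trig q * (beta trig q x y + beta trig q y x) + beta trig q x y * beta trig q y x"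
      by (simp add: fuv_eq_beta algebra_simps)
    also have "\<dots> = 1 + beta trig q x y * beta trig q y x"
      using beta_antisym[OF assms(1)] f_const_kappa[OF assms(2)] by (simp add: algebra_simps)
    finally show ?thesis .
  qed
  then have "inverse (fuv trig q x y) * inverse (fuv trig q y x) * (1 + beta trig q x y * beta trig q y x)
     = inverse (fuv trig q x y) * inverse (fuv trig q y x) * (fuv trig q x y * fuv trig q y x)" by simp
  also have "\<dots> = 1" using assms(3,4) by (simp add: field_simps)
  finally show ?thesis .
qed

definition plus_id :: "nat \<Rightarrow> nat \<Rightarrow> op \<Rightarrow> complex \<Rightarrow> op" where
  "plus_id N n X c = opadd X (opscale c (rone N n))"

lemma opscale_opscale[simp]: "opscale c (opscale d A) = opscale (c * d) A"
  by (simp add: opscale_def fun_eq_iff)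

lemma restr_plus_id[simp]: "restr N n (plus_id N n X c) = plus_id N n (restr N n X) c"
  by (simp add: plus_id_def restr_opadd restr_opscale)

lemma plus_id_rops[simp]: "X \<in> rops N n \<Longrightarrow> plus_id N n X c \<in> rops N n"
  by (simp add: rops_def)

lemma opscale_rops[simp]: "X \<in> rops N n \<Longrightarrow> opscale c X \<in> rops N n"
  by (simp add: rops_def restr_opscale)

lemma rops_restr: "X \<in> rops N n \<Longrightarrow> restr N n X = X" by (simp add: rops_def)

lemma intertwines_plus_id:
  assumes "Z \<in> rops N n" "rmul N n Z Y = rmul N n X Z"
  shows "rmul N n Z (plus_id N n Y c) = rmul N n (plus_id N n X c) Z"
  using assms by (simp add: plus_id_def rmul_opadd_left rmul_opadd_right rmul_opscale_left rmul_opscale_right rops_restr)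

lemma placed_calR:
  assumes "1 \<le> k" "k + 1 \<le> n"
  shows "placed N n k (calR N trig q R F u v)
       = opscale (inverse (fuv trig q u v)) (rmul N n (plus_id N n (placed N n k R) (beta trig q u v)) (placed N n k F))"
proof -
  have "placed N n k (calR N trig q R F u v)
      = opscale (inverse (fuv trig q u v)) (rmul N n (placed N n k (Ruv trig q R u v)) (placed N n k F))"
    using assms by (simp add: calR_def placed_opscale rmul_placed)
  also have "placed N n k (Ruv trig q R u v) = plus_id N n (placed N n k R) (beta trig q u v)"
    using assms by (simp add: Ruv_eq_beta placed_opadd placed_opscale placed_opid plus_id_def)
  finally show ?thesis .
qed

lemma placed_opzero: "placed N n k opzero = opzero"
  by (simp add: placed_def place2_def opzero_def restr_def fun_eq_iff)

lemma rmul_cong2: "rmul N n A B = rmul N n C D \<Longrightarrow> rmul N n A (rmul N n B Z) = rmul N n C (rmul N n D Z)"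
  by (metis rmul_assoc)

lemma rmul_cancel: "rmul N n A B = rone N n \<Longrightarrow> Z \<in> rops N n \<Longrightarrow> rmul N n A (rmul N n B Z) = Z"
  by (metis rmul_assoc rmul_rone_left rops_restr)

text \<open>Twisting by F preserves the Yang--Baxter relation; A, B, C play the role of R(x,y), R(x,z),
  R(y,z) at the positions indicated by their index, and s1, s2 that of F_{12}, F_{23}.\<close>

lemma (in carrier_monoid) twisted_yang_baxter:
  assumes inv: "s2 \<odot> s2 = e" and braid: "s1 \<odot> s2 \<odot> s1 = s2 \<odot> s1 \<odot> s2"
    and A: "s1 \<odot> s2 \<odot> A1 = A2 \<odot> s1 \<odot> s2" and B: "s1 \<odot> s2 \<odot> B1 = B2 \<odot> s1 \<odot> s2"
    and C: "s2 \<odot> s1 \<odot> C2 = C1 \<odot> s2 \<odot> s1"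
    and yb: "A1 \<odot> B2 \<odot> C1 = C2 \<odot> B1 \<odot> A2"
  shows "A1 \<odot> s1 \<odot> s2 \<odot> B1 \<odot> s1 \<odot> s2 \<odot> C2 \<odot> s2 = C2 \<odot> s2 \<odot> s2 \<odot> B1 \<odot> s1 \<odot> s2 \<odot> A1 \<odot> s1"
proof -
  have ext: "x \<odot> y \<odot> w \<odot> z = x' \<odot> y' \<odot> w' \<odot> z" if "x \<odot> y \<odot> w = x' \<odot> y' \<odot> w'" for x y w x' y' w' z
    using mult_right_cong[OF that, of z] by simp
  have cancel: "s2 \<odot> s2 \<odot> z = z" if "z \<in> M" for z using inv that eq_mult_right[OF inv] by simp
  have "A1 \<odot> s1 \<odot> s2 \<odot> B1 \<odot> s1 \<odot> s2 \<odot> C2 \<odot> s2 = A1 \<odot> B2 \<odot> s1 \<odot> s2 \<odot> s1 \<odot> s2 \<odot> C2 \<odot> s2"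
    using ext[OF B] by simp
  also have "\<dots> = A1 \<odot> B2 \<odot> s2 \<odot> s1 \<odot> s2 \<odot> s2 \<odot> C2 \<odot> s2" using ext[OF braid] by simp
  also have "\<dots> = A1 \<odot> B2 \<odot> s2 \<odot> s1 \<odot> C2 \<odot> s2" using cancel by simp
  also have "\<dots> = A1 \<odot> B2 \<odot> C1 \<odot> s2 \<odot> s1 \<odot> s2" using ext[OF C] by simp
  also have "\<dots> = C2 \<odot> B1 \<odot> A2 \<odot> s2 \<odot> s1 \<odot> s2" using ext[OF yb] by simp
  also have "\<dots> = C2 \<odot> B1 \<odot> A2 \<odot> s1 \<odot> s2 \<odot> s1" using braid by simp
  also have "\<dots> = C2 \<odot> B1 \<odot> s1 \<odot> s2 \<odot> A1 \<odot> s1" using ext[OF A] by simp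
  also have "\<dots> = C2 \<odot> s2 \<odot> s2 \<odot> B1 \<odot> s1 \<odot> s2 \<odot> A1 \<odot> s1" using cancel by simp
  finally show ?thesis .
qed

locale rmatrix_setting =
  fixes N n :: nat and trig :: bool and q :: complex and R F :: op and g :: "nat \<Rightarrow> nat \<Rightarrow> complex"
  assumes F_involutive: "involutive_symmetry N F" and R_compatible: "compatible N R F"
    and R_braiding: "braiding N R"
    and R_symmetry: "(\<not> trig \<and> involutive_symmetry N R) \<or> (trig \<and> hecke_symmetry N q R)"
begin

sublocale Q: placed_gens "rmul N n" "rone N n" "rops N n" n "\<lambda>k. placed N n k F" "placed N n" "placed_g N n g" "moves_along N n F"
  by (rule placed_gens_concrete[OF F_involutive])

lemma q_nonzero: "trig \<longrightarrow> q \<noteq> 0"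
  using R_symmetry by (auto simp: hecke_symmetry_def)

lemma placed_R_quadratic:
  assumes k: "1 \<le> k" "k + 1 \<le> n"
  shows "rmul N n (placed N n k R) (placed N n k R) = opadd (opscale (kappa trig q) (placed N n k R)) (rone N n)"
proof (cases trig)
  case False
  then have "opeq N 2 (opmul N 2 R R) opid" using R_symmetry by (auto simp: involutive_symmetry_def)
  then have "rmul N n (placed N n k R) (placed N n k R) = rone N n"
    using k by (simp add: rmul_placed placed_opid placed_opeq[of k n N _ opid])
  then show ?thesis using False by (simp add: kappa_def opadd_def opscale_def fun_eq_iff)
next
  case True
  then have h: "opeq N 2 (opmul N 2 (opadd R (opscale (-q) opid)) (opadd R (opscale (inverse q) opid))) opzero"
    and qn: "q \<noteq> 0" using R_symmetry by (auto simp: hecke_symmetry_def)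
  have "placed N n k (opmul N 2 (opadd R (opscale (-q) opid)) (opadd R (opscale (inverse q) opid))) = opzero"
    using placed_opeq[OF k h] by (simp add: placed_opzero)
  then have z: "rmul N n (plus_id N n (placed N n k R) (-q)) (plus_id N n (placed N n k R) (inverse q)) = opzero"
    using k by (simp add: rmul_placed[symmetric] placed_opadd placed_opscale placed_opid plus_id_def)
  have "rmul N n (plus_id N n (placed N n k R) (-q)) (plus_id N n (placed N n k R) (inverse q))
      = opadd (rmul N n (placed N n k R) (placed N n k R))
          (opadd (opscale (inverse q - q) (placed N n k R)) (opscale (- (q * inverse q)) (rone N n)))"
    by (simp add: plus_id_def rmul_opadd_left rmul_opadd_right rmul_opscale_left rmul_opscale_right restr_opadd restr_opscale)
      (simp add: opadd_def opscale_def fun_eq_iff algebra_simps)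
  then have "\<And>xs ys. rmul N n (placed N n k R) (placed N n k R) xs ys
        + ((inverse q - q) * placed N n k R xs ys + (- (q * inverse q)) * rone N n xs ys) = 0"
    using z by (simp add: opadd_def opscale_def opzero_def fun_eq_iff)
  then show ?thesis using True qn
    by (simp add: kappa_def opadd_def opscale_def fun_eq_iff algebra_simps eq_neg_iff_add_eq_0[symmetric])
qed

lemma placed_R_braid:
  assumes "1 \<le> k" "k + 1 < n"
  shows "rmul N n (placed N n k R) (rmul N n (placed N n (k+1) R) (placed N n k R))
       = rmul N n (placed N n (k+1) R) (rmul N n (placed N n k R) (placed N n (k+1) R))"
  using placed_braid[OF R_braiding assms] .

lemma calR_moves_along: "moves_along N n F (calR N trig q R F x y)"
  unfolding moves_along_def
proof (intro allI impI)
  fix k assume k: "1 \<le> k \<and> k + 1 < n"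
  define Z where "Z = rmul N n (placed N n k F) (placed N n (k+1) F)"
  define al where "al = inverse (fuv trig q x y)"
  define be where "be = beta trig q x y"
  have ZM: "Z \<in> rops N n" by (simp add: Z_def)
  have c2: "rmul N n Z (placed N n k R) = rmul N n (placed N n (k+1) R) Z"
    using placed_compatible(2)[OF R_compatible, of k n] k by (simp add: Z_def)
  have iw: "rmul N n Z (plus_id N n (placed N n k R) be) = rmul N n (plus_id N n (placed N n (k+1) R) be) Z"
    by (rule intertwines_plus_id[OF ZM c2])
  have br: "rmul N n (placed N n (Suc k) F) (rmul N n (placed N n k F) (placed N n (Suc k) F))
          = rmul N n (placed N n k F) (rmul N n (placed N n (Suc k) F) (placed N n k F))"
    using Q.s_braid[of k] k by simp
  have e1: "placed N n k (calR N trig q R F x y) = opscale al (rmul N n (plus_id N n (placed N n k R) be) (placed N n k F))"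
    using k by (simp add: placed_calR al_def be_def)
  have e2: "placed N n (Suc k) (calR N trig q R F x y) = opscale al (rmul N n (plus_id N n (placed N n (Suc k) R) be) (placed N n (Suc k) F))"
    using k by (simp add: placed_calR al_def be_def)
  have "rmul N n (placed N n (k+1) (calR N trig q R F x y)) (rmul N n (placed N n k F) (placed N n (k+1) F))
      = opscale al (rmul N n (plus_id N n (placed N n (k+1) R) be) (rmul N n (placed N n (k+1) F) (rmul N n (placed N n k F) (placed N n (k+1) F))))"
    by (simp add: e2 rmul_opscale_left)
  also have "\<dots> = opscale al (rmul N n (rmul N n (plus_id N n (placed N n (k+1) R) be) Z) (placed N n k F))"
    by (simp add: br Z_def)
  also have "\<dots> = opscale al (rmul N n (rmul N n Z (plus_id N n (placed N n k R) be)) (placed N n k F))"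
    by (simp only: iw)
  also have "\<dots> = rmul N n (placed N n k F) (rmul N n (placed N n (k+1) F) (placed N n k (calR N trig q R F x y)))"
    by (simp add: e1 rmul_opscale_right Z_def)
  finally show "rmul N n (placed N n (k+1) (calR N trig q R F x y)) (rmul N n (placed N n k F) (placed N n (k+1) F))
      = rmul N n (placed N n k F) (rmul N n (placed N n (k+1) F) (placed N n k (calR N trig q R F x y)))" .
qed

lemma plus_id_yang_baxter:
  assumes n3: "3 \<le> n" and d: "x \<noteq> y" "x \<noteq> z" "y \<noteq> z"
  shows "rmul N n (plus_id N n (placed N n 1 R) (beta trig q x y)) (rmul N n (plus_id N n (placed N n 2 R) (beta trig q x z)) (plus_id N n (placed N n 1 R) (beta trig q y z)))
       = rmul N n (plus_id N n (placed N n 2 R) (beta trig q y z)) (rmul N n (plus_id N n (placed N n 1 R) (beta trig q x z)) (plus_id N n (placed N n 2 R) (beta trig q x y)))"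
proof -
  define a where "a = beta trig q x y"
  define b where "b = beta trig q x z"
  define c where "c = beta trig q y z"
  define K where "K = kappa trig q"
  have key: "b * K + b * c + a * b - a * c = 0" using beta_yang_baxter[OF d, of trig q] by (simp add: a_def b_def c_def K_def)
  have sq1: "rmul N n (placed N n (Suc 0) R) (placed N n (Suc 0) R) = opadd (opscale K (placed N n (Suc 0) R)) (rone N n)"
    using placed_R_quadratic[of 1] n3 by (simp add: K_def)
  have sq2: "rmul N n (placed N n 2 R) (placed N n 2 R) = opadd (opscale K (placed N n 2 R)) (rone N n)"
    using placed_R_quadratic[of 2] n3 by (simp add: K_def)
  have br: "rmul N n (placed N n 2 R) (rmul N n (placed N n (Suc 0) R) (placed N n 2 R)) = rmul N n (placed N n (Suc 0) R) (rmul N n (placed N n 2 R) (placed N n (Suc 0) R))"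
    using placed_R_braid[of 1] n3 by (simp add: numeral_2_eq_2)
  have br': "\<And>Z. rmul N n (placed N n 2 R) (rmul N n (placed N n 2 R) Z) = rmul N n (opadd (opscale K (placed N n 2 R)) (rone N n)) Z"
    using sq2 by (metis rmul_assoc)
  have br1': "\<And>Z. rmul N n (placed N n (Suc 0) R) (rmul N n (placed N n (Suc 0) R) Z) = rmul N n (opadd (opscale K (placed N n (Suc 0) R)) (rone N n)) Z"
    using sq1 by (metis rmul_assoc)
  have brz: "\<And>Z. rmul N n (placed N n 2 R) (rmul N n (placed N n (Suc 0) R) (rmul N n (placed N n 2 R) Z)) = rmul N n (placed N n (Suc 0) R) (rmul N n (placed N n 2 R) (rmul N n (placed N n (Suc 0) R) Z))"
    using br by (metis rmul_assoc)
  show ?thesis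
    unfolding a_def[symmetric] b_def[symmetric] c_def[symmetric]
    by (simp add: plus_id_def rmul_opadd_left rmul_opadd_right rmul_opscale_left rmul_opscale_right
        restr_opadd restr_opscale rmul_assoc sq1 sq2 br br' br1' brz)
      (simp add: opadd_def opscale_def fun_eq_iff, intro allI, use key in algebra)
qed

lemma calR_yang_baxter_base:
  assumes n3: "3 \<le> n" and d: "x \<noteq> y" "x \<noteq> z" "y \<noteq> z"
  defines "X1 \<equiv> calR N trig q R F x y" and "X2 \<equiv> calR N trig q R F x z" and "X3 \<equiv> calR N trig q R F y z"
  shows "rmul N n (placed N n 1 X1) (rmul N n (rmul N n (placed N n 2 F) (rmul N n (placed N n 1 X2) (placed N n 2 F))) (placed N n 2 X3))
       = rmul N n (placed N n 2 X3) (rmul N n (rmul N n (placed N n 2 F) (rmul N n (placed N n 1 X2) (placed N n 2 F))) (placed N n 1 X1))"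
proof -
  define s1 where "s1 = placed N n (Suc 0) F"
  define s2 where "s2 = placed N n 2 F"
  define R1 where "R1 = placed N n (Suc 0) R"
  define R2 where "R2 = placed N n 2 R"
  define a where "a = beta trig q x y"
  define b where "b = beta trig q x z"
  define c where "c = beta trig q y z"
  define A1 where "A1 = plus_id N n R1 a"
  define A2 where "A2 = plus_id N n R2 a"
  define B1 where "B1 = plus_id N n R1 b"
  define B2 where "B2 = plus_id N n R2 b"
  define C1 where "C1 = plus_id N n R1 c"
  define C2 where "C2 = plus_id N n R2 c"
  define al1 where "al1 = inverse (fuv trig q x y)"
  define al2 where "al2 = inverse (fuv trig q x z)"
  define al3 where "al3 = inverse (fuv trig q y z)"
  have e1: "placed N n (Suc 0) X1 = opscale al1 (rmul N n A1 s1)"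
    using n3 by (simp add: X1_def placed_calR al1_def A1_def R1_def a_def s1_def)
  have e2: "placed N n (Suc 0) X2 = opscale al2 (rmul N n B1 s1)"
    using n3 by (simp add: X2_def placed_calR al2_def B1_def R1_def b_def s1_def)
  have e3: "placed N n 2 X3 = opscale al3 (rmul N n C2 s2)"
    using n3 by (simp add: X3_def placed_calR al3_def C2_def R2_def c_def s2_def)
  have c2: "rmul N n (rmul N n s1 s2) R1 = rmul N n R2 (rmul N n s1 s2)"
    using placed_compatible(2)[OF R_compatible, of 1 n] n3 by (simp add: s1_def s2_def R1_def R2_def numeral_2_eq_2)
  have c1: "rmul N n (rmul N n s2 s1) R2 = rmul N n R1 (rmul N n s2 s1)"
    using placed_compatible(1)[OF R_compatible, of 1 n] n3 by (simp add: s1_def s2_def R1_def R2_def numeral_2_eq_2)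
  have i1: "rmul N n s1 (rmul N n s2 B1) = rmul N n B2 (rmul N n s1 s2)"
    using intertwines_plus_id[OF _ c2, of b] by (simp add: B1_def B2_def)
  have i3: "rmul N n s1 (rmul N n s2 A1) = rmul N n A2 (rmul N n s1 s2)"
    using intertwines_plus_id[OF _ c2, of a] by (simp add: A1_def A2_def)
  have i2: "rmul N n s2 (rmul N n s1 C2) = rmul N n C1 (rmul N n s2 s1)"
    using intertwines_plus_id[OF _ c1, of c] by (simp add: C1_def C2_def)
  have brF: "rmul N n s1 (rmul N n s2 s1) = rmul N n s2 (rmul N n s1 s2)"
    using Q.s_braid[of 1] n3 by (simp add: s1_def s2_def numeral_2_eq_2)
  have inv2: "rmul N n s2 s2 = rone N n" using Q.s_inv[of 2] n3 by (simp add: s2_def)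
  have yb: "rmul N n A1 (rmul N n B2 C1) = rmul N n C2 (rmul N n B1 A2)"
    using plus_id_yang_baxter[OF n3 d] by (simp add: A1_def A2_def B1_def B2_def C1_def C2_def R1_def R2_def a_def b_def c_def)
  have W: "rmul N n A1 (rmul N n s1 (rmul N n s2 (rmul N n B1 (rmul N n s1 (rmul N n s2 (rmul N n C2 s2))))))
      = rmul N n C2 (rmul N n s2 (rmul N n s2 (rmul N n B1 (rmul N n s1 (rmul N n s2 (rmul N n A1 s1))))))"
    by (rule Q.twisted_yang_baxter[OF inv2 brF i3 i1 i2 yb])
  have L: "rmul N n (placed N n 1 X1) (rmul N n (rmul N n (placed N n 2 F) (rmul N n (placed N n 1 X2) (placed N n 2 F))) (placed N n 2 X3))
     = opscale (al1 * (al2 * al3)) (rmul N n A1 (rmul N n s1 (rmul N n s2 (rmul N n B1 (rmul N n s1 (rmul N n s2 (rmul N n C2 s2)))))))"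
    by (simp add: e1 e2 e3 rmul_opscale_left rmul_opscale_right rmul_assoc s2_def[symmetric] mult_ac)
  have R: "rmul N n (placed N n 2 X3) (rmul N n (rmul N n (placed N n 2 F) (rmul N n (placed N n 1 X2) (placed N n 2 F))) (placed N n 1 X1))
     = opscale (al1 * (al2 * al3)) (rmul N n C2 (rmul N n s2 (rmul N n s2 (rmul N n B1 (rmul N n s1 (rmul N n s2 (rmul N n A1 s1)))))))"
    by (simp add: e1 e2 e3 rmul_opscale_left rmul_opscale_right rmul_assoc s2_def[symmetric] mult_ac)
  show ?thesis unfolding L R W ..
qed

lemma calR_unitary_base:
  assumes n2: "2 \<le> n" and xy: "x \<noteq> y" and f1: "fuv trig q x y \<noteq> 0" and f2: "fuv trig q y x \<noteq> 0"
  shows "rmul N n (placed N n 1 (calR N trig q R F x y)) (rmul N n (placed N n 1 F) (rmul N n (placed N n 1 (calR N trig q R F y x)) (placed N n 1 F)))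
       = rone N n"
proof -
  define s1 where "s1 = placed N n (Suc 0) F"
  define R1 where "R1 = placed N n (Suc 0) R"
  define a where "a = beta trig q x y"
  define a' where "a' = beta trig q y x"
  define K where "K = kappa trig q"
  define al where "al = inverse (fuv trig q x y)"
  define al' where "al' = inverse (fuv trig q y x)"
  have e1: "placed N n (Suc 0) (calR N trig q R F x y) = opscale al (rmul N n (plus_id N n R1 a) s1)"
    using n2 by (simp add: placed_calR al_def R1_def a_def s1_def)
  have e2: "placed N n (Suc 0) (calR N trig q R F y x) = opscale al' (rmul N n (plus_id N n R1 a') s1)"
    using n2 by (simp add: placed_calR al'_def R1_def a'_def s1_def)
  have inv1: "rmul N n s1 s1 = rone N n" using Q.s_inv[of 1] n2 by (simp add: s1_def)
  have sq1: "rmul N n R1 R1 = opadd (opscale K R1) (rone N n)"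
    using placed_R_quadratic[of 1] n2 by (simp add: K_def R1_def)
  have hR1: "restr N n R1 = R1" by (simp add: R1_def)
  have sc1: "a + a' = - K" using beta_antisym[OF xy] by (simp add: a_def a'_def K_def)
  have sc2: "al * al' * (1 + a * a') = 1" using fuv_unitarity[OF xy q_nonzero f1 f2] by (simp add: al_def al'_def a_def a'_def)
  have "rmul N n (placed N n 1 (calR N trig q R F x y)) (rmul N n (placed N n 1 F) (rmul N n (placed N n 1 (calR N trig q R F y x)) (placed N n 1 F)))
      = opscale (al * al') (rmul N n (plus_id N n R1 a) (rmul N n s1 (rmul N n s1 (rmul N n (plus_id N n R1 a') (rmul N n s1 s1)))))"
    by (simp add: e1 e2 rmul_opscale_left rmul_opscale_right rmul_assoc s1_def[symmetric] mult_ac)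
  also have "\<dots> = opscale (al * al') (rmul N n (plus_id N n R1 a) (plus_id N n R1 a'))"
    using rmul_cancel[OF inv1] inv1 by (simp add: R1_def)
  also have "\<dots> = opadd (opscale (al * al' * (K + a + a')) R1) (opscale (al * al' * (1 + a * a')) (rone N n))"
    using hR1 by (simp add: plus_id_def rmul_opadd_left rmul_opadd_right rmul_opscale_left rmul_opscale_right restr_opadd restr_opscale sq1)
      (simp add: opadd_def opscale_def fun_eq_iff algebra_simps)
  also have "\<dots> = rone N n"
  proof -
    have sc1': "K + a + a' = 0" using sc1 by (simp add: add.assoc)
    show ?thesis using sc1' sc2 by (simp add: opadd_def opscale_def fun_eq_iff)
  qed
  finally show ?thesis .
qed

lemma calR_bar1_commute_base:
  assumes n2: "2 \<le> n"
    and R_commute: "rmul N n (rmul N n (placed_g N n g) (Q.bar1 2)) (placed N n 1 R) = rmul N n (placed N n 1 R) (rmul N n (placed_g N n g) (Q.bar1 2))"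
    and G_commute: "rmul N n (placed_g N n g) (Q.bar1 2) = rmul N n (Q.bar1 2) (placed_g N n g)"
  shows "rmul N n (rmul N n (placed_g N n g) (Q.bar1 2)) (placed N n 1 (calR N trig q R F x y))
       = rmul N n (placed N n 1 (calR N trig q R F x y)) (rmul N n (placed_g N n g) (Q.bar1 2))"
proof -
  define s1 where "s1 = placed N n (Suc 0) F"
  define R1 where "R1 = placed N n (Suc 0) R"
  define G where "G = placed_g N n g"
  define Z where "Z = rmul N n G (Q.bar1 2)"
  have g2: "Q.bar1 2 = rmul N n s1 (rmul N n G s1)" using Q.bar1_2 by (simp add: s1_def G_def numeral_2_eq_2)
  have inv1: "rmul N n s1 s1 = rone N n" using Q.s_inv[of 1] n2 by (simp add: s1_def)
  have ZM: "Z \<in> rops N n" by (simp add: Z_def)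
  have zs: "rmul N n Z s1 = rmul N n s1 Z"
  proof -
    have "rmul N n s1 Z = rmul N n (rmul N n (Q.bar1 2) G) s1"
      unfolding Z_def g2 by (simp only: rmul_assoc)
    also have "rmul N n (Q.bar1 2) G = Z" using G_commute by (simp only: Z_def G_def)
    finally show ?thesis ..
  qed
  have zr: "rmul N n Z R1 = rmul N n R1 Z" using R_commute by (simp only: Z_def G_def R1_def One_nat_def)
  have za: "rmul N n Z (plus_id N n R1 (beta trig q x y)) = rmul N n (plus_id N n R1 (beta trig q x y)) Z"
    by (rule intertwines_plus_id[OF ZM zr])
  have e1: "placed N n (Suc 0) (calR N trig q R F x y) = opscale (inverse (fuv trig q x y)) (rmul N n (plus_id N n R1 (beta trig q x y)) s1)"
    using n2 by (simp add: placed_calR R1_def s1_def)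
  have "rmul N n Z (rmul N n (plus_id N n R1 (beta trig q x y)) s1) = rmul N n (plus_id N n R1 (beta trig q x y)) (rmul N n Z s1)"
    using rmul_cong2[OF za, of s1] by (simp only: rmul_assoc)
  also have "\<dots> = rmul N n (rmul N n (plus_id N n R1 (beta trig q x y)) s1) Z" using zs by (simp only: rmul_assoc)
  finally have "rmul N n Z (placed N n (Suc 0) (calR N trig q R F x y)) = rmul N n (placed N n (Suc 0) (calR N trig q R F x y)) Z"
    by (simp only: e1 rmul_opscale_left rmul_opscale_right)
  then show ?thesis by (simp only: Z_def G_def One_nat_def)
qed

end

section \<open>Compatibility of the difference system\<close>

lemma opapp_opapp: "opapp N n A (opapp N n B v) = opapp N n (opmul N n A B) v"
proof (rule ext)
  fix xs
  have "opapp N n A (opapp N n B v) xs = (\<Sum>ys\<in>tidx N n. \<Sum>zs\<in>tidx N n. A xs ys * (B ys zs * v zs))"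
    by (simp add: opapp_def sum_distrib_left)
  also have "\<dots> = (\<Sum>zs\<in>tidx N n. \<Sum>ys\<in>tidx N n. A xs ys * (B ys zs * v zs))" by (rule sum.swap)
  also have "\<dots> = opapp N n (opmul N n A B) v xs"
    by (simp add: opapp_def opmul_def sum_distrib_right mult.assoc)
  finally show "opapp N n A (opapp N n B v) xs = opapp N n (opmul N n A B) v xs" .
qed

lemma rmul_opmul_right: "rmul N n A (opmul N n B C) = rmul N n A (rmul N n B C)"
  by (metis rmul_restr_right restr_opmul)

lemma rmul_opmul_left: "rmul N n (opmul N n B C) A = rmul N n (rmul N n B C) A"
  by (metis rmul_restr_left restr_opmul)

lemma opapp_restr: "xs \<in> tidx N n \<Longrightarrow> opapp N n A v xs = opapp N n (restr N n A) v xs"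
  by (simp add: opapp_def restr_def)

lemma Delta_apply: "Delta N n trig q p R F g i Psi u
   = opapp N n (opmul N n (Rdown N n trig q R F i u) (opmul N n (gbar N n F g i) (Rup N n trig q R F i (u(i := unshiftf trig p (u i))))))
       (Psi (u(i := unshiftf trig p (u i))))"
  by (simp add: Delta_def mulop_def Tinv_def opapp_opapp)

context rmatrix_setting
begin

lemma restr_Fdesc: "restr N n (Fdesc N n F a b) = Q.sdesc a b"
  by (simp add: Fdesc_def Q.sdesc_def Q.mprod_def restr_opprod comp_def placed_def[symmetric])

lemma restr_Fasc: "restr N n (Fasc N n F a b) = Q.sasc a b"
  by (simp add: Fasc_def Q.sasc_def Q.mprod_def restr_opprod comp_def placed_def[symmetric])

lemma restr_xbar_lt: "restr N n (xbar_lt N n F a b X) = Q.ovl_lt a b (placed N n 1 X)"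
proof -
  have "restr N n (xbar_lt N n F a b X) = rmul N n (Q.sdesc 1 a) (rmul N n (Q.sdesc 2 b) (rmul N n (placed N n 1 X)
          (rmul N n (Q.sasc 2 b) (rmul N n (Q.sasc 1 a) (rone N n)))))"
    by (simp add: xbar_lt_def restr_opprod restr_Fdesc restr_Fasc placed_def[symmetric])
  then show ?thesis by (simp add: Q.ovl_lt_def)
qed

lemma placed_FXF: "2 \<le> n \<Longrightarrow> placed N n (Suc 0) (opprod N 2 [F, X, F]) = rmul N n (placed N n (Suc 0) F) (rmul N n (placed N n (Suc 0) X) (placed N n (Suc 0) F))"
  by (simp add: opprod_def rmul_placed[symmetric] placed_opid)

lemma restr_xbar: "2 \<le> n \<Longrightarrow> restr N n (xbar N n F a b X) = Q.bar2 a b X"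
  by (simp add: xbar_def Q.bar2_def Q.ovl_def restr_xbar_lt placed_FXF)

lemma restr_gbar_r: "restr N n (gbar_r N n F g k) = rmul N n (Q.sdesc 1 (Suc k)) (rmul N n (placed_g N n g) (Q.sasc 1 (Suc k)))"
proof (induction k)
  case 0 then show ?case by (simp add: Q.sdesc_empty Q.sasc_empty placed_g_def)
next
  case (Suc k)
  have "restr N n (gbar_r N n F g (Suc k)) = rmul N n (placed N n (Suc k) F) (rmul N n (restr N n (gbar_r N n F g k)) (placed N n (Suc k) F))"
    by (simp add: restr_opprod placed_def)
  also have "\<dots> = rmul N n (Q.sdesc 1 (Suc (Suc k))) (rmul N n (placed_g N n g) (Q.sasc 1 (Suc (Suc k))))"
    using Suc by (simp add: Q.sdesc_Suc Q.sasc_Suc)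
  finally show ?case .
qed

lemma restr_gbar: "1 \<le> a \<Longrightarrow> restr N n (gbar N n F g a) = Q.bar1 a"
  by (simp add: gbar_def restr_gbar_r Q.bar1_def)

end

lemma calR_unshift:
  assumes "trig \<longrightarrow> p \<noteq> 0"
  shows "calR N trig q R F (unshiftf trig p x) (unshiftf trig p y) = calR N trig q R F x y"
proof (cases trig)
  case True
  then have p: "p \<noteq> 0" using assms by simp
  have "x / p / (x / p - y / p) = x / (x - y)"
    using p by (cases "x = y") (simp_all add: field_simps)
  then have h: "(q - inverse q) * (x / p) / (x / p - y / p) = (q - inverse q) * x / (x - y)"
    by (metis times_divide_eq_right)
  show ?thesis by (simp only: calR_def Ruv_def fuv_def unshiftf_def True if_True h)
next
  case False
  then show ?thesis by (simp add: calR_def Ruv_def fuv_def unshiftf_def)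
qed

definition distinct3 :: "complex \<Rightarrow> complex \<Rightarrow> complex \<Rightarrow> bool" where
  "distinct3 x y z \<longleftrightarrow> x \<noteq> y \<and> x \<noteq> z \<and> y \<noteq> z"

definition unitary_point :: "bool \<Rightarrow> complex \<Rightarrow> complex \<Rightarrow> complex \<Rightarrow> bool" where
  "unitary_point trig q x y \<longleftrightarrow> x \<noteq> y \<and> fuv trig q x y \<noteq> 0 \<and> fuv trig q y x \<noteq> 0"

locale holonomy_setting = rmatrix_setting +
  fixes p :: complex
  assumes n_ge_2: "2 \<le> n" and p_nonzero: "p \<noteq> 0"
    and g_commute: "\<And>i j. i \<in> {1..n} \<Longrightarrow> j \<in> {1..n} \<Longrightarrow> i \<noteq> j \<Longrightarrow>
           opeq N n (opmul N n (gbar N n F g i) (gbar N n F g j))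
                    (opmul N n (gbar N n F g j) (gbar N n F g i))"
    and g_pair_R_commute: "\<And>i j. i \<in> {1..n} \<Longrightarrow> j \<in> {1..n} \<Longrightarrow> i \<noteq> j \<Longrightarrow>
           opeq N n (opmul N n (xbar N n F i j R) (opmul N n (gbar N n F g i) (gbar N n F g j)))
                    (opmul N n (opmul N n (gbar N n F g i) (gbar N n F g j)) (xbar N n F i j R))"
begin

lemma bar1_commute: "a \<in> {1..n} \<Longrightarrow> b \<in> {1..n} \<Longrightarrow> a \<noteq> b \<Longrightarrow> rmul N n (Q.bar1 a) (Q.bar1 b) = rmul N n (Q.bar1 b) (Q.bar1 a)"
  using g_commute[of a b] by (simp add: opeq_iff_restr restr_opmul restr_gbar[symmetric])

lemma bar1_pair_R_commute: "rmul N n (rmul N n (placed_g N n g) (Q.bar1 2)) (placed N n 1 R) = rmul N n (placed N n 1 R) (rmul N n (placed_g N n g) (Q.bar1 2))"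
proof -
  have "rmul N n (Q.bar2 1 2 R) (rmul N n (Q.bar1 1) (Q.bar1 2)) = rmul N n (rmul N n (Q.bar1 1) (Q.bar1 2)) (Q.bar2 1 2 R)"
    using g_pair_R_commute[of 1 2] n_ge_2 by (simp add: opeq_iff_restr restr_opmul rmul_opmul_left rmul_opmul_right restr_gbar[symmetric] restr_xbar[symmetric])
  then show ?thesis by (simp add: Q.bar2_1_2 Q.bar1_1)
qed

lemma calR_bar1_pair_base:
  "rmul N n (rmul N n (placed_g N n g) (Q.bar1 2)) (placed N n 1 (calR N trig q R F x y))
   = rmul N n (placed N n 1 (calR N trig q R F x y)) (rmul N n (placed_g N n g) (Q.bar1 2))"
proof -
  have "rmul N n (placed_g N n g) (Q.bar1 2) = rmul N n (Q.bar1 2) (placed_g N n g)"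
    using bar1_commute[of 1 2] n_ge_2 Q.bar1_1 by simp
  then show ?thesis using calR_bar1_commute_base[OF n_ge_2 bar1_pair_R_commute] by simp
qed

sublocale Sys: yb_system "rmul N n" "rone N n" "rops N n" n "\<lambda>a b x y. Q.bar2 a b (calR N trig q R F x y)" Q.bar1
  "unshiftf trig p" distinct3 "unitary_point trig q"
proof unfold_locales
  fix a b c x y z
  assume h: "a \<in> {1..n}" "b \<in> {1..n}" "c \<in> {1..n}" "distinct [a, b, c]" "distinct3 x y z"
  have d: "x \<noteq> y" "x \<noteq> z" "y \<noteq> z" using h(5) by (auto simp: distinct3_def)
  show "rmul N n (Q.bar2 a b (calR N trig q R F x y)) (rmul N n (Q.bar2 a c (calR N trig q R F x z)) (Q.bar2 b c (calR N trig q R F y z)))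
      = rmul N n (Q.bar2 b c (calR N trig q R F y z)) (rmul N n (Q.bar2 a c (calR N trig q R F x z)) (Q.bar2 a b (calR N trig q R F x y)))"
    using Q.bar2_yang_baxter[OF calR_moves_along calR_yang_baxter_base[OF _ d] h(1-4)] by simp
next
  fix a b x y
  assume h: "a \<in> {1..n}" "b \<in> {1..n}" "a \<noteq> b" "unitary_point trig q x y"
  have d: "x \<noteq> y" "fuv trig q x y \<noteq> 0" "fuv trig q y x \<noteq> 0" using h(4) by (auto simp: unitary_point_def)
  show "rmul N n (Q.bar2 a b (calR N trig q R F x y)) (Q.bar2 b a (calR N trig q R F y x)) = rone N n"
    using Q.bar2_unitary[OF calR_unitary_base[OF _ d] h(1-3)] by simp
next
  fix a b c d x y z w
  assume h: "a \<in> {1..n}" "b \<in> {1..n}" "c \<in> {1..n}" "d \<in> {1..n}" "distinct [a, b, c, d]"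
  show "rmul N n (Q.bar2 a b (calR N trig q R F x y)) (Q.bar2 c d (calR N trig q R F z w))
      = rmul N n (Q.bar2 c d (calR N trig q R F z w)) (Q.bar2 a b (calR N trig q R F x y))"
    using Q.bar2_far_commute[OF calR_moves_along calR_moves_along h] by simp
next
  fix a c d x y
  assume h: "a \<in> {1..n}" "c \<in> {1..n}" "d \<in> {1..n}" "distinct [a, c, d]"
  show "rmul N n (Q.bar1 a) (Q.bar2 c d (calR N trig q R F x y)) = rmul N n (Q.bar2 c d (calR N trig q R F x y)) (Q.bar1 a)"
    using Q.bar1_bar2_commute[OF calR_moves_along h] by simp
next
  fix a b
  assume "a \<in> {1..n}" "b \<in> {1..n}" "a \<noteq> b"
  then show "rmul N n (Q.bar1 a) (Q.bar1 b) = rmul N n (Q.bar1 b) (Q.bar1 a)" by (rule bar1_commute)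
next
  fix a b x y
  assume h: "a \<in> {1..n}" "b \<in> {1..n}" "a \<noteq> b"
  show "rmul N n (rmul N n (Q.bar1 a) (Q.bar1 b)) (Q.bar2 a b (calR N trig q R F x y))
      = rmul N n (Q.bar2 a b (calR N trig q R F x y)) (rmul N n (Q.bar1 a) (Q.bar1 b))"
    using Q.bar1_pair_bar2_commute[OF calR_bar1_pair_base h] by simp
next
  fix a b x y
  show "Q.bar2 a b (calR N trig q R F (unshiftf trig p x) (unshiftf trig p y)) = Q.bar2 a b (calR N trig q R F x y)"
    using calR_unshift[of trig p] p_nonzero by simp
qed simp_all

end

definition shiftn :: "bool \<Rightarrow> complex \<Rightarrow> int \<Rightarrow> complex \<Rightarrow> complex" where
  "shiftn trig p m z = (if trig then p powi m * z else z + of_int m * p)"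

lemma shiftn_0: "shiftn trig p 0 z = z" by (simp add: shiftn_def)

lemma unshiftf_shiftn: "trig \<longrightarrow> p \<noteq> 0 \<Longrightarrow> unshiftf trig p (shiftn trig p m z) = shiftn trig p (m - 1) z"
proof (cases trig)
  case True
  assume "trig \<longrightarrow> p \<noteq> 0"
  then have p: "p \<noteq> 0" using True by simp
  have "p powi (m - 1) = p powi m / p" using p by (simp add: power_int_diff)
  then show ?thesis using True by (simp add: shiftn_def unshiftf_def)
next
  case False
  then show ?thesis by (simp add: shiftn_def unshiftf_def algebra_simps)
qed

lemma shiftf_shiftn: "trig \<longrightarrow> p \<noteq> 0 \<Longrightarrow> shiftf trig p (shiftn trig p m z) = shiftn trig p (m + 1) z"
proof (cases trig)
  case True
  assume "trig \<longrightarrow> p \<noteq> 0"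
  then have p: "p \<noteq> 0" using True by simp
  have "p powi (m + 1) = p * p powi m" using p by (simp add: power_int_add)
  then show ?thesis using True by (simp add: shiftn_def shiftf_def)
next
  case False
  then show ?thesis by (simp add: shiftn_def shiftf_def algebra_simps)
qed

lemma shiftf_unshiftf: "trig \<longrightarrow> p \<noteq> 0 \<Longrightarrow> shiftf trig p (unshiftf trig p z) = z"
  by (cases trig) (auto simp: shiftf_def unshiftf_def)

lemma fuv_trig_nonzero:
  assumes "q \<noteq> 0" "x \<noteq> y" "x \<noteq> q^2 * y"
  shows "fuv True q x y \<noteq> 0"
proof
  assume "fuv True q x y = 0"
  then have "q * (x - y) = (q - inverse q) * x" using assms(2) by (simp add: fuv_def field_simps)
  then have "q * q * (x - y) = (q * q - 1) * x" using assms(1) by (simp add: field_simps)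
  then have "x = q^2 * y" by (simp add: algebra_simps power2_eq_square)
  then show False using assms(3) by simp
qed

lemma fuv_rat_nonzero: "x - y \<noteq> 0 \<Longrightarrow> x - y \<noteq> 1 \<Longrightarrow> fuv False q x y \<noteq> 0"
  by (simp add: fuv_def field_simps)

lemma generic_shifted_pair:
  assumes gen: "generic n trig q p u" and ab: "a \<in> {1..n}" "b \<in> {1..n}" "a \<noteq> b"
    and m: "\<bar>m1\<bar> \<le> 1" "\<bar>m2\<bar> \<le> 1" and pq: "trig \<longrightarrow> p \<noteq> 0 \<and> q \<noteq> 0"
  defines "x \<equiv> shiftn trig p m1 (u a)" and "y \<equiv> shiftn trig p m2 (u b)"
  shows "x \<noteq> y \<and> fuv trig q x y \<noteq> 0"
proof -
  have "\<bar>m1 - m2\<bar> \<le> 2" using m by simp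
  then have G: "if trig then p powi (m1 - m2) * u a \<noteq> u b \<and> p powi (m1 - m2) * u a \<noteq> q^2 * u b
      else u a - u b + of_int (m1 - m2) * p \<noteq> 0 \<and> u a - u b + of_int (m1 - m2) * p \<noteq> 1"
    using gen ab unfolding generic_def by blast
  show ?thesis
  proof (cases trig)
    case True
    then have p: "p powi m2 \<noteq> 0" "p powi m1 = p powi m2 * p powi (m1 - m2)" and "q \<noteq> 0"
      using pq by (simp_all flip: power_int_add)
    moreover have "x = p powi m2 * (p powi (m1 - m2) * u a)" "y = p powi m2 * u b"
      using True p by (simp_all add: x_def y_def shiftn_def)
    ultimately show ?thesis using G True by (simp add: fuv_trig_nonzero)
  next
    case False
    then have "x - y = u a - u b + of_int (m1 - m2) * p"
      by (simp add: x_def y_def shiftn_def algebra_simps)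
    then show ?thesis using G False by (auto simp: fuv_rat_nonzero)
  qed
qed

text \<open>The spectral parameters v at which \<Delta>_i \<Delta>_j can be evaluated: all the R-matrices
  that occur, at v and at T^{-1} v, are defined.\<close>

definition admissible :: "nat \<Rightarrow> bool \<Rightarrow> complex \<Rightarrow> complex \<Rightarrow> (nat \<Rightarrow> complex) \<Rightarrow> bool" where
  "admissible n trig q p v \<longleftrightarrow> (\<forall>a\<in>{1..n}. \<forall>b\<in>{1..n}. a \<noteq> b \<longrightarrow>
     (\<forall>x\<in>{v a, unshiftf trig p (v a)}. \<forall>y\<in>{v b, unshiftf trig p (v b)}. x \<noteq> y \<and> fuv trig q x y \<noteq> 0))"

lemma generic_admissible:
  assumes gen: "generic n trig q p u" and pq: "trig \<longrightarrow> p \<noteq> 0 \<and> q \<noteq> 0"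
    and v: "\<And>a. a \<in> {1..n} \<Longrightarrow> v a = shiftn trig p (e a) (u a)" and e: "\<And>a. e a \<in> {0, 1}"
  shows "admissible n trig q p v"
proof -
  have shifted: "\<exists>d::int. \<bar>d\<bar> \<le> 1 \<and> z = shiftn trig p d (u c)"
    if c: "c \<in> {1..n}" and z: "z \<in> {v c, unshiftf trig p (v c)}" for c z
  proof -
    consider "z = v c" | "z = unshiftf trig p (v c)" using z by auto
    then show ?thesis
    proof cases
      case 1
      then show ?thesis using e[of c] v[OF c] by (intro exI[of _ "e c"]) auto
    next
      case 2
      then show ?thesis using e[of c] v[OF c] pq unshiftf_shiftn[of trig p "e c" "u c"]
        by (intro exI[of _ "e c - 1"]) auto
    qed
  qed
  show ?thesis
    unfolding admissible_def
  proof (intro ballI impI)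
    fix a b x y assume ab: "a \<in> {1..n}" "b \<in> {1..n}" "a \<noteq> b"
      and "x \<in> {v a, unshiftf trig p (v a)}" "y \<in> {v b, unshiftf trig p (v b)}"
    then obtain d1 d2 where "\<bar>d1\<bar> \<le> 1" "x = shiftn trig p d1 (u a)" "\<bar>d2\<bar> \<le> 1" "y = shiftn trig p d2 (u b)"
      using shifted[of a x] shifted[of b y] by metis
    then show "x \<noteq> y \<and> fuv trig q x y \<noteq> 0"
      using generic_shifted_pair[OF gen ab _ _ pq] by simp
  qed
qed

context holonomy_setting
begin

lemma restr_Rdown: "restr N n (Rdown N n trig q R F i v) = Sys.down i v"
  using n_ge_2 by (simp add: Rdown_def restr_opprod comp_def restr_xbar Sys.down_def Q.mprod_def)

lemma restr_Rup: "restr N n (Rup N n trig q R F i v) = Sys.up i v"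
  using n_ge_2 by (simp add: Rup_def restr_opprod comp_def restr_xbar Sys.up_def Q.mprod_def)

lemma Delta_Delta_apply:
  fixes v :: "nat \<Rightarrow> complex"
  assumes "a \<noteq> b" "1 \<le> a" "1 \<le> b" "xs \<in> tidx N n"
  defines "va \<equiv> v(a := unshiftf trig p (v a))"
    and "vab \<equiv> v(a := unshiftf trig p (v a), b := unshiftf trig p (v b))"
  shows "Delta N n trig q p R F g a (Delta N n trig q p R F g b Psi) v xs
    = opapp N n (rmul N n (Sys.down a v) (rmul N n (Q.bar1 a) (rmul N n (Sys.up a va)
        (rmul N n (Sys.down b va) (rmul N n (Q.bar1 b) (Sys.up b vab)))))) (Psi vab) xs"
proof -
  let ?D = "opmul N n (opmul N n (Rdown N n trig q R F a v) (opmul N n (gbar N n F g a) (Rup N n trig q R F a va)))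
    (opmul N n (Rdown N n trig q R F b va) (opmul N n (gbar N n F g b) (Rup N n trig q R F b vab)))"
  have "va(b := unshiftf trig p (va b)) = vab" using assms(1) by (simp add: va_def vab_def)
  then have "Delta N n trig q p R F g a (Delta N n trig q p R F g b Psi) v xs = opapp N n (restr N n ?D) (Psi vab) xs"
    using assms(4) by (simp add: Delta_apply opapp_opapp opapp_restr[symmetric] va_def)
  moreover have "restr N n ?D = rmul N n (rmul N n (restr N n (Rdown N n trig q R F a v))
      (rmul N n (restr N n (gbar N n F g a)) (restr N n (Rup N n trig q R F a va))))
      (rmul N n (restr N n (Rdown N n trig q R F b va))
      (rmul N n (restr N n (gbar N n F g b)) (restr N n (Rup N n trig q R F b vab))))"
    by (simp add: restr_opmul rmul_opmul_left rmul_opmul_right)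
  ultimately show ?thesis
    using assms(2,3) by (simp only: restr_Rdown restr_Rup restr_gbar Q.assoc)
qed

lemma down_g_up_commute_admissible:
  assumes v: "admissible n trig q p v" and ij: "1 \<le> i" "i < j" "j \<le> n"
  shows "rmul N n (Sys.down i v) (rmul N n (Q.bar1 i) (rmul N n (Sys.up i (v(i := unshiftf trig p (v i))))
        (rmul N n (Sys.down j (v(i := unshiftf trig p (v i)))) (rmul N n (Q.bar1 j)
          (Sys.up j (v(i := unshiftf trig p (v i), j := unshiftf trig p (v j))))))))
  = rmul N n (Sys.down j v) (rmul N n (Q.bar1 j) (rmul N n (Sys.up j (v(j := unshiftf trig p (v j))))
        (rmul N n (Sys.down i (v(j := unshiftf trig p (v j)))) (rmul N n (Q.bar1 i)
          (Sys.up i (v(i := unshiftf trig p (v i), j := unshiftf trig p (v j))))))))"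
proof -
  let ?v' = "\<lambda>a. unshiftf trig p (v a)"
  have pair: "x \<noteq> y \<and> fuv trig q x y \<noteq> 0"
    if "a \<in> {1..n}" "b \<in> {1..n}" "a \<noteq> b" "x \<in> {v a, ?v' a}" "y \<in> {v b, ?v' b}" for a b x y
    using v that unfolding admissible_def by blast
  have "unitary_point trig q (?v' i) (v j)" "unitary_point trig q (v j) (v i)"
    using ij pair[of i j "?v' i" "v j"] pair[of j i "v j" "?v' i"] pair[of i j "v i" "v j"]
      pair[of j i "v j" "v i"] by (simp_all add: unitary_point_def)
  moreover have "distinct3 (v i) (v j) (v k)" if "1 \<le> k" "k < i" for k
    using that ij pair[of i j "v i" "v j"] pair[of i k "v i" "v k"] pair[of j k "v j" "v k"]
    by (simp add: distinct3_def)
  moreover have "distinct3 (?v' i) (v j) (v k)" if "i < k" "k < j" for k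
    using that ij pair[of i j "?v' i" "v j"] pair[of i k "?v' i" "v k"] pair[of j k "v j" "v k"]
    by (simp add: distinct3_def)
  moreover have "distinct3 (?v' i) (?v' j) (v k)" if "j < k" "k \<le> n" for k
    using that ij pair[of i j "?v' i" "?v' j"] pair[of i k "?v' i" "v k"] pair[of j k "?v' j" "v k"]
    by (simp add: distinct3_def)
  ultimately show ?thesis using Sys.down_g_up_commute[OF ij] ij by (simp add: fun_upd_twist)
qed

theorem Delta_commute:
  assumes "admissible n trig q p v" "i \<in> {1..n}" "j \<in> {1..n}" "xs \<in> tidx N n"
  shows "Delta N n trig q p R F g i (Delta N n trig q p R F g j Psi) v xs
       = Delta N n trig q p R F g j (Delta N n trig q p R F g i Psi) v xs"
proof -
  have less: "Delta N n trig q p R F g a (Delta N n trig q p R F g b Psi) v xs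
       = Delta N n trig q p R F g b (Delta N n trig q p R F g a Psi) v xs"
    if ab: "1 \<le> a" "a < b" "b \<le> n" for a b
  proof -
    have "v(b := unshiftf trig p (v b), a := unshiftf trig p (v a))
        = v(a := unshiftf trig p (v a), b := unshiftf trig p (v b))" using ab by (simp add: fun_upd_twist)
    then show ?thesis
      using down_g_up_commute_admissible[OF assms(1) ab] ab assms(4) by (simp add: Delta_Delta_apply)
  qed
  show ?thesis using less[of i j] less[of j i] assms(2,3) by (cases i j rule: linorder_cases) auto
qed

end

lemma holonomy_as_Delta:
  assumes "trig \<longrightarrow> p \<noteq> 0" "i \<noteq> j"
  shows "Tsh trig p i (Mop N n trig q p R F g j (Tinv trig p i (Mop N n trig q p R F g i Psi))) u
       = Delta N n trig q p R F g j (Delta N n trig q p R F g i Psi)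
           (u(i := shiftf trig p (u i), j := shiftf trig p (u j)))"
proof -
  have "Tinv trig p i (Mop N n trig q p R F g i Psi) = Delta N n trig q p R F g i Psi"
    using assms(1) by (simp add: Tinv_def Mop_def Tsh_def shiftf_unshiftf fun_eq_iff)
  then show ?thesis using assms(2) by (simp add: Mop_def Tsh_def)
qed

theorem mainTheorem6:
  fixes N n :: nat and trig :: bool and q p :: complex and R F :: op
    and g :: "nat \<Rightarrow> nat \<Rightarrow> complex"
  assumes "n \<ge> 2"
    and "involutive_symmetry N F" and "skew_invertible N F"
    and "braiding N R" and "compatible N R F"
    and "(\<not> trig \<and> involutive_symmetry N R \<and> p \<noteq> 0) \<or>
         (trig \<and> hecke_symmetry N q R \<and> p \<noteq> 0 \<and> p \<noteq> 1)"
    and "\<And>i j. i \<in> {1..n} \<Longrightarrow> j \<in> {1..n} \<Longrightarrow> i \<noteq> j \<Longrightarrow>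
           opeq N n (opmul N n (gbar N n F g i) (gbar N n F g j))
                    (opmul N n (gbar N n F g j) (gbar N n F g i))"
    and "\<And>i j. i \<in> {1..n} \<Longrightarrow> j \<in> {1..n} \<Longrightarrow> i \<noteq> j \<Longrightarrow>
           opeq N n (opmul N n (xbar N n F i j R) (opmul N n (gbar N n F g i) (gbar N n F g j)))
                    (opmul N n (opmul N n (gbar N n F g i) (gbar N n F g j)) (xbar N n F i j R))"
    and "i \<in> {1..n}" and "j \<in> {1..n}"
  shows "\<forall>Psi u. generic n trig q p u \<longrightarrow> (\<forall>xs\<in>tidx N n.
           Tsh trig p i (Mop N n trig q p R F g j (Tinv trig p i (Mop N n trig q p R F g i Psi))) u xs
         = Tsh trig p j (Mop N n trig q p R F g i (Tinv trig p j (Mop N n trig q p R F g j Psi))) u xs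
         \<and> Delta N n trig q p R F g i (Delta N n trig q p R F g j Psi) u xs
         = Delta N n trig q p R F g j (Delta N n trig q p R F g i Psi) u xs)"
proof -
  have p: "p \<noteq> 0" using assms(6) by auto
  interpret holonomy_setting N n trig q R F g p using assms p by unfold_locales auto
  have pq: "trig \<longrightarrow> p \<noteq> 0 \<and> q \<noteq> 0" using p q_nonzero by simp
  show ?thesis
  proof (intro allI impI ballI conjI)
    fix Psi u xs assume gen: "generic n trig q p u" and xs: "xs \<in> tidx N n"
    let ?w = "u(i := shiftf trig p (u i), j := shiftf trig p (u j))"
    have "admissible n trig q p u"
      using generic_admissible[OF gen pq, of u "\<lambda>_. 0"] by (simp add: shiftn_0)
    then show "Delta N n trig q p R F g i (Delta N n trig q p R F g j Psi) u xs
        = Delta N n trig q p R F g j (Delta N n trig q p R F g i Psi) u xs"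
      using Delta_commute assms(9,10) xs by blast
    have "admissible n trig q p ?w"
      using generic_admissible[OF gen pq, of ?w "\<lambda>a. if a = i \<or> a = j then 1 else 0"]
        shiftf_shiftn[of trig p 0] p by (simp add: shiftn_0)
    then show "Tsh trig p i (Mop N n trig q p R F g j (Tinv trig p i (Mop N n trig q p R F g i Psi))) u xs
        = Tsh trig p j (Mop N n trig q p R F g i (Tinv trig p j (Mop N n trig q p R F g j Psi))) u xs"
      using Delta_commute[of ?w j i xs] holonomy_as_Delta[of trig p] p assms(9,10) xs
      by (cases "i = j") (simp_all add: fun_upd_twist)
  qed
qed

end
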